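(* Let $k\in l_2(X)$ with $\check k\in L^\infty(G)$, $|\check k|=1$ a.e. on $G$, and suppose $W_k$ is invertible on $l_2(X_+)$. If $\psi\in H^\infty(G)$ satisfies $\|\check k-\overline\psi\|_{L^\infty(G)}<1$, then $\psi$ is invertible in $H^\infty(G)$.
   Context: $X$ is a discrete linearly ordered abelian group with positive cone $X_+$; $G$ is its compact dual group with normalized Haar measure. $\check k(x)=\sum_{\xi\in X}k(\xi)\xi(x)$; $W_kg=1_{X_+}(k\ast g)$ on $l_2(X_+)$. $H^\infty(G)=\{f\in L^\infty(G):\widehat f(\chi)=0\ \forall\chi\notin X_+\}$, where $\widehat f(\xi)=\int_Gf(x)\overline{\xi(x)}dx$. *)

theory Defs
  imports "HOL-Probability.Probability"
begin

text \<open>X is modelled by a type 'x of class linordered_ab_group_add (discrete topology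
is implicit).  The positive cone is X_+ = {xi. 0 <= xi}.\<close>

definition pos_cone :: "'x::linordered_ab_group_add set" where
  "pos_cone = {\<xi>. 0 \<le> \<xi>}"

text \<open>The dual group G: all characters of the discrete group X.  An element x of G is
a character, and the pairing is xi(x) = x xi.\<close>

definition dual_group :: "('x::linordered_ab_group_add \<Rightarrow> complex) set" where
  "dual_group = {\<gamma>. (\<forall>\<xi>. cmod (\<gamma> \<xi>) = 1) \<and> (\<forall>a b. \<gamma> (a + b) = \<gamma> a * \<gamma> b)}"

text \<open>Normalized Haar measure on G (sigma algebra generated by the evaluation maps,
i.e. the Baire sets of G; translation invariant probability measure).\<close>

definition haar :: "('x::linordered_ab_group_add \<Rightarrow> complex) measure \<Rightarrow> bool" where
  "haar \<mu> \<longleftrightarrow> prob_space \<mu> \<and> space \<mu> = dual_group \<and>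
     sets \<mu> = sigma_sets dual_group {{\<gamma> \<in> dual_group. \<gamma> \<xi> \<in> A} | \<xi> A. A \<in> sets borel} \<and>
     (\<forall>h \<in> dual_group. distr \<mu> \<mu> (\<lambda>\<gamma> \<xi>. h \<xi> * \<gamma> \<xi>) = \<mu>)"

definition ess_bounded :: "'a measure \<Rightarrow> ('a \<Rightarrow> complex) \<Rightarrow> bool" where
  "ess_bounded \<mu> f \<longleftrightarrow> f \<in> borel_measurable \<mu> \<and> (\<exists>C. AE x in \<mu>. cmod (f x) \<le> C)"

definition fourier :: "('x \<Rightarrow> complex) measure \<Rightarrow> (('x \<Rightarrow> complex) \<Rightarrow> complex) \<Rightarrow> 'x \<Rightarrow> complex" where
  "fourier \<mu> f \<xi> = (LINT x|\<mu>. f x * cnj (x \<xi>))"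

definition Hinf :: "('x::linordered_ab_group_add \<Rightarrow> complex) measure \<Rightarrow> (('x \<Rightarrow> complex) \<Rightarrow> complex) set" where
  "Hinf \<mu> = {f. ess_bounded \<mu> f \<and> (\<forall>\<gamma>. \<gamma> \<notin> pos_cone \<longrightarrow> fourier \<mu> f \<gamma> = 0)}"

definition l2 :: "'a set \<Rightarrow> ('a \<Rightarrow> complex) set" where
  "l2 A = {g. (\<forall>\<xi>. \<xi> \<notin> A \<longrightarrow> g \<xi> = 0) \<and> (\<lambda>\<xi>. (cmod (g \<xi>))\<^sup>2) summable_on UNIV}"

text \<open>f represents check k = sum_xi k(xi) xi(.), the (unconditional) sum converging in L2(G).\<close>

definition is_check :: "('x \<Rightarrow> complex) measure \<Rightarrow> ('x \<Rightarrow> complex) \<Rightarrow> (('x \<Rightarrow> complex) \<Rightarrow> complex) \<Rightarrow> bool" where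
  "is_check \<mu> k f \<longleftrightarrow> f \<in> borel_measurable \<mu> \<and>
     ((\<lambda>F. \<integral>\<^sup>+ x. ennreal ((cmod (f x - (\<Sum>\<xi>\<in>F. k \<xi> * x \<xi>)))\<^sup>2) \<partial>\<mu>) \<longlongrightarrow> 0)
       (finite_subsets_at_top UNIV)"

definition wiener_hopf :: "('x::linordered_ab_group_add \<Rightarrow> complex) \<Rightarrow> ('x \<Rightarrow> complex) \<Rightarrow> 'x \<Rightarrow> complex" where
  "wiener_hopf k g \<xi> = (if \<xi> \<in> pos_cone then (\<Sum>\<^sub>\<infinity>\<eta>\<in>pos_cone. k (\<xi> - \<eta>) * g \<eta>) else 0)"

end

theory Submission
  imports Defs
begin

text \<open>
  Let \<open>T\<^sub>\<phi>\<close> be the Toeplitz operator on \<open>\<ell>\<^sup>2(X\<^sub>+)\<close> with symbol \<open>\<phi>\<close>, so that \<open>W\<^sub>k = T\<^sub>k\<^sub>c\<close>.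
  Put \<open>r = 1 - kc \<psi>\<close>; since \<open>|kc| = 1\<close>, \<open>|r| = |kc - \<psi>\<^sup>*| \<le> c < 1\<close>. The operator identity
  \<open>W\<^sub>k T\<^sub>\<psi> = I - T\<^sub>r\<close> and a Neumann series for \<open>T\<^sub>r\<close> produce \<open>g \<in> \<ell>\<^sup>2(X\<^sub>+)\<close> with
  \<open>W\<^sub>k (T\<^sub>\<psi> g) = W\<^sub>k \<delta>\<^sub>0\<close>, so \<open>T\<^sub>\<psi> g = \<delta>\<^sub>0\<close> by injectivity of \<open>W\<^sub>k\<close>. By Parseval, the analytic
  trigonometric polynomials with coefficients taken from truncations of \<open>g\<close> then converge to
  \<open>1 / \<psi>\<close> in \<open>L\<^sup>2(G)\<close>, so \<open>1 / \<psi>\<close> has no coefficients outside \<open>X\<^sub>+\<close>; it is bounded because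
  \<open>|\<psi>| \<ge> 1 - c\<close>.

  Parseval's identity rests on two facts about \<open>G\<close>: characters are orthonormal, which needs for
  each \<open>\<xi> \<noteq> 0\<close> a character with \<open>\<xi> \<mapsto> -1\<close> (an ordered group is torsion-free and the circle is
  divisible, so Zorn's lemma extends one from \<open>\<langle>\<xi>\<rangle>\<close>); and trigonometric polynomials are dense
  in \<open>L\<^sup>2(G)\<close>, by Stone--Weierstrass on the compact group \<open>G\<close> and a monotone class argument.
\<close>
section \<open>Square-summable sequences\<close>

definition sq_summable :: "('a \<Rightarrow> complex) \<Rightarrow> bool" where
  "sq_summable x \<longleftrightarrow> (\<lambda>\<xi>. (cmod (x \<xi>))\<^sup>2) summable_on UNIV"

definition l2_sqnorm :: "('a \<Rightarrow> complex) \<Rightarrow> real" where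
  "l2_sqnorm x = infsum (\<lambda>\<xi>. (cmod (x \<xi>))\<^sup>2) UNIV"

lemma has_sum_diff:
  fixes f g :: "'a \<Rightarrow> 'b::topological_ab_group_add"
  assumes f: "(f has_sum a) A" and g: "(g has_sum b) A"
  shows "((\<lambda>x. f x - g x) has_sum (a - b)) A"
proof -
  have "((\<lambda>x. - g x) has_sum (- b)) A" using g by (simp add: has_sum_uminus)
  from has_sum_add[OF f this] show ?thesis by simp
qed

lemma l2_iff: "x \<in> l2 A \<longleftrightarrow> (\<forall>\<xi>. \<xi> \<notin> A \<longrightarrow> x \<xi> = 0) \<and> sq_summable x"
  unfolding l2_def sq_summable_def by auto

lemma l2_sqnorm_nonneg: "0 \<le> l2_sqnorm x"
  unfolding l2_sqnorm_def by (rule infsum_nonneg) auto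

lemma l2_sqnorm_diff_commute: "l2_sqnorm (\<lambda>\<xi>. x \<xi> - y \<xi>) = l2_sqnorm (\<lambda>\<xi>. y \<xi> - x \<xi>)"
  unfolding l2_sqnorm_def by (simp add: norm_minus_commute)

lemma sum_sq_le_l2_sqnorm: "sq_summable x \<Longrightarrow> finite F \<Longrightarrow> (\<Sum>\<xi>\<in>F. (cmod (x \<xi>))\<^sup>2) \<le> l2_sqnorm x"
  unfolding sq_summable_def l2_sqnorm_def by (rule finite_sum_le_infsum) auto

lemma sq_summable_if_sums_le:
  assumes "\<And>F. finite F \<Longrightarrow> (\<Sum>\<xi>\<in>F. (cmod (x \<xi>))\<^sup>2) \<le> B"
  shows "sq_summable x \<and> l2_sqnorm x \<le> B"
proof -
  have summable: "sq_summable x" unfolding sq_summable_def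
    by (rule nonneg_bdd_above_summable_on) (use assms in \<open>auto intro!: bdd_aboveI2\<close>)
  moreover have "l2_sqnorm x \<le> B" unfolding l2_sqnorm_def
    using summable assms unfolding sq_summable_def by (intro infsum_le_finite_sums) auto
  ultimately show ?thesis by auto
qed

lemma norm_le_sqrt_l2_sqnorm: "sq_summable x \<Longrightarrow> cmod (x \<xi>) \<le> sqrt (l2_sqnorm x)"
  using sum_sq_le_l2_sqnorm[of x "{\<xi>}"] real_le_rsqrt by auto

lemma l2_sqnorm_finite_support:
  assumes "finite F" and "\<And>\<xi>. \<xi> \<notin> F \<Longrightarrow> x \<xi> = 0"
  shows "sq_summable x \<and> l2_sqnorm x = (\<Sum>\<xi>\<in>F. (cmod (x \<xi>))\<^sup>2)"
proof -
  have "((\<lambda>\<xi>. (cmod (x \<xi>))\<^sup>2) has_sum (\<Sum>\<xi>\<in>F. (cmod (x \<xi>))\<^sup>2)) UNIV"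
    by (rule has_sum_finite_neutralI) (use assms in auto)
  then show ?thesis unfolding sq_summable_def l2_sqnorm_def by (auto simp: infsumI summable_on_def)
qed

lemma L2_set_norm: "L2_set (\<lambda>\<xi>. cmod (x \<xi>)) F = sqrt (\<Sum>\<xi>\<in>F. (cmod (x \<xi>))\<^sup>2)"
  unfolding L2_set_def by simp

lemma sq_summable_add:
  assumes "sq_summable x" "sq_summable y"
  shows "sq_summable (\<lambda>\<xi>. x \<xi> + y \<xi>) \<and>
    sqrt (l2_sqnorm (\<lambda>\<xi>. x \<xi> + y \<xi>)) \<le> sqrt (l2_sqnorm x) + sqrt (l2_sqnorm y)"
proof -
  have "(\<Sum>\<xi>\<in>F. (cmod (x \<xi> + y \<xi>))\<^sup>2) \<le> (sqrt (l2_sqnorm x) + sqrt (l2_sqnorm y))\<^sup>2"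
    if "finite F" for F
  proof -
    have "L2_set (\<lambda>\<xi>. cmod (x \<xi> + y \<xi>)) F \<le> L2_set (\<lambda>\<xi>. cmod (x \<xi>) + cmod (y \<xi>)) F"
      by (rule L2_set_mono) (auto simp: norm_triangle_ineq)
    also have "\<dots> \<le> L2_set (\<lambda>\<xi>. cmod (x \<xi>)) F + L2_set (\<lambda>\<xi>. cmod (y \<xi>)) F"
      by (rule L2_set_triangle_ineq)
    also have "\<dots> \<le> sqrt (l2_sqnorm x) + sqrt (l2_sqnorm y)"
      unfolding L2_set_norm using sum_sq_le_l2_sqnorm assms that
      by (intro add_mono real_sqrt_le_mono) auto
    finally have "sqrt (\<Sum>\<xi>\<in>F. (cmod (x \<xi> + y \<xi>))\<^sup>2) \<le> sqrt (l2_sqnorm x) + sqrt (l2_sqnorm y)"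
      unfolding L2_set_norm .
    then have "(sqrt (\<Sum>\<xi>\<in>F. (cmod (x \<xi> + y \<xi>))\<^sup>2))\<^sup>2 \<le> (sqrt (l2_sqnorm x) + sqrt (l2_sqnorm y))\<^sup>2"
      by (intro power_mono) (auto simp: sum_nonneg)
    then show ?thesis by (simp add: sum_nonneg)
  qed
  from sq_summable_if_sums_le[OF this] show ?thesis
    by (metis l2_sqnorm_nonneg real_le_lsqrt real_sqrt_ge_zero add_nonneg_nonneg)
qed

lemma sq_summable_diff:
  assumes "sq_summable x" "sq_summable y"
  shows "sq_summable (\<lambda>\<xi>. x \<xi> - y \<xi>) \<and>
    sqrt (l2_sqnorm (\<lambda>\<xi>. x \<xi> - y \<xi>)) \<le> sqrt (l2_sqnorm x) + sqrt (l2_sqnorm y)"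
proof -
  have "sq_summable (\<lambda>\<xi>. - y \<xi>)" "l2_sqnorm (\<lambda>\<xi>. - y \<xi>) = l2_sqnorm y"
    using assms(2) unfolding sq_summable_def l2_sqnorm_def by simp_all
  with sq_summable_add[OF assms(1), of "\<lambda>\<xi>. - y \<xi>"] show ?thesis by simp
qed

lemma l2_dist_triangle:
  assumes "sq_summable x" "sq_summable y" "sq_summable z"
  shows "sqrt (l2_sqnorm (\<lambda>\<xi>. x \<xi> - z \<xi>))
    \<le> sqrt (l2_sqnorm (\<lambda>\<xi>. x \<xi> - y \<xi>)) + sqrt (l2_sqnorm (\<lambda>\<xi>. y \<xi> - z \<xi>))"
  using sq_summable_add[OF sq_summable_diff[OF assms(1,2), THEN conjunct1]
      sq_summable_diff[OF assms(2,3), THEN conjunct1]] by simp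

lemma l2_diff: "x \<in> l2 A \<Longrightarrow> y \<in> l2 A \<Longrightarrow> (\<lambda>\<xi>. x \<xi> - y \<xi>) \<in> l2 A"
  unfolding l2_iff using sq_summable_diff by auto

lemma l2_add: "x \<in> l2 A \<Longrightarrow> y \<in> l2 A \<Longrightarrow> (\<lambda>\<xi>. x \<xi> + y \<xi>) \<in> l2 A"
  unfolding l2_iff using sq_summable_add by auto

lemma l2_zero: "(\<lambda>_. 0) \<in> l2 A"
  unfolding l2_iff sq_summable_def by simp

lemma l2_cauchy_schwarz:
  assumes "sq_summable x" "sq_summable y"
  shows "(\<lambda>\<xi>. x \<xi> * y \<xi>) summable_on UNIV \<and>
    cmod (infsum (\<lambda>\<xi>. x \<xi> * y \<xi>) UNIV) \<le> sqrt (l2_sqnorm x) * sqrt (l2_sqnorm y)"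
proof -
  have finite_sums: "(\<Sum>\<xi>\<in>F. cmod (x \<xi> * y \<xi>)) \<le> sqrt (l2_sqnorm x) * sqrt (l2_sqnorm y)"
    if "finite F" for F
  proof -
    have "(\<Sum>\<xi>\<in>F. cmod (x \<xi> * y \<xi>)) = (\<Sum>\<xi>\<in>F. \<bar>cmod (x \<xi>)\<bar> * \<bar>cmod (y \<xi>)\<bar>)"
      by (simp add: norm_mult)
    also have "\<dots> \<le> L2_set (\<lambda>\<xi>. cmod (x \<xi>)) F * L2_set (\<lambda>\<xi>. cmod (y \<xi>)) F"
      by (rule L2_set_mult_ineq)
    also have "\<dots> \<le> sqrt (l2_sqnorm x) * sqrt (l2_sqnorm y)"
      unfolding L2_set_norm using sum_sq_le_l2_sqnorm assms that
      by (intro mult_mono real_sqrt_le_mono) (auto simp: sum_nonneg l2_sqnorm_nonneg)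
    finally show ?thesis .
  qed
  have abs_summable: "(\<lambda>\<xi>. cmod (x \<xi> * y \<xi>)) summable_on UNIV"
    by (rule nonneg_bdd_above_summable_on) (use finite_sums in \<open>auto intro!: bdd_aboveI2\<close>)
  then have "infsum (\<lambda>\<xi>. cmod (x \<xi> * y \<xi>)) UNIV \<le> sqrt (l2_sqnorm x) * sqrt (l2_sqnorm y)"
    using finite_sums by (auto intro!: infsum_le_finite_sums)
  with abs_summable show ?thesis
    using norm_infsum_bound[of "\<lambda>\<xi>. x \<xi> * y \<xi>" UNIV] by (auto intro: abs_summable_summable)
qed

lemma sq_summable_reflect:
  fixes a :: "'a::ab_group_add \<Rightarrow> complex"
  assumes "sq_summable a"
  shows "sq_summable (\<lambda>\<eta>. a (\<xi> - \<eta>)) \<and> l2_sqnorm (\<lambda>\<eta>. a (\<xi> - \<eta>)) = l2_sqnorm a"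
proof -
  have b: "bij_betw (\<lambda>\<eta>. \<xi> - \<eta>) UNIV (UNIV :: 'a set)"
    by (rule bij_betwI[where g="\<lambda>\<eta>. \<xi> - \<eta>"]) auto
  show ?thesis using assms unfolding sq_summable_def l2_sqnorm_def
    using summable_on_reindex_bij_betw[OF b, of "\<lambda>\<eta>. (cmod (a \<eta>))\<^sup>2"]
      infsum_reindex_bij_betw[OF b, of "\<lambda>\<eta>. (cmod (a \<eta>))\<^sup>2"] by simp
qed

definition restrict_seq :: "'a set \<Rightarrow> ('a \<Rightarrow> complex) \<Rightarrow> 'a \<Rightarrow> complex" where
  "restrict_seq F x \<xi> = (if \<xi> \<in> F then x \<xi> else 0)"

lemma l2_restrict_seq: "g \<in> l2 A \<Longrightarrow> finite F \<Longrightarrow> restrict_seq F g \<in> l2 A"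
  using l2_sqnorm_finite_support[of F "restrict_seq F g"] unfolding l2_iff
  by (auto simp: restrict_seq_def)

lemma restrict_seq_tail:
  assumes "sq_summable x" "e > 0"
  obtains F where "finite F" "sq_summable (\<lambda>\<xi>. x \<xi> - restrict_seq F x \<xi>)"
    "l2_sqnorm (\<lambda>\<xi>. x \<xi> - restrict_seq F x \<xi>) < e"
proof -
  have "((\<lambda>\<xi>. (cmod (x \<xi>))\<^sup>2) has_sum l2_sqnorm x) UNIV"
    using assms unfolding sq_summable_def l2_sqnorm_def by (simp add: has_sum_infsum)
  then have "\<forall>\<^sub>F F in finite_subsets_at_top UNIV. dist (\<Sum>\<xi>\<in>F. (cmod (x \<xi>))\<^sup>2) (l2_sqnorm x) < e"
    unfolding has_sum_def tendsto_iff using assms(2) by blast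
  then obtain F where F: "finite F" "dist (\<Sum>\<xi>\<in>F. (cmod (x \<xi>))\<^sup>2) (l2_sqnorm x) < e"
    unfolding eventually_finite_subsets_at_top by blast
  have "(\<Sum>\<xi>\<in>E. (cmod (x \<xi> - restrict_seq F x \<xi>))\<^sup>2) \<le> l2_sqnorm x - (\<Sum>\<xi>\<in>F. (cmod (x \<xi>))\<^sup>2)"
    if "finite E" for E
  proof -
    have "(\<Sum>\<xi>\<in>E. (cmod (x \<xi> - restrict_seq F x \<xi>))\<^sup>2) = (\<Sum>\<xi>\<in>E - F. (cmod (x \<xi>))\<^sup>2)"
      by (rule sum.mono_neutral_cong_right) (use that in \<open>auto simp: restrict_seq_def\<close>)
    also have "\<dots> = (\<Sum>\<xi>\<in>E \<union> F. (cmod (x \<xi>))\<^sup>2) - (\<Sum>\<xi>\<in>F. (cmod (x \<xi>))\<^sup>2)"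
      using sum.union_disjoint[of "E - F" F "\<lambda>\<xi>. (cmod (x \<xi>))\<^sup>2"] that F(1) by force
    also have "\<dots> \<le> l2_sqnorm x - (\<Sum>\<xi>\<in>F. (cmod (x \<xi>))\<^sup>2)"
      using sum_sq_le_l2_sqnorm[OF assms(1), of "E \<union> F"] that F(1) by simp
    finally show ?thesis .
  qed
  from sq_summable_if_sums_le[OF this] F show ?thesis
    by (intro that[of F]) (auto simp: dist_real_def)
qed

lemma l2_cauchy_complete:
  fixes x :: "nat \<Rightarrow> 'a \<Rightarrow> complex"
  assumes l2: "\<And>n. sq_summable (x n)"
    and cauchy: "\<And>e. e > 0 \<Longrightarrow> \<exists>N. \<forall>m\<ge>N. \<forall>n\<ge>N. l2_sqnorm (\<lambda>\<xi>. x m \<xi> - x n \<xi>) < e"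
  obtains y where "sq_summable y" "(\<lambda>n. l2_sqnorm (\<lambda>\<xi>. x n \<xi> - y \<xi>)) \<longlonglongrightarrow> 0"
proof -
  have diff_l2: "sq_summable (\<lambda>\<xi>. x m \<xi> - x n \<xi>)" for m n
    using sq_summable_diff[OF l2 l2] by blast
  have "Cauchy (\<lambda>n. x n \<xi>)" for \<xi>
  proof (rule CauchyI)
    fix e :: real assume "e > 0"
    then obtain N where N: "\<forall>m\<ge>N. \<forall>n\<ge>N. l2_sqnorm (\<lambda>\<xi>. x m \<xi> - x n \<xi>) < e\<^sup>2"
      using cauchy[of "e\<^sup>2"] by auto
    have "norm (x m \<xi> - x n \<xi>) < e" if "m \<ge> N" "n \<ge> N" for m n
    proof -
      have "sqrt (l2_sqnorm (\<lambda>\<xi>. x m \<xi> - x n \<xi>)) < sqrt (e\<^sup>2)"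
        using N that by (simp only: real_sqrt_less_iff)
      with norm_le_sqrt_l2_sqnorm[OF diff_l2[of m n], of \<xi>] \<open>e > 0\<close> show ?thesis by simp
    qed
    then show "\<exists>M. \<forall>m\<ge>M. \<forall>n\<ge>M. norm (x m \<xi> - x n \<xi>) < e" by blast
  qed
  then obtain y where y: "\<And>\<xi>. (\<lambda>n. x n \<xi>) \<longlonglongrightarrow> y \<xi>"
    unfolding Cauchy_convergent_iff convergent_def by metis
  have close: "sq_summable (\<lambda>\<xi>. x n \<xi> - y \<xi>) \<and> l2_sqnorm (\<lambda>\<xi>. x n \<xi> - y \<xi>) \<le> e"
    if "\<forall>m\<ge>N. \<forall>n\<ge>N. l2_sqnorm (\<lambda>\<xi>. x m \<xi> - x n \<xi>) < e" "n \<ge> N" for e N n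
  proof (rule sq_summable_if_sums_le)
    fix F :: "'a set" assume "finite F"
    have "(\<lambda>m. \<Sum>\<xi>\<in>F. (cmod (x n \<xi> - x m \<xi>))\<^sup>2) \<longlonglongrightarrow> (\<Sum>\<xi>\<in>F. (cmod (x n \<xi> - y \<xi>))\<^sup>2)"
      by (intro tendsto_intros y)
    moreover have "\<forall>\<^sub>F m in sequentially. (\<Sum>\<xi>\<in>F. (cmod (x n \<xi> - x m \<xi>))\<^sup>2) \<le> e"
      using eventually_ge_at_top[of N]
    proof eventually_elim
      case (elim m)
      then show ?case using sum_sq_le_l2_sqnorm[OF diff_l2[of n m] \<open>finite F\<close>] that by force
    qed
    ultimately show "(\<Sum>\<xi>\<in>F. (cmod (x n \<xi> - y \<xi>))\<^sup>2) \<le> e"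
      by (intro tendsto_upperbound) auto
  qed
  show ?thesis
  proof
    obtain N where "\<forall>m\<ge>N. \<forall>n\<ge>N. l2_sqnorm (\<lambda>\<xi>. x m \<xi> - x n \<xi>) < 1"
      using cauchy[of 1] by auto
    with close[of N 1 N] have "sq_summable (\<lambda>\<xi>. x N \<xi> - (x N \<xi> - y \<xi>))"
      using sq_summable_diff[OF l2[of N]] by blast
    then show "sq_summable y" by simp
    show "(\<lambda>n. l2_sqnorm (\<lambda>\<xi>. x n \<xi> - y \<xi>)) \<longlonglongrightarrow> 0"
    proof (rule LIMSEQ_I)
      fix e :: real assume "e > 0"
      then obtain N where N: "\<forall>m\<ge>N. \<forall>n\<ge>N. l2_sqnorm (\<lambda>\<xi>. x m \<xi> - x n \<xi>) < e / 2"
        using cauchy[of "e / 2"] by auto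
      have "norm (l2_sqnorm (\<lambda>\<xi>. x n \<xi> - y \<xi>) - 0) < e" if "n \<ge> N" for n
        using close[OF N that] l2_sqnorm_nonneg[of "\<lambda>\<xi>. x n \<xi> - y \<xi>"] \<open>e > 0\<close> by simp
      then show "\<exists>N. \<forall>n\<ge>N. norm (l2_sqnorm (\<lambda>\<xi>. x n \<xi> - y \<xi>) - 0) < e" by blast
    qed
  qed
qed

lemma l2_tendsto_pointwise:
  assumes "\<And>n. sq_summable (\<lambda>\<xi>. x n \<xi> - y \<xi>)"
    and "(\<lambda>n. l2_sqnorm (\<lambda>\<xi>. x n \<xi> - y \<xi>)) \<longlonglongrightarrow> 0"
  shows "(\<lambda>n. x n \<xi>) \<longlonglongrightarrow> y \<xi>"
proof -
  have "(\<lambda>n. sqrt (l2_sqnorm (\<lambda>\<xi>. x n \<xi> - y \<xi>))) \<longlonglongrightarrow> 0"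
    using tendsto_real_sqrt[OF assms(2)] by simp
  then have "(\<lambda>n. x n \<xi> - y \<xi>) \<longlonglongrightarrow> 0"
    by (rule Lim_null_comparison[rotated]) (use norm_le_sqrt_l2_sqnorm[OF assms(1)] in auto)
  then show ?thesis by (simp add: LIM_zero_iff)
qed

section \<open>A Neumann series in \<open>\<ell>\<^sup>2\<close>\<close>

lemma l2_geometric_cauchy:
  assumes l2: "\<And>n. sq_summable (G n)"
    and step: "\<And>n. sqrt (l2_sqnorm (\<lambda>\<xi>. G (Suc n) \<xi> - G n \<xi>)) \<le> c ^ n * a"
    and c: "0 \<le> c" "c < 1" and e: "e > 0"
  shows "\<exists>N. \<forall>m\<ge>N. \<forall>n\<ge>N. l2_sqnorm (\<lambda>\<xi>. G m \<xi> - G n \<xi>) < e"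
proof -
  have a: "0 \<le> a" using order_trans[OF real_sqrt_ge_zero[OF l2_sqnorm_nonneg] step[of 0]] by simp
  have partial: "sqrt (l2_sqnorm (\<lambda>\<xi>. G (n + j) \<xi> - G n \<xi>)) \<le> a * c ^ n * (1 - c ^ j) / (1 - c)"
    for n j
  proof (induction j)
    case 0 then show ?case by (simp add: l2_sqnorm_def)
  next
    case (Suc j)
    have "sqrt (l2_sqnorm (\<lambda>\<xi>. G (n + Suc j) \<xi> - G n \<xi>))
        \<le> sqrt (l2_sqnorm (\<lambda>\<xi>. G (Suc (n + j)) \<xi> - G (n + j) \<xi>))
          + sqrt (l2_sqnorm (\<lambda>\<xi>. G (n + j) \<xi> - G n \<xi>))"
      using l2_dist_triangle[OF l2 l2 l2] by simp
    also have "\<dots> \<le> c ^ (n + j) * a + a * c ^ n * (1 - c ^ j) / (1 - c)"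
      using step[of "n + j"] Suc by linarith
    also have "\<dots> = a * c ^ n * (1 - c ^ Suc j) / (1 - c)"
      using c by (simp add: field_simps power_add)
    finally show ?case .
  qed
  have tail: "sqrt (l2_sqnorm (\<lambda>\<xi>. G m \<xi> - G n \<xi>)) \<le> a * c ^ n / (1 - c)"
    if nm: "n \<le> m" for m n
  proof -
    obtain j where m: "m = n + j" using le_Suc_ex[OF nm] by blast
    have "a * c ^ n * (1 - c ^ j) \<le> a * c ^ n" using c a by (intro mult_left_le) auto
    then have "a * c ^ n * (1 - c ^ j) / (1 - c) \<le> a * c ^ n / (1 - c)"
      by (rule divide_right_mono) (use c in auto)
    with partial[of n j] m show ?thesis by simp
  qed
  have "(\<lambda>n. a * c ^ n / (1 - c)) \<longlonglongrightarrow> 0"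
    using c by (intro tendsto_divide_zero tendsto_mult_right_zero LIMSEQ_power_zero) auto
  then obtain N where N: "\<forall>n\<ge>N. a * c ^ n / (1 - c) < sqrt e"
    using e unfolding LIMSEQ_def dist_real_def by (metis abs_less_iff diff_zero real_sqrt_gt_0_iff)
  have "l2_sqnorm (\<lambda>\<xi>. G m \<xi> - G n \<xi>) < e" if "m \<ge> N" "n \<ge> N" for m n
  proof -
    have "sqrt (l2_sqnorm (\<lambda>\<xi>. G m \<xi> - G n \<xi>)) < sqrt e"
    proof (cases "n \<le> m")
      case True
      have "a * c ^ n / (1 - c) < sqrt e" using N that(2) by blast
      with tail[OF True] show ?thesis by linarith
    next
      case False
      have "a * c ^ m / (1 - c) < sqrt e" using N that(1) by blast
      moreover have "sqrt (l2_sqnorm (\<lambda>\<xi>. G n \<xi> - G m \<xi>)) \<le> a * c ^ m / (1 - c)"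
        using False by (intro tail) simp
      ultimately have "sqrt (l2_sqnorm (\<lambda>\<xi>. G n \<xi> - G m \<xi>)) < sqrt e" by linarith
      then show ?thesis using l2_sqnorm_diff_commute[of "G n" "G m"] by simp
    qed
    then show ?thesis by (simp add: real_sqrt_less_iff)
  qed
  then show ?thesis by blast
qed

lemma bounded_operator_tendsto_pointwise:
  fixes T :: "('a \<Rightarrow> complex) \<Rightarrow> ('a \<Rightarrow> complex)"
  assumes T_l2: "\<And>x. x \<in> l2 A \<Longrightarrow> T x \<in> l2 A"
    and T_diff: "\<And>x y. x \<in> l2 A \<Longrightarrow> y \<in> l2 A \<Longrightarrow> T (\<lambda>\<xi>. x \<xi> - y \<xi>) = (\<lambda>\<xi>. T x \<xi> - T y \<xi>)"
    and T_bound: "\<And>x. x \<in> l2 A \<Longrightarrow> l2_sqnorm (T x) \<le> c\<^sup>2 * l2_sqnorm x"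
    and G_l2: "\<And>n. G n \<in> l2 A" and g_l2: "g \<in> l2 A"
    and lim: "(\<lambda>n. l2_sqnorm (\<lambda>\<xi>. G n \<xi> - g \<xi>)) \<longlonglongrightarrow> 0"
  shows "(\<lambda>n. T (G n) \<xi>) \<longlonglongrightarrow> T g \<xi>"
proof (rule l2_tendsto_pointwise[where x="\<lambda>n. T (G n)" and y="T g"])
  have diff: "(\<lambda>\<xi>. T (G n) \<xi> - T g \<xi>) = T (\<lambda>\<xi>. G n \<xi> - g \<xi>)" for n
    using T_diff[OF G_l2 g_l2] by simp
  show "sq_summable (\<lambda>\<xi>. T (G n) \<xi> - T g \<xi>)" for n
    using T_l2[OF l2_diff[OF G_l2 g_l2]] unfolding diff[symmetric] l2_iff by blast
  have bound: "l2_sqnorm (\<lambda>\<xi>. T (G n) \<xi> - T g \<xi>) \<le> c\<^sup>2 * l2_sqnorm (\<lambda>\<xi>. G n \<xi> - g \<xi>)" for n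
    unfolding diff using T_bound[OF l2_diff[OF G_l2 g_l2]] .
  have majorant: "(\<lambda>n. c\<^sup>2 * l2_sqnorm (\<lambda>\<xi>. G n \<xi> - g \<xi>)) \<longlonglongrightarrow> 0"
    using tendsto_mult_right_zero[OF lim] by simp
  show "(\<lambda>n. l2_sqnorm (\<lambda>\<xi>. T (G n) \<xi> - T g \<xi>)) \<longlonglongrightarrow> 0"
    by (rule tendsto_sandwich[OF always_eventually always_eventually tendsto_const majorant])
      (use bound l2_sqnorm_nonneg in auto)
qed

lemma neumann_fixed_point:
  fixes T :: "('a \<Rightarrow> complex) \<Rightarrow> ('a \<Rightarrow> complex)"
  assumes T_l2: "\<And>x. x \<in> l2 A \<Longrightarrow> T x \<in> l2 A"
    and T_diff: "\<And>x y. x \<in> l2 A \<Longrightarrow> y \<in> l2 A \<Longrightarrow> T (\<lambda>\<xi>. x \<xi> - y \<xi>) = (\<lambda>\<xi>. T x \<xi> - T y \<xi>)"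
    and T_bound: "\<And>x. x \<in> l2 A \<Longrightarrow> l2_sqnorm (T x) \<le> c\<^sup>2 * l2_sqnorm x"
    and c: "0 \<le> c" "c < 1" and y: "y \<in> l2 A"
  obtains g where "g \<in> l2 A" "\<And>\<xi>. g \<xi> = y \<xi> + T g \<xi>"
proof -
  have T_lipschitz: "sqrt (l2_sqnorm (T x)) \<le> c * sqrt (l2_sqnorm x)" if "x \<in> l2 A" for x
    using real_sqrt_le_mono[OF T_bound[OF that]] c by (simp add: real_sqrt_mult)
  define G where "G = rec_nat (\<lambda>_. 0) (\<lambda>n x \<xi>. y \<xi> + T x \<xi>)"
  have G_0: "G 0 = (\<lambda>_. 0)" and G_Suc: "G (Suc n) = (\<lambda>\<xi>. y \<xi> + T (G n) \<xi>)" for n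
    unfolding G_def by simp_all
  have G_l2: "G n \<in> l2 A" for n
    by (induction n) (auto simp: G_0 G_Suc l2_zero intro!: l2_add y T_l2)
  then have G_sq: "sq_summable (G n)" for n by (simp add: l2_iff)
  have T_0: "T (\<lambda>_. 0) = (\<lambda>_. 0)"
    using T_diff[OF l2_zero l2_zero] by (simp add: fun_eq_iff)
  have step: "sqrt (l2_sqnorm (\<lambda>\<xi>. G (Suc n) \<xi> - G n \<xi>)) \<le> c ^ n * sqrt (l2_sqnorm y)" for n
  proof (induction n)
    case 0 then show ?case by (simp add: G_0 G_Suc T_0)
  next
    case (Suc n)
    have "(\<lambda>\<xi>. G (Suc (Suc n)) \<xi> - G (Suc n) \<xi>) = (\<lambda>\<xi>. T (G (Suc n)) \<xi> - T (G n) \<xi>)"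
      by (simp add: G_Suc)
    also have "\<dots> = T (\<lambda>\<xi>. G (Suc n) \<xi> - G n \<xi>)" by (rule T_diff[OF G_l2 G_l2, symmetric])
    finally have "(\<lambda>\<xi>. G (Suc (Suc n)) \<xi> - G (Suc n) \<xi>) = T (\<lambda>\<xi>. G (Suc n) \<xi> - G n \<xi>)" .
    then have "sqrt (l2_sqnorm (\<lambda>\<xi>. G (Suc (Suc n)) \<xi> - G (Suc n) \<xi>))
        \<le> c * sqrt (l2_sqnorm (\<lambda>\<xi>. G (Suc n) \<xi> - G n \<xi>))"
      using T_lipschitz[OF l2_diff[OF G_l2 G_l2]] by simp
    also have "\<dots> \<le> c * (c ^ n * sqrt (l2_sqnorm y))" using Suc c by (simp add: mult_left_mono)
    finally show ?case by simp
  qed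
  obtain g where g: "sq_summable g" and lim: "(\<lambda>n. l2_sqnorm (\<lambda>\<xi>. G n \<xi> - g \<xi>)) \<longlonglongrightarrow> 0"
    using l2_cauchy_complete[OF G_sq l2_geometric_cauchy[OF G_sq step c]] by blast
  have G_g: "sq_summable (\<lambda>\<xi>. G n \<xi> - g \<xi>)" for n using sq_summable_diff[OF G_sq g] by blast
  have G_pointwise: "(\<lambda>n. G n \<xi>) \<longlonglongrightarrow> g \<xi>" for \<xi> by (rule l2_tendsto_pointwise[OF G_g lim])
  have g_l2: "g \<in> l2 A"
  proof -
    have "g \<xi> = 0" if "\<xi> \<notin> A" for \<xi>
      using G_pointwise[of \<xi>] G_l2 that by (simp add: l2_iff LIMSEQ_const_iff)
    with g show ?thesis by (simp add: l2_iff)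
  qed
  have "(\<lambda>n. T (G n) \<xi>) \<longlonglongrightarrow> T g \<xi>" for \<xi>
    by (rule bounded_operator_tendsto_pointwise[OF T_l2 T_diff T_bound G_l2 g_l2 lim])
  then have "(\<lambda>n. G (Suc n) \<xi>) \<longlonglongrightarrow> y \<xi> + T g \<xi>" for \<xi>
    unfolding G_Suc by (intro tendsto_add tendsto_const)
  moreover have "(\<lambda>n. G (Suc n) \<xi>) \<longlonglongrightarrow> g \<xi>" for \<xi>
    using G_pointwise by (rule LIMSEQ_Suc)
  ultimately show ?thesis using g_l2 by (intro that) (auto intro: LIMSEQ_unique)
qed


section \<open>Characters of ordered abelian groups\<close>

fun nat_multiple :: "nat \<Rightarrow> 'a::ab_group_add \<Rightarrow> 'a" where
  "nat_multiple 0 a = 0" | "nat_multiple (Suc n) a = nat_multiple n a + a"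

definition int_multiple :: "int \<Rightarrow> 'a::ab_group_add \<Rightarrow> 'a" where
  "int_multiple m a = (if 0 \<le> m then nat_multiple (nat m) a else - nat_multiple (nat (-m)) a)"

lemma nat_multiple_add: "nat_multiple (m + n) a = nat_multiple m a + nat_multiple n a"
  by (induction n) (auto simp: add.assoc)

lemma int_multiple_of_nat_diff: "int_multiple (int p - int q) a = nat_multiple p a - nat_multiple q a"
proof (cases "q \<le> p")
  case True
  then obtain d where p: "p = q + d" using le_Suc_ex by blast
  then show ?thesis by (simp add: int_multiple_def nat_multiple_add)
next
  case False
  then obtain d where q: "q = p + d" "d > 0" by (metis less_imp_add_positive not_le)
  then show ?thesis by (simp add: int_multiple_def nat_multiple_add)
qed

lemma int_multiple_eq_diff: "int_multiple m a = nat_multiple (nat m) a - nat_multiple (nat (-m)) a"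
proof -
  have "m = int (nat m) - int (nat (-m))" by simp
  then show ?thesis by (metis int_multiple_of_nat_diff)
qed

lemma int_multiple_add: "int_multiple (m + n) a = int_multiple m a + int_multiple n a"
proof -
  have "m + n = int (nat m + nat n) - int (nat (-m) + nat (-n))" by simp
  then have "int_multiple (m + n) a = nat_multiple (nat m + nat n) a - nat_multiple (nat (-m) + nat (-n)) a"
    by (metis int_multiple_of_nat_diff)
  then show ?thesis by (simp add: int_multiple_eq_diff nat_multiple_add)
qed

lemma int_multiple_0 [simp]: "int_multiple 0 a = 0" by (simp add: int_multiple_def)
lemma int_multiple_1 [simp]: "int_multiple 1 a = a" by (simp add: int_multiple_def)
lemma int_multiple_zero [simp]: "int_multiple m 0 = 0"
proof -
  have "nat_multiple k (0::'a) = 0" for k by (induction k) auto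
  then show ?thesis by (simp add: int_multiple_def)
qed

lemma int_multiple_diff: "int_multiple (m - n) a = int_multiple m a - int_multiple n a"
  using int_multiple_add[of "m - n" n a] by (simp add: algebra_simps)

lemma int_multiple_mult: "int_multiple q (int_multiple n a) = int_multiple (n * q) a"
proof (induction q rule: int_induct[where k=0])
  case base then show ?case by simp
next
  case (step1 i)
  then show ?case using int_multiple_add[of i 1 "int_multiple n a"] int_multiple_add[of "n*i" n a]
    by (simp add: algebra_simps)
next
  case (step2 i)
  have "int_multiple (i - 1) (int_multiple n a) = int_multiple i (int_multiple n a) - int_multiple n a" by (simp add: int_multiple_diff)
  also have "\<dots> = int_multiple (n*i) a - int_multiple n a" using step2 by simp
  also have "\<dots> = int_multiple (n*i - n) a" by (simp add: int_multiple_diff)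
  also have "n*i - n = n*(i-1)" by (simp add: algebra_simps)
  finally show ?case .
qed

lemma nat_multiple_pos: "(0::'a::linordered_ab_group_add) < a \<Longrightarrow> 0 < k \<Longrightarrow> 0 < nat_multiple k a"
proof (induction k)
  case (Suc k) then show ?case by (cases "k = 0") (auto intro: add_pos_pos)
qed auto

lemma nat_multiple_neg: "(a::'a::linordered_ab_group_add) < 0 \<Longrightarrow> 0 < k \<Longrightarrow> nat_multiple k a < 0"
proof (induction k)
  case (Suc k) then show ?case by (cases "k = 0") (auto intro: add_neg_neg)
qed auto

lemma nat_multiple_nonzero: "(a::'a::linordered_ab_group_add) \<noteq> 0 \<Longrightarrow> 0 < k \<Longrightarrow> nat_multiple k a \<noteq> 0"
  by (metis less_irrefl linorder_neqE nat_multiple_neg nat_multiple_pos)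

lemma int_multiple_eq_0: "(a::'a::linordered_ab_group_add) \<noteq> 0 \<Longrightarrow> int_multiple m a = 0 \<Longrightarrow> m = 0"
proof (rule ccontr)
  assume a: "a \<noteq> 0" "int_multiple m a = 0" "m \<noteq> 0"
  show False
  proof (cases "0 \<le> m")
    case True
    then have "0 < nat m" using a by auto
    then show False using nat_multiple_nonzero[OF a(1)] a True by (auto simp: int_multiple_def)
  next
    case False
    then have "0 < nat (-m)" using a by auto
    then show False using nat_multiple_nonzero[OF a(1)] a False by (auto simp: int_multiple_def)
  qed
qed

text \<open>A partial character is encoded by its graph: a set of pairs \<open>(a, z)\<close> describing a
  homomorphism from a subgroup of \<open>'a\<close> into the unit circle.\<close>

definition partial_char :: "('a::ab_group_add \<times> complex) set \<Rightarrow> bool" where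
  "partial_char P \<longleftrightarrow> (0, 1) \<in> P \<and> (\<forall>a z b w. (a, z) \<in> P \<longrightarrow> (b, w) \<in> P \<longrightarrow> (a - b, z * cnj w) \<in> P)
     \<and> (\<forall>a z w. (a, z) \<in> P \<longrightarrow> (a, w) \<in> P \<longrightarrow> z = w) \<and> (\<forall>a z. (a, z) \<in> P \<longrightarrow> cmod z = 1)"

lemma unimodular_mult_cnj: "cmod z = 1 \<Longrightarrow> z * cnj z = 1"
  using complex_norm_square[of z] by simp

lemma unimodular_cnj_eq_inverse: "cmod z = 1 \<Longrightarrow> cnj z = inverse z"
  using inverse_unique[OF unimodular_mult_cnj] by simp

lemma partial_char_uminus: "partial_char P \<Longrightarrow> (b, w) \<in> P \<Longrightarrow> (- b, cnj w) \<in> P"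
proof -
  assume "partial_char P" "(b, w) \<in> P"
  then have "(0 - b, 1 * cnj w) \<in> P" unfolding partial_char_def by blast
  then show ?thesis by simp
qed

lemma partial_char_add: "partial_char P \<Longrightarrow> (a, z) \<in> P \<Longrightarrow> (b, w) \<in> P \<Longrightarrow> (a + b, z * w) \<in> P"
proof -
  assume p: "partial_char P" "(a, z) \<in> P" "(b, w) \<in> P"
  have "(- b, cnj w) \<in> P" by (rule partial_char_uminus[OF p(1) p(3)])
  with p have "(a - (- b), z * cnj (cnj w)) \<in> P" unfolding partial_char_def by blast
  then show ?thesis by simp
qed

lemma partial_char_int_multiple: "partial_char P \<Longrightarrow> (b, v) \<in> P \<Longrightarrow> (int_multiple q b, v powi q) \<in> P"
proof (induction q rule: int_induct[where k=0])
  case base then show ?case by (simp add: partial_char_def)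
next
  case (step1 i)
  have "v \<noteq> 0" using step1 unfolding partial_char_def by force
  then have "(int_multiple i b + b, v powi i * v) \<in> P" using step1 partial_char_add by blast
  then show ?case using \<open>v \<noteq> 0\<close> by (simp add: int_multiple_add power_int_add)
next
  case (step2 i)
  have v: "cmod v = 1" using step2 unfolding partial_char_def by force
  then have "v \<noteq> 0" by auto
  have "(int_multiple i b - b, v powi i * cnj v) \<in> P" using step2 unfolding partial_char_def by blast
  then show ?case using \<open>v \<noteq> 0\<close> v
    by (simp add: int_multiple_diff power_int_diff unimodular_cnj_eq_inverse divide_inverse)
qed

lemma partial_char_extend_root:
  fixes P :: "('a::ab_group_add \<times> complex) set"
  assumes P: "partial_char P" and dvd: "\<And>m. int_multiple m a \<in> fst ` P \<Longrightarrow> n dvd m"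
    and w: "cmod w = 1" "(int_multiple n a, w powi n) \<in> P"
  shows "\<exists>P'. partial_char P' \<and> P \<subseteq> P' \<and> (a, w) \<in> P'"
proof -
  define P' where "P' = {(h + int_multiple m a, z * w powi m) | h z m. (h, z) \<in> P}"
  have w0: "w \<noteq> 0" using w by auto
  have "partial_char P'"
    unfolding partial_char_def
  proof (intro conjI allI impI)
    have "(0 + int_multiple 0 a, 1 * w powi 0) \<in> P'" unfolding P'_def using P unfolding partial_char_def by blast
    then show "(0, 1) \<in> P'" by simp
  next
    fix x z y u assume "(x, z) \<in> P'" "(y, u) \<in> P'"
    then obtain h1 z1 m1 h2 z2 m2 where h: "(h1, z1) \<in> P" "(h2, z2) \<in> P"
      "x = h1 + int_multiple m1 a" "z = z1 * w powi m1" "y = h2 + int_multiple m2 a" "u = z2 * w powi m2"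
      unfolding P'_def by blast
    have "(h1 - h2, z1 * cnj z2) \<in> P" using h P unfolding partial_char_def by blast
    moreover have "x - y = (h1 - h2) + int_multiple (m1 - m2) a" using h by (simp add: int_multiple_diff)
    moreover have "z * cnj u = (z1 * cnj z2) * w powi (m1 - m2)"
      using h w0 by (simp add: unimodular_cnj_eq_inverse[OF w(1)] power_int_inverse power_int_diff power_int_minus divide_inverse)
    ultimately show "(x - y, z * cnj u) \<in> P'" unfolding P'_def by blast
  next
    fix x z u assume "(x, z) \<in> P'" "(x, u) \<in> P'"
    then obtain h1 z1 m1 h2 z2 m2 where h: "(h1, z1) \<in> P" "(h2, z2) \<in> P"
      "x = h1 + int_multiple m1 a" "z = z1 * w powi m1" "x = h2 + int_multiple m2 a" "u = z2 * w powi m2"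
      unfolding P'_def by blast
    have d: "(h2 - h1, z2 * cnj z1) \<in> P" using h P unfolding partial_char_def by blast
    have e: "int_multiple (m1 - m2) a = h2 - h1" using h by (simp add: int_multiple_diff algebra_simps)
    then have "n dvd (m1 - m2)" using dvd d by force
    then obtain q where q: "m1 - m2 = n * q" by (auto elim: dvdE)
    have "(int_multiple q (int_multiple n a), (w powi n) powi q) \<in> P" using partial_char_int_multiple[OF P w(2)] .
    then have "(h2 - h1, w powi (m1 - m2)) \<in> P"
      using e q by (simp add: int_multiple_mult power_int_mult)
    then have "z2 * cnj z1 = w powi (m1 - m2)" using d P unfolding partial_char_def by blast
    moreover have "cmod z1 = 1" using h P unfolding partial_char_def by blast
    ultimately have "z2 = z1 * w powi (m1 - m2)"
      by (metis mult.assoc mult.commute mult_1 unimodular_mult_cnj)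
    then show "z = u" using h w0 by (simp add: power_int_diff)
  next
    fix x z assume "(x, z) \<in> P'"
    then obtain h1 z1 m1 where h: "(h1, z1) \<in> P" "z = z1 * w powi m1"
      unfolding P'_def by blast
    then show "cmod z = 1" using P w unfolding partial_char_def by (simp add: norm_mult norm_power_int)
  qed
  moreover have "P \<subseteq> P'"
  proof
    fix p assume "p \<in> P"
    then obtain h z where hz: "p = (h, z)" "(h, z) \<in> P" by (cases p) auto
    then have "(h + int_multiple 0 a, z * w powi 0) \<in> P'" unfolding P'_def by blast
    then show "p \<in> P'" using hz by simp
  qed
  moreover have "(a, w) \<in> P'"
  proof -
    have "(0 + int_multiple 1 a, 1 * w powi 1) \<in> P'" unfolding P'_def using P unfolding partial_char_def by blast
    then show ?thesis by simp
  qed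
  ultimately show ?thesis by blast
qed

lemma int_subgroup_principal:
  fixes S :: "int set"
  assumes "0 \<in> S" "\<And>x y. x \<in> S \<Longrightarrow> y \<in> S \<Longrightarrow> x - y \<in> S"
    and mult: "\<And>x q. x \<in> S \<Longrightarrow> x * q \<in> S"
  shows "\<exists>n\<in>S. \<forall>m\<in>S. n dvd m"
proof (cases "\<exists>k::nat. 0 < k \<and> int k \<in> S")
  case False
  have "m = 0" if "m \<in> S" for m
  proof (rule ccontr)
    assume "m \<noteq> 0"
    then have "int (nat \<bar>m\<bar>) \<in> S \<and> 0 < nat \<bar>m\<bar>"
      using that mult[of m "-1"] by (cases "m < 0") auto
    then show False using False by blast
  qed
  then show ?thesis using assms(1) by auto
next
  case True
  define n where "n = (LEAST k::nat. 0 < k \<and> int k \<in> S)"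
  have n: "0 < n" "int n \<in> S" using LeastI_ex[OF True] unfolding n_def by auto
  have "int n dvd m" if "m \<in> S" for m
  proof -
    have "m mod int n = m - int n * (m div int n)" by (metis minus_div_mult_eq_mod mult.commute)
    then have inS: "m mod int n \<in> S" using assms(2)[OF that mult[OF n(2)]] by simp
    have "m mod int n = 0"
    proof (rule ccontr)
      assume nz: "m mod int n \<noteq> 0"
      have ge: "0 \<le> m mod int n" "m mod int n < int n" using n(1) by auto
      then have "0 < nat (m mod int n) \<and> int (nat (m mod int n)) \<in> S" using nz inS by auto
      then have "n \<le> nat (m mod int n)" unfolding n_def by (rule Least_le)
      then show False using ge by linarith
    qed
    then show ?thesis by (simp add: dvd_eq_mod_eq_0)
  qed
  then show ?thesis using n by blast
qed

lemma partial_char_extend: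
  fixes P :: "('a::ab_group_add \<times> complex) set"
  assumes P: "partial_char P"
  shows "\<exists>P'. partial_char P' \<and> P \<subseteq> P' \<and> a \<in> fst ` P'"
proof -
  define S where "S = {m. int_multiple m a \<in> fst ` P}"
  have S0: "0 \<in> S" unfolding S_def using P unfolding partial_char_def by force
  have Sd: "x - y \<in> S" if "x \<in> S" "y \<in> S" for x y
  proof -
    have "int_multiple x a \<in> fst ` P" "int_multiple y a \<in> fst ` P" using that unfolding S_def by auto
    then obtain z u where "(int_multiple x a, z) \<in> P" "(int_multiple y a, u) \<in> P" by force
    then have "(int_multiple x a - int_multiple y a, z * cnj u) \<in> P" using P unfolding partial_char_def by blast
    then show ?thesis unfolding S_def by (force simp: int_multiple_diff)
  qed
  have Sm: "x * q \<in> S" if "x \<in> S" for x q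
  proof -
    have "int_multiple x a \<in> fst ` P" using that unfolding S_def by auto
    then obtain z where "(int_multiple x a, z) \<in> P" by force
    from partial_char_int_multiple[OF P this, of q] show ?thesis unfolding S_def by (force simp: int_multiple_mult)
  qed
  obtain n where n: "n \<in> S" "\<And>m. m \<in> S \<Longrightarrow> n dvd m" using int_subgroup_principal[OF S0 Sd Sm] by blast
  obtain v where v: "(int_multiple n a, v) \<in> P" using n(1) unfolding S_def by auto
  have cv: "cmod v = 1" using v P unfolding partial_char_def by blast
  show ?thesis
  proof (cases "n = 0")
    case True
    have "v = 1" using v P True unfolding partial_char_def by auto
    with True v have v1: "(int_multiple n a, 1 powi n) \<in> P" by simp
    have "\<exists>P'. partial_char P' \<and> P \<subseteq> P' \<and> (a, 1) \<in> P'"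
      by (rule partial_char_extend_root[OF P _ _ v1]) (use n in \<open>auto simp: S_def\<close>)
    then show ?thesis by force
  next
    case False
    define w where "w = cis (Arg v / of_int n)"
    have "w powi n = cis (Arg v)" unfolding w_def using False by (simp add: cis_power_int)
    also have "\<dots> = v"
    proof -
      have "v \<noteq> 0" using cv by auto
      then show ?thesis using cis_Arg[of v] cv by (simp add: sgn_eq)
    qed
    finally have "(int_multiple n a, w powi n) \<in> P" using v by simp
    moreover have "cmod w = 1" unfolding w_def by simp
    ultimately have "\<exists>P'. partial_char P' \<and> P \<subseteq> P' \<and> (a, w) \<in> P'"
      by (intro partial_char_extend_root[OF P]) (use n in \<open>auto simp: S_def\<close>)
    then show ?thesis by force
  qed
qed

lemma partial_char_chain_Union:
  assumes C: "C \<in> chains {P. partial_char P \<and> P0 \<subseteq> P}" and P0: "partial_char P0"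
  shows "partial_char (P0 \<union> \<Union>C)"
proof -
  have Cp: "\<And>P. P \<in> C \<Longrightarrow> partial_char P \<and> P0 \<subseteq> P" using C unfolding chains_def by auto
  have ch: "\<And>A B. A \<in> C \<Longrightarrow> B \<in> C \<Longrightarrow> A \<subseteq> B \<or> B \<subseteq> A"
    using C unfolding chains_def chain_subset_def by auto
  have two: "\<exists>Q. partial_char Q \<and> x \<in> Q \<and> y \<in> Q \<and> Q \<subseteq> P0 \<union> \<Union>C"
    if "x \<in> P0 \<union> \<Union>C" "y \<in> P0 \<union> \<Union>C" for x y
  proof -
    from that consider "x \<in> P0" "y \<in> P0" | A where "A \<in> C" "x \<in> A" "y \<in> P0"
      | B where "B \<in> C" "x \<in> P0" "y \<in> B" | A B where "A \<in> C" "B \<in> C" "x \<in> A" "y \<in> B"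
      by blast
    then show ?thesis
    proof cases
      case 1 then show ?thesis using P0 by blast
    next
      case (2 A) then show ?thesis using Cp[of A] by blast
    next
      case (3 B) then show ?thesis using Cp[of B] by blast
    next
      case (4 A B) then show ?thesis using Cp[of A] Cp[of B] ch[of A B] by blast
    qed
  qed
  show ?thesis unfolding partial_char_def
  proof (intro conjI allI impI)
    show "(0, 1) \<in> P0 \<union> \<Union>C" using P0 unfolding partial_char_def by blast
  next
    fix a z b w assume "(a, z) \<in> P0 \<union> \<Union>C" "(b, w) \<in> P0 \<union> \<Union>C"
    from two[OF this] obtain Q where Q: "partial_char Q" "(a, z) \<in> Q" "(b, w) \<in> Q" "Q \<subseteq> P0 \<union> \<Union>C" by blast
    have "(a - b, z * cnj w) \<in> Q" using Q(1-3) unfolding partial_char_def by blast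
    then show "(a - b, z * cnj w) \<in> P0 \<union> \<Union>C" using Q(4) by blast
  next
    fix a z w assume "(a, z) \<in> P0 \<union> \<Union>C" "(a, w) \<in> P0 \<union> \<Union>C"
    from two[OF this] obtain Q where Q: "partial_char Q" "(a, z) \<in> Q" "(a, w) \<in> Q" by blast
    then show "z = w" unfolding partial_char_def by blast
  next
    fix a z assume "(a, z) \<in> P0 \<union> \<Union>C"
    from two[OF this this] obtain Q where Q: "partial_char Q" "(a, z) \<in> Q" by blast
    then show "cmod z = 1" unfolding partial_char_def by blast
  qed
qed

lemma char_exists_minus_one:
  fixes \<xi> :: "'a::linordered_ab_group_add"
  assumes "\<xi> \<noteq> 0"
  shows "\<exists>\<gamma>\<in>dual_group. \<gamma> \<xi> = -1"
proof -
  have trivial: "partial_char {(0::'a, 1::complex)}" unfolding partial_char_def by auto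
  have "\<exists>P'. partial_char P' \<and> {(0::'a, 1::complex)} \<subseteq> P' \<and> (\<xi>, -1) \<in> P'"
  proof (rule partial_char_extend_root[OF trivial, where n=0])
    show "int_multiple m \<xi> \<in> fst ` {(0, 1)} \<Longrightarrow> 0 dvd m" for m using int_multiple_eq_0[OF assms] by auto
  qed auto
  then obtain P0 where P0: "partial_char P0" "(\<xi>, -1) \<in> P0" by blast
  define A where "A = {P. partial_char P \<and> P0 \<subseteq> P}"
  have "\<forall>C\<in>chains A. \<exists>U\<in>A. \<forall>X\<in>C. X \<subseteq> U"
  proof
    fix C assume "C \<in> chains A"
    then have "partial_char (P0 \<union> \<Union>C)" using partial_char_chain_Union P0 unfolding A_def by blast
    then show "\<exists>U\<in>A. \<forall>X\<in>C. X \<subseteq> U" unfolding A_def by (intro bexI[of _ "P0 \<union> \<Union>C"]) auto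
  qed
  from Zorn_Lemma2[OF this] obtain M where M: "M \<in> A" "\<forall>X\<in>A. M \<subseteq> X \<longrightarrow> X = M"
    by blast
  have Mpc: "partial_char M" and P0M: "P0 \<subseteq> M" using M(1) unfolding A_def by auto
  have tot: "a \<in> fst ` M" for a
  proof -
    obtain P' where "partial_char P'" "M \<subseteq> P'" "a \<in> fst ` P'" using partial_char_extend[OF Mpc] by blast
    moreover then have "P' \<in> A" using P0M unfolding A_def by auto
    ultimately show ?thesis using M(2) by auto
  qed
  define \<gamma> where "\<gamma> a = (THE z. (a, z) \<in> M)" for a
  have g: "(a, \<gamma> a) \<in> M" for a
  proof -
    obtain z where z: "(a, z) \<in> M" using tot[of a] by force
    then have "(THE z. (a, z) \<in> M) = z" using Mpc unfolding partial_char_def by blast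
    with z show ?thesis unfolding \<gamma>_def by simp
  qed
  have gu: "(a, z) \<in> M \<Longrightarrow> \<gamma> a = z" for a z using g[of a] Mpc unfolding partial_char_def by blast
  have "\<gamma> \<in> dual_group" unfolding dual_group_def
  proof (intro CollectI conjI allI)
    show "cmod (\<gamma> x) = 1" for x using g[of x] Mpc unfolding partial_char_def by blast
    show "\<gamma> (a + b) = \<gamma> a * \<gamma> b" for a b using partial_char_add[OF Mpc g[of a] g[of b]] gu by blast
  qed
  moreover have "\<gamma> \<xi> = -1" using gu P0 P0M by blast
  ultimately show ?thesis by blast
qed




section \<open>Haar measure and Fourier coefficients\<close>

lemma dual_group_norm: "\<gamma> \<in> dual_group \<Longrightarrow> cmod (\<gamma> \<xi>) = 1"
  unfolding dual_group_def by auto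

lemma dual_group_add: "\<gamma> \<in> dual_group \<Longrightarrow> \<gamma> (a + b) = \<gamma> a * \<gamma> b"
  unfolding dual_group_def by auto

lemma dual_group_zero: "\<gamma> \<in> dual_group \<Longrightarrow> \<gamma> 0 = 1"
proof -
  assume g: "\<gamma> \<in> dual_group"
  have "\<gamma> 0 = \<gamma> 0 * \<gamma> 0" using dual_group_add[OF g, of 0 0] by simp
  moreover have "\<gamma> 0 \<noteq> 0" using dual_group_norm[OF g, of 0] by auto
  ultimately show ?thesis by simp
qed

lemma dual_group_uminus: "\<gamma> \<in> dual_group \<Longrightarrow> \<gamma> (- a) = cnj (\<gamma> a)"
proof -
  assume g: "\<gamma> \<in> dual_group"
  have "\<gamma> a * \<gamma> (- a) = 1" using dual_group_add[OF g, of a "-a"] dual_group_zero[OF g] by simp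
  then have "\<gamma> (- a) = inverse (\<gamma> a)" by (metis inverse_unique)
  then show ?thesis using unimodular_cnj_eq_inverse[OF dual_group_norm[OF g]] by simp
qed

lemma dual_group_diff: "\<gamma> \<in> dual_group \<Longrightarrow> \<gamma> (a - b) = \<gamma> a * cnj (\<gamma> b)"
  using dual_group_add[of \<gamma> a "-b"] dual_group_uminus[of \<gamma> b] by simp

lemma dual_group_mult: "h \<in> dual_group \<Longrightarrow> \<gamma> \<in> dual_group \<Longrightarrow> (\<lambda>\<xi>. h \<xi> * \<gamma> \<xi>) \<in> dual_group"
  unfolding dual_group_def by (auto simp: norm_mult)

lemma borel_measurable_cnj[measurable]: "f \<in> borel_measurable M \<Longrightarrow> (\<lambda>x. cnj (f x)) \<in> borel_measurable M"
  by (rule borel_measurable_continuous_on[OF continuous_on_cnj[OF continuous_on_id]])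

definition trig_poly :: "'x set \<Rightarrow> ('x \<Rightarrow> complex) \<Rightarrow> ('x \<Rightarrow> complex) \<Rightarrow> complex" where
  "trig_poly F c \<gamma> = (\<Sum>\<xi>\<in>F. c \<xi> * \<gamma> \<xi>)"

locale haar_space =
  fixes \<mu> :: "('x::linordered_ab_group_add \<Rightarrow> complex) measure"
  assumes haar: "haar \<mu>"
begin

sublocale prob_space \<mu> using haar unfolding haar_def by auto

lemma space_haar: "space \<mu> = dual_group" using haar unfolding haar_def by auto

abbreviation eval_sets where
  "eval_sets \<equiv> {{\<gamma> \<in> dual_group. \<gamma> \<xi> \<in> A} | \<xi> A. A \<in> sets borel} :: ('x \<Rightarrow> complex) set set"

lemma sets_haar: "sets \<mu> = sigma_sets dual_group eval_sets"
  using haar unfolding haar_def by auto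

lemma measurable_char[measurable]: "(\<lambda>\<gamma>. \<gamma> \<xi>) \<in> borel_measurable \<mu>"
proof (rule measurableI)
  fix A :: "complex set" assume "A \<in> sets borel"
  then have "{\<gamma> \<in> dual_group. \<gamma> \<xi> \<in> A} \<in> eval_sets" by blast
  then have "{\<gamma> \<in> dual_group. \<gamma> \<xi> \<in> A} \<in> sets \<mu>" unfolding sets_haar by (rule sigma_sets.Basic)
  moreover have "(\<lambda>\<gamma>. \<gamma> \<xi>) -` A \<inter> space \<mu> = {\<gamma> \<in> dual_group. \<gamma> \<xi> \<in> A}" using space_haar by auto
  ultimately show "(\<lambda>\<gamma>. \<gamma> \<xi>) -` A \<inter> space \<mu> \<in> sets \<mu>" by simp
qed auto

definition bdd_meas :: "(('x \<Rightarrow> complex) \<Rightarrow> complex) \<Rightarrow> bool" where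
  "bdd_meas f \<longleftrightarrow> f \<in> borel_measurable \<mu> \<and> (\<exists>C. \<forall>x\<in>space \<mu>. cmod (f x) \<le> C)"

lemma bdd_meas_integrable: "bdd_meas f \<Longrightarrow> integrable \<mu> f"
  unfolding bdd_meas_def by (auto intro: integrable_const_bound)

lemma bdd_meas_measurable: "bdd_meas f \<Longrightarrow> f \<in> borel_measurable \<mu>" unfolding bdd_meas_def by auto

lemma bdd_meas_bound: "bdd_meas f \<Longrightarrow> \<exists>C. 0 \<le> C \<and> (\<forall>x\<in>space \<mu>. cmod (f x) \<le> C)"
  unfolding bdd_meas_def by (meson norm_ge_zero order_trans)

lemma bdd_meas_add: "bdd_meas f \<Longrightarrow> bdd_meas g \<Longrightarrow> bdd_meas (\<lambda>x. f x + g x)"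
  unfolding bdd_meas_def by (auto intro!: exI[where x="_ + _"] order_trans[OF norm_triangle_ineq] add_mono)

lemma bdd_meas_uminus: "bdd_meas f \<Longrightarrow> bdd_meas (\<lambda>x. - f x)"
  unfolding bdd_meas_def by auto

lemma bdd_meas_diff: "bdd_meas f \<Longrightarrow> bdd_meas g \<Longrightarrow> bdd_meas (\<lambda>x. f x - g x)"
  using bdd_meas_add[of f "\<lambda>x. - g x"] bdd_meas_uminus[of g] by simp

lemma bdd_meas_mult: "bdd_meas f \<Longrightarrow> bdd_meas g \<Longrightarrow> bdd_meas (\<lambda>x. f x * g x)"
proof -
  assume "bdd_meas f" "bdd_meas g"
  then obtain C D where "0 \<le> C" "\<forall>x\<in>space \<mu>. cmod (f x) \<le> C" "\<forall>x\<in>space \<mu>. cmod (g x) \<le> D"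
    using bdd_meas_bound by blast
  then have "\<forall>x\<in>space \<mu>. cmod (f x * g x) \<le> C * D"
    by (auto simp: norm_mult intro: mult_mono)
  then show ?thesis using \<open>bdd_meas f\<close> \<open>bdd_meas g\<close> unfolding bdd_meas_def by auto
qed

lemma bdd_meas_cnj: "bdd_meas f \<Longrightarrow> bdd_meas (\<lambda>x. cnj (f x))"
  unfolding bdd_meas_def by (auto intro: borel_measurable_cnj)

lemma bdd_meas_const: "bdd_meas (\<lambda>x. c)"
  unfolding bdd_meas_def by auto

lemma bdd_meas_char: "bdd_meas (\<lambda>\<gamma>. \<gamma> \<xi>)"
  unfolding bdd_meas_def using space_haar by (auto intro!: exI[of _ 1] simp: dual_group_norm)

lemma bdd_meas_sum: "finite F \<Longrightarrow> (\<And>i. i \<in> F \<Longrightarrow> bdd_meas (f i)) \<Longrightarrow> bdd_meas (\<lambda>x. \<Sum>i\<in>F. f i x)"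
  by (induction F rule: finite_induct) (auto intro: bdd_meas_add bdd_meas_const)

lemma bdd_meas_trig_poly_finite: "finite F \<Longrightarrow> bdd_meas (trig_poly F c)"
  unfolding trig_poly_def by (intro bdd_meas_sum bdd_meas_mult bdd_meas_const bdd_meas_char)

lemma bdd_meas_cong: "bdd_meas f \<Longrightarrow> (\<And>x. x \<in> space \<mu> \<Longrightarrow> f x = g x) \<Longrightarrow> bdd_meas g"
proof -
  assume a: "bdd_meas f" and b: "\<And>x. x \<in> space \<mu> \<Longrightarrow> f x = g x"
  have "g \<in> borel_measurable \<mu>" using measurable_cong[of \<mu> f g] a b unfolding bdd_meas_def by simp
  moreover obtain C where "\<forall>x\<in>space \<mu>. cmod (f x) \<le> C" using a unfolding bdd_meas_def by auto
  ultimately show ?thesis unfolding bdd_meas_def using b by auto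
qed

definition translate :: "('x \<Rightarrow> complex) \<Rightarrow> ('x \<Rightarrow> complex) \<Rightarrow> ('x \<Rightarrow> complex)" where
  "translate h \<gamma> = (\<lambda>\<xi>. h \<xi> * \<gamma> \<xi>)"

lemma translate_measurable: assumes h: "h \<in> dual_group" shows "translate h \<in> measurable \<mu> \<mu>"
proof (rule measurable_sigma_sets[OF sets_haar])
  show "eval_sets \<subseteq> Pow dual_group" by auto
  show "translate h \<in> space \<mu> \<rightarrow> dual_group" using dual_group_mult[OF h] space_haar unfolding translate_def by auto
  fix y assume "y \<in> eval_sets"
  then obtain \<xi> A where y: "y = {\<gamma> \<in> dual_group. \<gamma> \<xi> \<in> A}" "A \<in> sets borel" by blast
  have "translate h -` y \<inter> space \<mu> = {\<gamma> \<in> space \<mu>. h \<xi> * \<gamma> \<xi> \<in> A}"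
    using dual_group_mult[OF h] space_haar unfolding y translate_def by auto
  also have "\<dots> \<in> sets \<mu>" using y(2) by measurable
  finally show "translate h -` y \<inter> space \<mu> \<in> sets \<mu>" .
qed

lemma integral_translate:
  fixes f :: "('x \<Rightarrow> complex) \<Rightarrow> complex"
  assumes h: "h \<in> dual_group" and f: "f \<in> borel_measurable \<mu>"
  shows "integral\<^sup>L \<mu> f = integral\<^sup>L \<mu> (\<lambda>\<gamma>. f (translate h \<gamma>))"
proof -
  have "distr \<mu> \<mu> (translate h) = \<mu>" using haar h unfolding haar_def translate_def by auto
  then have "integral\<^sup>L \<mu> f = integral\<^sup>L (distr \<mu> \<mu> (translate h)) f" by simp
  also have "\<dots> = integral\<^sup>L \<mu> (\<lambda>\<gamma>. f (translate h \<gamma>))" by (rule integral_distr[OF translate_measurable[OF h] f])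
  finally show ?thesis .
qed

lemma integral_char: "integral\<^sup>L \<mu> (\<lambda>\<gamma>. \<gamma> \<xi>) = (if \<xi> = 0 then 1 else 0)"
proof (cases "\<xi> = 0")
  case True
  have "integral\<^sup>L \<mu> (\<lambda>\<gamma>. \<gamma> \<xi>) = integral\<^sup>L \<mu> (\<lambda>\<gamma>. 1)"
    using space_haar dual_group_zero True by (intro Bochner_Integration.integral_cong) auto
  then show ?thesis using True by (simp add: prob_space)
next
  case False
  obtain h where h: "h \<in> dual_group" "h \<xi> = -1" using char_exists_minus_one[OF False] by blast
  have "integral\<^sup>L \<mu> (\<lambda>\<gamma>. \<gamma> \<xi>) = integral\<^sup>L \<mu> (\<lambda>\<gamma>. translate h \<gamma> \<xi>)"
    by (rule integral_translate[OF h(1)]) simp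
  also have "\<dots> = - integral\<^sup>L \<mu> (\<lambda>\<gamma>. \<gamma> \<xi>)" unfolding translate_def h(2) by simp
  finally show ?thesis using False by simp
qed

definition L2_inner :: "(('x \<Rightarrow> complex) \<Rightarrow> complex) \<Rightarrow> (('x \<Rightarrow> complex) \<Rightarrow> complex) \<Rightarrow> complex" where
  "L2_inner f g = integral\<^sup>L \<mu> (\<lambda>x. f x * cnj (g x))"

definition L2_sqnorm :: "(('x \<Rightarrow> complex) \<Rightarrow> complex) \<Rightarrow> real" where
  "L2_sqnorm f = integral\<^sup>L \<mu> (\<lambda>x. (cmod (f x))\<^sup>2)"

lemma fourier_eq_L2_inner: "fourier \<mu> f \<xi> = L2_inner f (\<lambda>\<gamma>. \<gamma> \<xi>)"
  unfolding fourier_def L2_inner_def ..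

lemma L2_sqnorm_eq_inner: "complex_of_real (L2_sqnorm f) = L2_inner f f"
  unfolding L2_sqnorm_def L2_inner_def integral_complex_of_real[symmetric] complex_norm_square[symmetric] ..

lemma L2_sqnorm_nonneg: "0 \<le> L2_sqnorm f"
  unfolding L2_sqnorm_def by simp

lemma L2_inner_commute: "L2_inner g f = cnj (L2_inner f g)"
  unfolding L2_inner_def Bochner_Integration.integral_cnj[symmetric] by (simp add: mult.commute)

lemma L2_inner_diff_left: "bdd_meas f \<Longrightarrow> bdd_meas g \<Longrightarrow> bdd_meas h \<Longrightarrow> L2_inner (\<lambda>x. f x - g x) h = L2_inner f h - L2_inner g h"
  unfolding L2_inner_def by (simp add: left_diff_distrib bdd_meas_integrable bdd_meas_mult bdd_meas_cnj)

lemma L2_inner_diff_right: "bdd_meas f \<Longrightarrow> bdd_meas g \<Longrightarrow> bdd_meas h \<Longrightarrow> L2_inner h (\<lambda>x. f x - g x) = L2_inner h f - L2_inner h g"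
proof -
  assume a: "bdd_meas f" "bdd_meas g" "bdd_meas h"
  have "L2_inner h (\<lambda>x. f x - g x) = cnj (L2_inner (\<lambda>x. f x - g x) h)" by (rule L2_inner_commute)
  also have "\<dots> = cnj (L2_inner f h - L2_inner g h)" using a by (simp add: L2_inner_diff_left)
  also have "\<dots> = L2_inner h f - L2_inner h g" using L2_inner_commute[of h f] L2_inner_commute[of h g] by simp
  finally show ?thesis .
qed

lemma L2_inner_scale_left: "L2_inner (\<lambda>x. c * f x) h = c * L2_inner f h"
  unfolding L2_inner_def by (simp add: mult.assoc)

lemma L2_inner_sum_left: "finite F \<Longrightarrow> (\<And>i. i \<in> F \<Longrightarrow> bdd_meas (f i)) \<Longrightarrow> bdd_meas h \<Longrightarrow>
    L2_inner (\<lambda>x. \<Sum>i\<in>F. f i x) h = (\<Sum>i\<in>F. L2_inner (f i) h)"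
  unfolding L2_inner_def by (simp add: sum_distrib_right bdd_meas_integrable bdd_meas_mult bdd_meas_cnj integral_sum)

lemma L2_inner_char: "L2_inner (\<lambda>\<gamma>. \<gamma> a) (\<lambda>\<gamma>. \<gamma> b) = (if a = b then 1 else 0)"
proof -
  have "L2_inner (\<lambda>\<gamma>. \<gamma> a) (\<lambda>\<gamma>. \<gamma> b) = integral\<^sup>L \<mu> (\<lambda>\<gamma>. \<gamma> (a - b))"
    unfolding L2_inner_def using space_haar by (intro Bochner_Integration.integral_cong) (auto simp: dual_group_diff)
  then show ?thesis by (simp add: integral_char)
qed

lemma L2_inner_trig_poly_left: "finite F \<Longrightarrow> bdd_meas g \<Longrightarrow> L2_inner (trig_poly F c) g = (\<Sum>\<xi>\<in>F. c \<xi> * cnj (fourier \<mu> g \<xi>))"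
proof -
  assume F: "finite F" and g: "bdd_meas g"
  have "L2_inner (trig_poly F c) g = (\<Sum>\<xi>\<in>F. L2_inner (\<lambda>\<gamma>. c \<xi> * \<gamma> \<xi>) g)"
    unfolding trig_poly_def using F g by (intro L2_inner_sum_left) (auto intro: bdd_meas_mult bdd_meas_const bdd_meas_char)
  also have "\<dots> = (\<Sum>\<xi>\<in>F. c \<xi> * cnj (fourier \<mu> g \<xi>))"
    by (simp add: L2_inner_scale_left fourier_eq_L2_inner L2_inner_commute[of g])
  finally show ?thesis .
qed

lemma fourier_trig_poly: "finite F \<Longrightarrow> fourier \<mu> (trig_poly F c) \<xi> = (if \<xi> \<in> F then c \<xi> else 0)"
proof -
  assume F: "finite F"
  have "fourier \<mu> (trig_poly F c) \<xi> = (\<Sum>\<eta>\<in>F. c \<eta> * cnj (fourier \<mu> (\<lambda>\<gamma>. \<gamma> \<xi>) \<eta>))"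
    unfolding fourier_eq_L2_inner using F by (subst L2_inner_trig_poly_left) (auto intro: bdd_meas_char simp: fourier_eq_L2_inner)
  also have "\<dots> = (\<Sum>\<eta>\<in>F. c \<eta> * (if \<eta> = \<xi> then 1 else 0))"
    by (intro sum.cong) (auto simp: fourier_eq_L2_inner L2_inner_char)
  also have "\<dots> = (\<Sum>\<eta>\<in>F. if \<eta> = \<xi> then c \<eta> else 0)" by (intro sum.cong) auto
  also have "\<dots> = (if \<xi> \<in> F then c \<xi> else 0)"
    using F by (simp add: sum.delta)
  finally show ?thesis .
qed

lemma L2_sqnorm_trig_poly: "finite F \<Longrightarrow> L2_sqnorm (trig_poly F c) = (\<Sum>\<xi>\<in>F. (cmod (c \<xi>))\<^sup>2)"
proof -
  assume F: "finite F"
  have "complex_of_real (L2_sqnorm (trig_poly F c)) = (\<Sum>\<xi>\<in>F. c \<xi> * cnj (c \<xi>))"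
    unfolding L2_sqnorm_eq_inner using F by (simp add: L2_inner_trig_poly_left bdd_meas_trig_poly_finite fourier_trig_poly)
  also have "\<dots> = complex_of_real (\<Sum>\<xi>\<in>F. (cmod (c \<xi>))\<^sup>2)"
    unfolding complex_norm_square[symmetric] of_real_sum ..
  finally show ?thesis using of_real_eq_iff by blast
qed

lemma L2_sqnorm_diff_expand: "bdd_meas f \<Longrightarrow> bdd_meas g \<Longrightarrow>
   complex_of_real (L2_sqnorm (\<lambda>x. f x - g x)) = L2_inner f f - L2_inner f g - L2_inner g f + L2_inner g g"
  unfolding L2_sqnorm_eq_inner by (simp add: L2_inner_diff_left L2_inner_diff_right bdd_meas_diff)

lemma L2_sqnorm_diff_trig_poly:
  assumes f: "bdd_meas f" and F: "finite F"
  shows "L2_sqnorm (\<lambda>x. f x - trig_poly F d x) = L2_sqnorm f - (\<Sum>\<xi>\<in>F. (cmod (fourier \<mu> f \<xi>))\<^sup>2)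
            + (\<Sum>\<xi>\<in>F. (cmod (fourier \<mu> f \<xi> - d \<xi>))\<^sup>2)"
proof -
  let ?a = "fourier \<mu> f"
  have e1: "L2_inner (trig_poly F d) f = (\<Sum>\<xi>\<in>F. d \<xi> * cnj (?a \<xi>))" using F f by (rule L2_inner_trig_poly_left)
  have e2: "L2_inner f (trig_poly F d) = cnj (\<Sum>\<xi>\<in>F. d \<xi> * cnj (?a \<xi>))" using L2_inner_commute[of f "trig_poly F d"] e1 by simp
  have e3: "L2_inner (trig_poly F d) (trig_poly F d) = (\<Sum>\<xi>\<in>F. d \<xi> * cnj (d \<xi>))"
    using F by (simp add: L2_inner_trig_poly_left bdd_meas_trig_poly_finite fourier_trig_poly)
  have "complex_of_real (L2_sqnorm (\<lambda>x. f x - trig_poly F d x))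
     = complex_of_real (L2_sqnorm f) - cnj (\<Sum>\<xi>\<in>F. d \<xi> * cnj (?a \<xi>)) - (\<Sum>\<xi>\<in>F. d \<xi> * cnj (?a \<xi>))
       + (\<Sum>\<xi>\<in>F. d \<xi> * cnj (d \<xi>))"
    using L2_sqnorm_diff_expand[OF f bdd_meas_trig_poly_finite[OF F], of d] unfolding e1 e2 e3 L2_sqnorm_eq_inner by simp
  also have "\<dots> = complex_of_real (L2_sqnorm f) - (\<Sum>\<xi>\<in>F. ?a \<xi> * cnj (?a \<xi>)) +
      (\<Sum>\<xi>\<in>F. ?a \<xi> * cnj (?a \<xi>) - d \<xi> * cnj (?a \<xi>) - ?a \<xi> * cnj (d \<xi>) + d \<xi> * cnj (d \<xi>))"
    by (simp add: sum.distrib sum_subtractf algebra_simps)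
  also have "\<dots> = complex_of_real (L2_sqnorm f - (\<Sum>\<xi>\<in>F. (cmod (?a \<xi>))\<^sup>2) + (\<Sum>\<xi>\<in>F. (cmod (?a \<xi> - d \<xi>))\<^sup>2))"
  proof -
    have pt: "complex_of_real ((cmod (?a \<xi> - d \<xi>))\<^sup>2) =
       ?a \<xi> * cnj (?a \<xi>) - d \<xi> * cnj (?a \<xi>) - ?a \<xi> * cnj (d \<xi>) + d \<xi> * cnj (d \<xi>)" for \<xi>
      unfolding complex_norm_square by (simp add: algebra_simps)
    show ?thesis unfolding of_real_add of_real_diff of_real_sum pt complex_norm_square[symmetric] ..
  qed
  finally show ?thesis using of_real_eq_iff by blast
qed

lemma bessel_inequality_finite:
  assumes f: "bdd_meas f" and F: "finite F"
  shows "(\<Sum>\<xi>\<in>F. (cmod (fourier \<mu> f \<xi>))\<^sup>2) \<le> L2_sqnorm f"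
  using L2_sqnorm_diff_trig_poly[OF f F, of "fourier \<mu> f"] L2_sqnorm_nonneg[of "\<lambda>x. f x - trig_poly F (fourier \<mu> f) x"] by simp

lemma bessel_inequality: "bdd_meas f \<Longrightarrow> sq_summable (fourier \<mu> f) \<and> l2_sqnorm (fourier \<mu> f) \<le> L2_sqnorm f"
  by (rule sq_summable_if_sums_le) (rule bessel_inequality_finite)

end




section \<open>Topology of the dual group\<close>

text \<open>Stone--Weierstrass needs a Hausdorff space as a type, but the product topology on
  \<open>'a \<Rightarrow> complex\<close> cannot be registered as \<open>t2_space\<close> (it would clash with the metric instance for
  countable \<open>'a\<close>). We therefore work on a copy of the function space.\<close>

typedef 'a cfun = "UNIV :: ('a \<Rightarrow> complex) set" by auto

instantiation cfun :: (type) topological_space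
begin
definition open_cfun :: "'a cfun set \<Rightarrow> bool" where "open_cfun S \<longleftrightarrow> open (Rep_cfun ` S)"
instance
proof
  show "open (UNIV :: 'a cfun set)" unfolding open_cfun_def
    by (simp add: type_definition.Rep_range[OF type_definition_cfun])
  fix S T :: "'a cfun set" assume "open S" "open T"
  moreover have "Rep_cfun ` (S \<inter> T) = Rep_cfun ` S \<inter> Rep_cfun ` T"
    by (intro image_Int inj_onI) (simp add: Rep_cfun_inject)
  ultimately show "open (S \<inter> T)" unfolding open_cfun_def by auto
next
  fix K :: "'a cfun set set" assume "\<forall>S\<in>K. open S"
  then show "open (\<Union>K)" unfolding open_cfun_def by (auto simp: image_Union)
qed
end

lemma open_vimage_Rep_cfun: "open A \<Longrightarrow> open (Rep_cfun -` A)"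
  unfolding open_cfun_def
  by (simp add: type_definition.Rep_range[OF type_definition_cfun] image_vimage_eq)

lemma continuous_on_Rep_cfun: "continuous_on S Rep_cfun"
proof -
  have "continuous_on UNIV Rep_cfun"
    unfolding continuous_on_open_vimage[OF open_UNIV] using open_vimage_Rep_cfun by auto
  then show ?thesis using continuous_on_subset by blast
qed

lemma continuous_on_Abs_cfun: "continuous_on S Abs_cfun"
proof -
  have eq: "Abs_cfun -` B = Rep_cfun ` B" for B
  proof (rule set_eqI)
    fix x
    have "x \<in> Rep_cfun ` B \<longleftrightarrow> Abs_cfun x \<in> B"
      by (metis Abs_cfun_inverse[OF UNIV_I] Rep_cfun_inverse image_iff)
    then show "x \<in> Abs_cfun -` B \<longleftrightarrow> x \<in> Rep_cfun ` B" by simp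
  qed
  have "continuous_on UNIV Abs_cfun"
    unfolding continuous_on_open_vimage[OF open_UNIV] open_cfun_def by (simp add: eq)
  then show ?thesis using continuous_on_subset by blast
qed

instance cfun :: (type) t2_space
proof
  fix f g :: "'a cfun" assume "f \<noteq> g"
  then have "Rep_cfun f \<noteq> Rep_cfun g" by (simp add: Rep_cfun_inject)
  then obtain i where i: "Rep_cfun f i \<noteq> Rep_cfun g i" by auto
  then obtain U V where UV: "open U" "open V" "Rep_cfun f i \<in> U" "Rep_cfun g i \<in> V" "U \<inter> V = {}"
    using hausdorff[OF i] by blast
  have c: "continuous_on UNIV (\<lambda>h::'a \<Rightarrow> complex. h i)" by simp
  have "open ((\<lambda>h::'a \<Rightarrow> complex. h i) -` U)" "open ((\<lambda>h::'a \<Rightarrow> complex. h i) -` V)"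
    using continuous_on_open_vimage[OF open_UNIV, THEN iffD1, OF c] UV by auto
  then have "open (Rep_cfun -` ((\<lambda>h. h i) -` U))" "open (Rep_cfun -` ((\<lambda>h. h i) -` V))"
    by (auto intro: open_vimage_Rep_cfun)
  then show "\<exists>U V. open U \<and> open V \<and> f \<in> U \<and> g \<in> V \<and> U \<inter> V = {}"
    using UV by (intro exI[of _ "Rep_cfun -` ((\<lambda>h. h i) -` U)"] exI[of _ "Rep_cfun -` ((\<lambda>h. h i) -` V)"]) auto
qed

lemma Stone_Weierstrass_function_space:
  fixes S :: "('a \<Rightarrow> complex) set" and f :: "('a \<Rightarrow> complex) \<Rightarrow> real"
  assumes "compact S" "\<And>c. P (\<lambda>x. c)" "\<And>g. P g \<Longrightarrow> continuous_on S g"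
    "\<And>g h. P g \<and> P h \<Longrightarrow> P (\<lambda>x. g x + h x)" "\<And>g h. P g \<and> P h \<Longrightarrow> P (\<lambda>x. g x * h x)"
    "\<And>x y. x \<in> S \<and> y \<in> S \<and> x \<noteq> y \<Longrightarrow> \<exists>g. P g \<and> g x \<noteq> g y"
    "continuous_on S f" "0 < e"
  shows "\<exists>g. P g \<and> (\<forall>x\<in>S. \<bar>f x - g x\<bar> < e)"
proof -
  define P' where "P' g \<longleftrightarrow> P (\<lambda>x. g (Abs_cfun x))" for g :: "'a cfun \<Rightarrow> real"
  have Rep_in: "Rep_cfun x \<in> S" if "x \<in> Abs_cfun ` S" for x
    using that by (auto simp: Abs_cfun_inverse)
  have comp_Rep: "continuous_on (Abs_cfun ` S) (\<lambda>x. g (Rep_cfun x))" if "continuous_on S g" for g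
    by (rule continuous_on_compose2[OF that continuous_on_Rep_cfun]) (use Rep_in in blast)
  have "\<exists>g. P' g \<and> (\<forall>x\<in>Abs_cfun ` S. \<bar>f (Rep_cfun x) - g x\<bar> < e)"
  proof (rule Stone_Weierstrass_HOL)
    show "compact (Abs_cfun ` S)"
      by (rule compact_continuous_image[OF continuous_on_Abs_cfun assms(1)])
    show "continuous_on (Abs_cfun ` S) g" if "P' g" for g
      using comp_Rep[OF assms(3)[OF that[unfolded P'_def]]] by (simp add: Rep_cfun_inverse)
    show "\<exists>g. P' g \<and> g x \<noteq> g y"
      if xy: "x \<in> Abs_cfun ` S \<and> y \<in> Abs_cfun ` S \<and> x \<noteq> y" for x y
    proof -
      have "Rep_cfun x \<in> S \<and> Rep_cfun y \<in> S \<and> Rep_cfun x \<noteq> Rep_cfun y"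
        using xy Rep_in by (simp add: Rep_cfun_inject)
      then obtain g where "P g" "g (Rep_cfun x) \<noteq> g (Rep_cfun y)" using assms(6) by blast
      then show ?thesis
        unfolding P'_def by (intro exI[of _ "\<lambda>x. g (Rep_cfun x)"]) (simp add: Abs_cfun_inverse)
    qed
    show "continuous_on (Abs_cfun ` S) (\<lambda>x. f (Rep_cfun x))" by (rule comp_Rep[OF assms(7)])
  qed (simp_all add: P'_def assms(2,4,5,8))
  then obtain g where "P' g" "\<forall>x\<in>Abs_cfun ` S. \<bar>f (Rep_cfun x) - g x\<bar> < e" by blast
  then show ?thesis
    unfolding P'_def by (intro exI[of _ "\<lambda>x. g (Abs_cfun x)"]) (auto simp: Abs_cfun_inverse)
qed

lemma continuous_on_coordinate: "continuous_on S (\<lambda>h::'a \<Rightarrow> 'b::topological_space. h i)"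
  by (rule continuous_on_subset[OF continuous_on_product_coordinates subset_UNIV])

lemma closed_dual_group: "closed (dual_group :: ('x::linordered_ab_group_add \<Rightarrow> complex) set)"
proof -
  have e: "dual_group = (\<Inter>\<xi>. {\<gamma>::'x \<Rightarrow> complex. cmod (\<gamma> \<xi>) = 1}) \<inter>
      (\<Inter>a. \<Inter>b. {\<gamma>::'x \<Rightarrow> complex. \<gamma> (a + b) = \<gamma> a * \<gamma> b})"
    unfolding dual_group_def by auto
  have closed_norm: "closed {\<gamma>::'x \<Rightarrow> complex. cmod (\<gamma> \<xi>) = 1}" for \<xi>
    by (intro closed_Collect_eq continuous_intros continuous_on_coordinate)
  have closed_hom: "closed {\<gamma>::'x \<Rightarrow> complex. \<gamma> (a + b) = \<gamma> a * \<gamma> b}" for a b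
    by (intro closed_Collect_eq continuous_intros continuous_on_coordinate)
  show ?thesis unfolding e using closed_norm closed_hom by (intro closed_Int closed_INT ballI) auto
qed

lemma compact_dual_group: "compact (dual_group :: ('x::linordered_ab_group_add \<Rightarrow> complex) set)"
proof -
  have "compactin (product_topology (\<lambda>_. euclidean) UNIV) (PiE UNIV (\<lambda>_::'x. sphere (0::complex) 1))"
    by (simp add: compactin_PiE)
  then have c: "compact (PiE UNIV (\<lambda>_::'x. sphere (0::complex) 1))"
    by (simp add: euclidean_product_topology)
  have "dual_group = (PiE UNIV (\<lambda>_::'x. sphere (0::complex) 1)) \<inter> dual_group"
    unfolding dual_group_def by (auto simp: PiE_UNIV_domain)
  then show ?thesis using compact_Int_closed[OF c closed_dual_group] by simp
qed

definition is_trig_poly :: "(('x::linordered_ab_group_add \<Rightarrow> complex) \<Rightarrow> complex) \<Rightarrow> bool" where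
  "is_trig_poly p \<longleftrightarrow> (\<exists>F c. finite F \<and> (\<forall>x\<in>dual_group. p x = trig_poly F c x))"

lemma is_trig_poly_trig_poly: "finite F \<Longrightarrow> is_trig_poly (trig_poly F c)"
  unfolding is_trig_poly_def by blast

lemma is_trig_poly_cong: "is_trig_poly p \<Longrightarrow> (\<And>x. x \<in> dual_group \<Longrightarrow> p x = q x) \<Longrightarrow> is_trig_poly q"
  unfolding is_trig_poly_def by metis

lemma is_trig_poly_char: "is_trig_poly (\<lambda>\<gamma>. c * \<gamma> \<xi>)"
proof -
  have "is_trig_poly (trig_poly {\<xi>} (\<lambda>_. c))" by (rule is_trig_poly_trig_poly) simp
  then show ?thesis by (rule is_trig_poly_cong) (simp add: trig_poly_def)
qed

lemma is_trig_poly_const: "is_trig_poly (\<lambda>\<gamma>. c)"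
  by (rule is_trig_poly_cong[OF is_trig_poly_char[of c 0]]) (simp add: dual_group_zero)

lemma trig_poly_extend: "finite H \<Longrightarrow> F \<subseteq> H \<Longrightarrow> trig_poly F c x = trig_poly H (\<lambda>\<xi>. if \<xi> \<in> F then c \<xi> else 0) x"
  unfolding trig_poly_def by (rule sum.mono_neutral_cong_left) auto

lemma is_trig_poly_add: "is_trig_poly p \<Longrightarrow> is_trig_poly q \<Longrightarrow> is_trig_poly (\<lambda>x. p x + q x)"
proof -
  assume "is_trig_poly p" "is_trig_poly q"
  then obtain F c G d where FG: "finite F" "finite G" "\<forall>x\<in>dual_group. p x = trig_poly F c x"
    "\<forall>x\<in>dual_group. q x = trig_poly G d x" unfolding is_trig_poly_def by blast
  let ?c = "\<lambda>\<xi>. if \<xi> \<in> F then c \<xi> else 0" and ?d = "\<lambda>\<xi>. if \<xi> \<in> G then d \<xi> else 0"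
  have "is_trig_poly (trig_poly (F \<union> G) (\<lambda>\<xi>. ?c \<xi> + ?d \<xi>))" using FG by (intro is_trig_poly_trig_poly) auto
  moreover have "trig_poly (F \<union> G) (\<lambda>\<xi>. ?c \<xi> + ?d \<xi>) x = p x + q x" if "x \<in> dual_group" for x
    using FG that trig_poly_extend[of "F \<union> G" F c x] trig_poly_extend[of "F \<union> G" G d x]
    by (simp add: trig_poly_def sum.distrib distrib_right)
  ultimately show ?thesis by (rule is_trig_poly_cong)
qed

lemma is_trig_poly_sum: "finite I \<Longrightarrow> (\<And>i. i \<in> I \<Longrightarrow> is_trig_poly (f i)) \<Longrightarrow> is_trig_poly (\<lambda>x. \<Sum>i\<in>I. f i x)"
  by (induction I rule: finite_induct) (auto intro: is_trig_poly_add is_trig_poly_const)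

lemma is_trig_poly_expand: "is_trig_poly p \<Longrightarrow> \<exists>F c. finite F \<and> (\<forall>x\<in>dual_group. p x = (\<Sum>\<xi>\<in>F. c \<xi> * x \<xi>))"
  unfolding is_trig_poly_def trig_poly_def by blast

lemma is_trig_poly_mult: "is_trig_poly p \<Longrightarrow> is_trig_poly q \<Longrightarrow> is_trig_poly (\<lambda>x. p x * q x)"
proof -
  assume pq: "is_trig_poly p" "is_trig_poly q"
  obtain F c where F: "finite F" "\<forall>x\<in>dual_group. p x = (\<Sum>\<xi>\<in>F. c \<xi> * x \<xi>)"
    using is_trig_poly_expand[OF pq(1)] by blast
  obtain G d where G: "finite G" "\<forall>x\<in>dual_group. q x = (\<Sum>\<eta>\<in>G. d \<eta> * x \<eta>)"
    using is_trig_poly_expand[OF pq(2)] by blast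
  note FG = F(1) G(1) F(2) G(2)
  have "is_trig_poly (\<lambda>x. \<Sum>\<xi>\<in>F. \<Sum>\<eta>\<in>G. (c \<xi> * d \<eta>) * x (\<xi> + \<eta>))"
    using FG by (intro is_trig_poly_sum is_trig_poly_char) auto
  moreover have "(\<Sum>\<xi>\<in>F. \<Sum>\<eta>\<in>G. (c \<xi> * d \<eta>) * x (\<xi> + \<eta>)) = p x * q x" if "x \<in> dual_group" for x
  proof -
    have "p x * q x = (\<Sum>\<xi>\<in>F. \<Sum>\<eta>\<in>G. (c \<xi> * x \<xi>) * (d \<eta> * x \<eta>))"
      using FG that by (simp add: sum_product)
    also have "\<dots> = (\<Sum>\<xi>\<in>F. \<Sum>\<eta>\<in>G. (c \<xi> * d \<eta>) * x (\<xi> + \<eta>))"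
      using that by (simp add: dual_group_add mult_ac)
    finally show ?thesis by simp
  qed
  ultimately show ?thesis by (rule is_trig_poly_cong)
qed

lemma is_trig_poly_cnj: "is_trig_poly p \<Longrightarrow> is_trig_poly (\<lambda>x. cnj (p x))"
proof -
  assume p: "is_trig_poly p"
  obtain F c where F: "finite F" "\<forall>x\<in>dual_group. p x = (\<Sum>\<xi>\<in>F. c \<xi> * x \<xi>)"
    using is_trig_poly_expand[OF p] by blast
  have "is_trig_poly (\<lambda>x. \<Sum>\<xi>\<in>F. cnj (c \<xi>) * x (- \<xi>))" using F by (intro is_trig_poly_sum is_trig_poly_char)
  moreover have "(\<Sum>\<xi>\<in>F. cnj (c \<xi>) * x (- \<xi>)) = cnj (p x)" if "x \<in> dual_group" for x
    using F that by (simp add: dual_group_uminus)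
  ultimately show ?thesis by (rule is_trig_poly_cong)
qed

lemma is_trig_poly_scale: "is_trig_poly p \<Longrightarrow> is_trig_poly (\<lambda>x. c * p x)"
  using is_trig_poly_mult[OF is_trig_poly_const] .

lemma is_trig_poly_Re: "is_trig_poly p \<Longrightarrow> is_trig_poly (\<lambda>x. complex_of_real (Re (p x)))"
proof -
  assume p: "is_trig_poly p"
  have "is_trig_poly (\<lambda>x. (1/2) * (p x + cnj (p x)))" by (intro is_trig_poly_scale is_trig_poly_add p is_trig_poly_cnj)
  then show ?thesis by (rule is_trig_poly_cong) (simp add: complex_add_cnj)
qed

lemma is_trig_poly_continuous: "is_trig_poly p \<Longrightarrow> continuous_on dual_group p"
proof -
  assume p: "is_trig_poly p"
  obtain F c where F: "finite F" "\<forall>x\<in>dual_group. p x = (\<Sum>\<xi>\<in>F. c \<xi> * x \<xi>)"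
    using is_trig_poly_expand[OF p] by blast
  have "continuous_on dual_group (\<lambda>x::'a \<Rightarrow> complex. \<Sum>\<xi>\<in>F. c \<xi> * x \<xi>)"
    by (intro continuous_intros continuous_on_coordinate)
  then show ?thesis using F(2) continuous_on_cong by force
qed


lemma trig_poly_uniform_approx:
  fixes f :: "('x::linordered_ab_group_add \<Rightarrow> complex) \<Rightarrow> real"
  assumes f: "continuous_on dual_group f" and e: "0 < e"
  obtains p where "is_trig_poly p" "\<And>x. x \<in> dual_group \<Longrightarrow> \<bar>f x - Re (p x)\<bar> < e"
proof -
  define P where "P g \<longleftrightarrow> (\<exists>p. is_trig_poly p \<and> (\<forall>x\<in>dual_group. g x = Re (p x)))"
    for g :: "('x \<Rightarrow> complex) \<Rightarrow> real"
  have "\<exists>g. P g \<and> (\<forall>x\<in>dual_group. \<bar>f x - g x\<bar> < e)"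
  proof (rule Stone_Weierstrass_function_space[OF compact_dual_group])
    show "P (\<lambda>x. c)" for c unfolding P_def using is_trig_poly_const[of "complex_of_real c"] by force
  next
    fix g assume "P g"
    then obtain p where p: "is_trig_poly p" "\<forall>x\<in>dual_group. g x = Re (p x)" unfolding P_def by blast
    have "continuous_on dual_group (\<lambda>x. Re (p x))"
      by (intro continuous_intros is_trig_poly_continuous[OF p(1)])
    then show "continuous_on dual_group g" using p(2) continuous_on_cong by force
  next
    fix g h assume "P g \<and> P h"
    then obtain p q where pq: "is_trig_poly p" "\<forall>x\<in>dual_group. g x = Re (p x)"
      "is_trig_poly q" "\<forall>x\<in>dual_group. h x = Re (q x)" unfolding P_def by blast
    show "P (\<lambda>x. g x + h x)" unfolding P_def
      using pq by (intro exI[of _ "\<lambda>x. p x + q x"]) (auto intro: is_trig_poly_add)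
    have "is_trig_poly (\<lambda>x. (1/2) * (p x * q x + p x * cnj (q x)))"
      by (intro is_trig_poly_scale is_trig_poly_add is_trig_poly_mult is_trig_poly_cnj pq)
    moreover have "g x * h x = Re ((1/2) * (p x * q x + p x * cnj (q x)))" if "x \<in> dual_group" for x
      using pq that by (simp add: field_simps)
    ultimately show "P (\<lambda>x. g x * h x)" unfolding P_def by blast
  next
    fix x y :: "'x \<Rightarrow> complex" assume "x \<in> dual_group \<and> y \<in> dual_group \<and> x \<noteq> y"
    then obtain \<xi> where "x \<xi> \<noteq> y \<xi>" by auto
    then have "Re (x \<xi>) \<noteq> Re (y \<xi>) \<or> Re (- \<i> * x \<xi>) \<noteq> Re (- \<i> * y \<xi>)"
      by (simp add: complex_eq_iff)
    then show "\<exists>g. P g \<and> g x \<noteq> g y"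
    proof
      assume "Re (x \<xi>) \<noteq> Re (y \<xi>)"
      then show ?thesis unfolding P_def using is_trig_poly_char[of 1 \<xi>]
        by (intro exI[of _ "\<lambda>u. Re (u \<xi>)"]) force
    next
      assume "Re (- \<i> * x \<xi>) \<noteq> Re (- \<i> * y \<xi>)"
      then show ?thesis unfolding P_def using is_trig_poly_char[of "- \<i>" \<xi>]
        by (intro exI[of _ "\<lambda>u. Re (- \<i> * u \<xi>)"]) force
    qed
  qed (use f e in auto)
  then obtain g p where "is_trig_poly p" "\<forall>x\<in>dual_group. g x = Re (p x)"
    "\<forall>x\<in>dual_group. \<bar>f x - g x\<bar> < e"
    unfolding P_def by blast
  then show ?thesis by (intro that[of p]) auto
qed


section \<open>Density of trigonometric polynomials in \<open>L\<^sup>2\<close>\<close>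

context haar_space
begin

lemma integrable_norm_sq: "bdd_meas f \<Longrightarrow> integrable \<mu> (\<lambda>x. (cmod (f x))\<^sup>2)"
proof -
  assume f: "bdd_meas f"
  then obtain C where C: "0 \<le> C" "\<forall>x\<in>space \<mu>. cmod (f x) \<le> C" using bdd_meas_bound by blast
  show ?thesis
  proof (rule integrable_const_bound[where B="C\<^sup>2"])
    show "AE x in \<mu>. norm ((cmod (f x))\<^sup>2) \<le> C\<^sup>2"
      using C by (intro AE_I2) (auto intro: power_mono)
    show "(\<lambda>x. (cmod (f x))\<^sup>2) \<in> borel_measurable \<mu>" using bdd_meas_measurable[OF f] by measurable
  qed
qed

lemma L2_sqnorm_cong: "(\<And>x. x \<in> space \<mu> \<Longrightarrow> f x = g x) \<Longrightarrow> L2_sqnorm f = L2_sqnorm g"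
  unfolding L2_sqnorm_def by (intro Bochner_Integration.integral_cong) auto

lemma L2_sqnorm_mono: "bdd_meas f \<Longrightarrow> bdd_meas g \<Longrightarrow> (\<And>x. x \<in> space \<mu> \<Longrightarrow> cmod (f x) \<le> cmod (g x)) \<Longrightarrow> L2_sqnorm f \<le> L2_sqnorm g"
  unfolding L2_sqnorm_def by (intro integral_mono integrable_norm_sq power_mono) auto

lemma L2_sqnorm_le_bound: "(\<And>x. x \<in> space \<mu> \<Longrightarrow> cmod (f x) \<le> B) \<Longrightarrow> L2_sqnorm f \<le> B\<^sup>2"
proof -
  assume b: "\<And>x. x \<in> space \<mu> \<Longrightarrow> cmod (f x) \<le> B"
  have "L2_sqnorm f \<le> integral\<^sup>L \<mu> (\<lambda>x. B\<^sup>2)"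
    unfolding L2_sqnorm_def
  proof (rule integral_mono_AE')
    show "integrable \<mu> (\<lambda>x. B\<^sup>2)" by simp
    show "AE x in \<mu>. (cmod (f x))\<^sup>2 \<le> B\<^sup>2" using b by (intro AE_I2) (auto intro: power_mono)
    show "AE x in \<mu>. 0 \<le> B\<^sup>2" by simp
  qed
  then show ?thesis by (simp add: prob_space)
qed

lemma L2_sqnorm_add_le: "bdd_meas f \<Longrightarrow> bdd_meas g \<Longrightarrow> L2_sqnorm (\<lambda>x. f x + g x) \<le> 2 * L2_sqnorm f + 2 * L2_sqnorm g"
proof -
  assume f: "bdd_meas f" and g: "bdd_meas g"
  have pt: "(cmod (a + b))\<^sup>2 \<le> 2 * (cmod a)\<^sup>2 + 2 * (cmod b)\<^sup>2" for a b :: complex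
  proof -
    have "(cmod (a + b))\<^sup>2 \<le> (cmod a + cmod b)\<^sup>2"
      by (intro power_mono norm_triangle_ineq) auto
    also have "\<dots> \<le> 2 * (cmod a)\<^sup>2 + 2 * (cmod b)\<^sup>2"
      using sum_squares_bound[of "cmod a" "cmod b"] by (simp add: power2_eq_square algebra_simps)
    finally show ?thesis .
  qed
  have "L2_sqnorm (\<lambda>x. f x + g x) \<le> integral\<^sup>L \<mu> (\<lambda>x. 2 * (cmod (f x))\<^sup>2 + 2 * (cmod (g x))\<^sup>2)"
  proof -
    have i: "integrable \<mu> (\<lambda>x. 2 * (cmod (f x))\<^sup>2 + 2 * (cmod (g x))\<^sup>2)"
      using integrable_norm_sq[OF f] integrable_norm_sq[OF g] by simp
    show ?thesis unfolding L2_sqnorm_def using pt i by (intro integral_mono integrable_norm_sq bdd_meas_add f g) auto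
  qed
  also have "\<dots> = 2 * L2_sqnorm f + 2 * L2_sqnorm g"
    unfolding L2_sqnorm_def using f g by (simp add: integrable_norm_sq)
  finally show ?thesis .
qed

lemma L2_sqnorm_scale: "L2_sqnorm (\<lambda>x. c * f x) = (cmod c)\<^sup>2 * L2_sqnorm f"
  unfolding L2_sqnorm_def by (simp add: norm_mult power_mult_distrib)

lemma bdd_meas_is_trig_poly: "is_trig_poly p \<Longrightarrow> bdd_meas p"
proof -
  assume "is_trig_poly p"
  then obtain F c where "finite F" "\<forall>x\<in>dual_group. p x = trig_poly F c x" unfolding is_trig_poly_def by blast
  then show ?thesis using bdd_meas_cong[OF bdd_meas_trig_poly_finite[of F c]] space_haar by auto
qed

definition trig_approx :: "(('x \<Rightarrow> complex) \<Rightarrow> complex) \<Rightarrow> bool" where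
  "trig_approx f \<longleftrightarrow> bdd_meas f \<and> (\<forall>e>0. \<exists>p. is_trig_poly p \<and> L2_sqnorm (\<lambda>x. f x - p x) < e)"

lemma trig_approx_is_trig_poly: "is_trig_poly p \<Longrightarrow> trig_approx p"
  unfolding trig_approx_def using bdd_meas_is_trig_poly by (auto intro!: exI[of _ p] simp: L2_sqnorm_def)

lemma trig_approx_add: "trig_approx f \<Longrightarrow> trig_approx g \<Longrightarrow> trig_approx (\<lambda>x. f x + g x)"
proof -
  assume f: "trig_approx f" and g: "trig_approx g"
  have "\<exists>p. is_trig_poly p \<and> L2_sqnorm (\<lambda>x. (f x + g x) - p x) < e" if e: "e > 0" for e
  proof -
    obtain p q where pq: "is_trig_poly p" "L2_sqnorm (\<lambda>x. f x - p x) < e/4" "is_trig_poly q" "L2_sqnorm (\<lambda>x. g x - q x) < e/4"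
      using f g e unfolding trig_approx_def by (meson divide_pos_pos zero_less_numeral)
    have "L2_sqnorm (\<lambda>x. (f x + g x) - (p x + q x)) = L2_sqnorm (\<lambda>x. (f x - p x) + (g x - q x))"
      by (simp add: algebra_simps)
    also have "\<dots> \<le> 2 * L2_sqnorm (\<lambda>x. f x - p x) + 2 * L2_sqnorm (\<lambda>x. g x - q x)"
      using f g unfolding trig_approx_def
      by (intro L2_sqnorm_add_le bdd_meas_diff bdd_meas_is_trig_poly[OF pq(1)] bdd_meas_is_trig_poly[OF pq(3)]) auto
    also have "\<dots> < e" using pq by simp
    finally show ?thesis using pq by (intro exI[of _ "\<lambda>x. p x + q x"]) (auto intro: is_trig_poly_add)
  qed
  then show ?thesis using f g unfolding trig_approx_def by (auto intro: bdd_meas_add)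
qed

lemma trig_approx_scale: "trig_approx f \<Longrightarrow> trig_approx (\<lambda>x. c * f x)"
proof (cases "c = 0")
  case True
  then show ?thesis using trig_approx_is_trig_poly[OF is_trig_poly_const[of 0]] by simp
next
  case False
  assume f: "trig_approx f"
  have "\<exists>p. is_trig_poly p \<and> L2_sqnorm (\<lambda>x. c * f x - p x) < e" if e: "e > 0" for e
  proof -
    have "e / (cmod c)\<^sup>2 > 0" using e False by simp
    then obtain p where p: "is_trig_poly p" "L2_sqnorm (\<lambda>x. f x - p x) < e / (cmod c)\<^sup>2"
      using f unfolding trig_approx_def by blast
    have "L2_sqnorm (\<lambda>x. c * f x - c * p x) = (cmod c)\<^sup>2 * L2_sqnorm (\<lambda>x. f x - p x)"
      using L2_sqnorm_scale[of c "\<lambda>x. f x - p x"] by (simp add: algebra_simps)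
    also have "\<dots> < e" using p(2) False by (simp add: field_simps)
    finally show ?thesis using p by (intro exI[of _ "\<lambda>x. c * p x"]) (auto intro: is_trig_poly_scale)
  qed
  then show ?thesis using f unfolding trig_approx_def by (auto intro: bdd_meas_mult bdd_meas_const)
qed

lemma trig_approx_diff: "trig_approx f \<Longrightarrow> trig_approx g \<Longrightarrow> trig_approx (\<lambda>x. f x - g x)"
  using trig_approx_add[of f "\<lambda>x. (-1) * g x"] trig_approx_scale[of g "-1"] by simp

lemma trig_approx_zero: "trig_approx (\<lambda>x. 0)"
  using trig_approx_is_trig_poly[OF is_trig_poly_const[of 0]] .

lemma trig_approx_const: "trig_approx (\<lambda>x. c)"
  using trig_approx_is_trig_poly[OF is_trig_poly_const[of c]] .

lemma trig_approx_sum: "finite I \<Longrightarrow> (\<And>i. i \<in> I \<Longrightarrow> trig_approx (f i)) \<Longrightarrow> trig_approx (\<lambda>x. \<Sum>i\<in>I. f i x)"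
  by (induction I rule: finite_induct) (auto intro: trig_approx_add trig_approx_zero)

lemma trig_approx_cong: "trig_approx f \<Longrightarrow> (\<And>x. x \<in> space \<mu> \<Longrightarrow> f x = g x) \<Longrightarrow> trig_approx g"
proof -
  assume f: "trig_approx f" and eq: "\<And>x. x \<in> space \<mu> \<Longrightarrow> f x = g x"
  have "L2_sqnorm (\<lambda>x. g x - p x) = L2_sqnorm (\<lambda>x. f x - p x)" for p using eq by (intro L2_sqnorm_cong) auto
  then show ?thesis using f bdd_meas_cong[of f g] eq unfolding trig_approx_def by auto
qed

lemma trig_approx_closed:
  assumes f: "bdd_meas f" and lim: "\<And>e. e > 0 \<Longrightarrow> \<exists>g. trig_approx g \<and> L2_sqnorm (\<lambda>x. f x - g x) < e"
  shows "trig_approx f"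
proof -
  have "\<exists>p. is_trig_poly p \<and> L2_sqnorm (\<lambda>x. f x - p x) < e" if e: "e > 0" for e
  proof -
    obtain g where g: "trig_approx g" "L2_sqnorm (\<lambda>x. f x - g x) < e/4" using lim[of "e/4"] e by auto
    have "e/4 > 0" using e by simp
    then obtain p where p: "is_trig_poly p" "L2_sqnorm (\<lambda>x. g x - p x) < e/4" using g(1) unfolding trig_approx_def by blast
    have "L2_sqnorm (\<lambda>x. f x - p x) = L2_sqnorm (\<lambda>x. (f x - g x) + (g x - p x))" by simp
    also have "\<dots> \<le> 2 * L2_sqnorm (\<lambda>x. f x - g x) + 2 * L2_sqnorm (\<lambda>x. g x - p x)"
      using f g unfolding trig_approx_def by (intro L2_sqnorm_add_le bdd_meas_diff bdd_meas_is_trig_poly[OF p(1)]) auto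
    also have "\<dots> < e" using g p by simp
    finally show ?thesis using p by blast
  qed
  then show ?thesis using f unfolding trig_approx_def by auto
qed

end



definition cutoff :: "'a::metric_space set \<Rightarrow> nat \<Rightarrow> 'a \<Rightarrow> real" where
  "cutoff U m z = (if U = UNIV then 1 else min 1 (real m * infdist z (- U)))"

lemma cutoff_bounds: "0 \<le> cutoff U m z \<and> cutoff U m z \<le> 1"
  unfolding cutoff_def by (auto simp: infdist_nonneg)

lemma continuous_on_cutoff: "continuous_on A (cutoff U m)"
  unfolding cutoff_def by (cases "U = UNIV") (auto intro!: continuous_intros)

lemma cutoff_tendsto_indicator:
  assumes "open U"
  shows "(\<lambda>m. cutoff U m z) \<longlonglongrightarrow> indicator U z"
proof (cases "U = UNIV \<or> z \<notin> U")
  case True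
  then have "cutoff U m z = indicator U z" for m by (auto simp: cutoff_def)
  then show ?thesis by simp
next
  case False
  then have z: "z \<in> U" and U: "U \<noteq> UNIV" by auto
  have d: "infdist z (- U) > 0"
    using z U assms by (intro infdist_pos_not_in_closed) auto
  obtain N :: nat where N: "1 / infdist z (- U) < real N" using reals_Archimedean2 by blast
  have "cutoff U m z = 1" if "N \<le> m" for m
  proof -
    have "1 / infdist z (- U) < real m" using N that by linarith
    then have "1 \<le> real m * infdist z (- U)" using d by (simp add: field_simps)
    then show ?thesis using U by (simp add: cutoff_def)
  qed
  then have "\<forall>\<^sub>F m in sequentially. cutoff U m z = 1" by (rule eventually_sequentiallyI)
  then show ?thesis using z by (simp add: tendsto_eventually)
qed


definition cylinder :: "'x set \<Rightarrow> ('x \<Rightarrow> complex set) \<Rightarrow> ('x::linordered_ab_group_add \<Rightarrow> complex) set" where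
  "cylinder F U = {\<gamma> \<in> dual_group. \<forall>\<xi>\<in>F. \<gamma> \<xi> \<in> U \<xi>}"

definition cylinders :: "('x::linordered_ab_group_add \<Rightarrow> complex) set set" where
  "cylinders = {cylinder F U | F U. finite F \<and> (\<forall>\<xi>\<in>F. open (U \<xi>))}"

lemma cylinders_Pow: "cylinders \<subseteq> Pow dual_group"
  unfolding cylinders_def cylinder_def by auto

lemma cylinders_Int_stable: "Int_stable (cylinders :: ('x::linordered_ab_group_add \<Rightarrow> complex) set set)"
  unfolding Int_stable_def
proof (intro ballI)
  fix a b :: "('x \<Rightarrow> complex) set" assume "a \<in> cylinders" "b \<in> cylinders"
  then obtain F U G V where FG: "a = cylinder F U" "b = cylinder G V" "finite F" "finite G"
    "\<forall>\<xi>\<in>F. open (U \<xi>)" "\<forall>\<xi>\<in>G. open (V \<xi>)" unfolding cylinders_def by blast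
  define W where "W \<xi> = (if \<xi> \<in> F then U \<xi> else UNIV) \<inter> (if \<xi> \<in> G then V \<xi> else UNIV)" for \<xi> :: 'x
  have "a \<inter> b = cylinder (F \<union> G) W" unfolding FG cylinder_def W_def by auto
  moreover have "\<forall>\<xi>\<in>F \<union> G. open (W \<xi>)" unfolding W_def using FG by auto
  ultimately show "a \<inter> b \<in> cylinders" unfolding cylinders_def using FG by blast
qed

context haar_space
begin

lemma cylinder_sets: "finite F \<Longrightarrow> (\<forall>\<xi>\<in>F. open (U \<xi>)) \<Longrightarrow> cylinder F U \<in> sets \<mu>"
proof -
  assume F: "finite F" "\<forall>\<xi>\<in>F. open (U \<xi>)"
  have "cylinder F U = {\<gamma> \<in> space \<mu>. \<forall>\<xi>\<in>F. \<gamma> \<xi> \<in> U \<xi>}" unfolding cylinder_def space_haar ..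
  also have "\<dots> \<in> sets \<mu>"
  proof (rule sets.sets_Collect_finite_All[OF _ F(1)])
    fix \<xi> assume "\<xi> \<in> F"
    then have "U \<xi> \<in> sets borel" using F by auto
    from measurable_sets[OF measurable_char this] show "{\<gamma> \<in> space \<mu>. \<gamma> \<xi> \<in> U \<xi>} \<in> sets \<mu>"
      by (simp add: vimage_def Int_def conj_commute)
  qed
  finally show ?thesis .
qed

lemma cylinders_sets: "cylinders \<subseteq> sets \<mu>"
  unfolding cylinders_def using cylinder_sets by blast

lemma sets_haar_sigma_cylinders: "sets \<mu> \<subseteq> sigma_sets dual_group cylinders"
proof -
  let ?M = "sigma dual_group cylinders"
  have spM: "space ?M = dual_group" and sM: "sets ?M = sigma_sets dual_group cylinders"
    using space_measure_of[OF cylinders_Pow] sets_measure_of[OF cylinders_Pow] by auto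
  have "eval_sets \<subseteq> sigma_sets dual_group cylinders"
  proof
    fix y assume "y \<in> eval_sets"
    then obtain \<xi> A where y: "y = {\<gamma> \<in> dual_group. \<gamma> \<xi> \<in> A}" "A \<in> sets borel" by blast
    have "(\<lambda>\<gamma>. \<gamma> \<xi>) \<in> borel_measurable ?M"
    proof (rule borel_measurableI)
      fix S :: "complex set" assume "open S"
      have "(\<lambda>\<gamma>. \<gamma> \<xi>) -` S \<inter> space ?M = cylinder {\<xi>} (\<lambda>_. S)" unfolding spM cylinder_def by auto
      also have "\<dots> \<in> cylinders" unfolding cylinders_def using \<open>open S\<close> by blast
      finally show "(\<lambda>\<gamma>. \<gamma> \<xi>) -` S \<inter> space ?M \<in> sets ?M" unfolding sM by auto
    qed
    from measurable_sets[OF this y(2)] show "y \<in> sigma_sets dual_group cylinders"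
      unfolding y(1) sM spM by (simp add: vimage_def Int_def conj_commute)
  qed
  then show ?thesis unfolding sets_haar by (rule sigma_sets_mono)
qed

lemma sigma_cylinders_sets: "sigma_sets dual_group cylinders \<subseteq> sets \<mu>"
  using sets.sigma_sets_subset[OF cylinders_sets] space_haar by simp

lemma bdd_meas_indicator: "A \<in> sets \<mu> \<Longrightarrow> bdd_meas (\<lambda>x. indicator A x :: complex)"
  unfolding bdd_meas_def by (auto intro!: exI[of _ 1] simp: indicator_def)

lemma L2_sqnorm_tendsto_0_dominated:
  assumes g: "\<And>m. g m \<in> borel_measurable \<mu>" and f: "f \<in> borel_measurable \<mu>"
    and bound: "\<And>m x. x \<in> space \<mu> \<Longrightarrow> cmod (f x - g m x) \<le> C"
    and lim: "\<And>x. x \<in> space \<mu> \<Longrightarrow> (\<lambda>m. g m x) \<longlonglongrightarrow> f x"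
  shows "(\<lambda>m. L2_sqnorm (\<lambda>x. f x - g m x)) \<longlonglongrightarrow> 0"
proof -
  have "(\<lambda>m. integral\<^sup>L \<mu> (\<lambda>x. (cmod (f x - g m x))\<^sup>2)) \<longlonglongrightarrow> integral\<^sup>L \<mu> (\<lambda>x. 0::real)"
  proof (rule integral_dominated_convergence[where w="\<lambda>x. C\<^sup>2"])
    show "AE x in \<mu>. (\<lambda>m. (cmod (f x - g m x))\<^sup>2) \<longlonglongrightarrow> 0"
    proof (rule AE_I2)
      fix x assume "x \<in> space \<mu>"
      then have "(\<lambda>m. (cmod (f x - g m x))\<^sup>2) \<longlonglongrightarrow> (cmod (f x - f x))\<^sup>2"
        by (intro tendsto_intros lim)
      then show "(\<lambda>m. (cmod (f x - g m x))\<^sup>2) \<longlonglongrightarrow> 0" by simp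
    qed
    show "AE x in \<mu>. norm ((cmod (f x - g m x))\<^sup>2) \<le> C\<^sup>2" for m
      using bound by (intro AE_I2) (auto intro: power_mono)
    show "(\<lambda>x. (cmod (f x - g m x))\<^sup>2) \<in> borel_measurable \<mu>" for m using f g by measurable
  qed simp_all
  then show ?thesis unfolding L2_sqnorm_def by simp
qed

lemma trig_approx_continuous:
  fixes f :: "('x \<Rightarrow> complex) \<Rightarrow> real"
  assumes cont: "continuous_on dual_group f" and meas: "f \<in> borel_measurable \<mu>"
  shows "trig_approx (\<lambda>x. complex_of_real (f x))"
  unfolding trig_approx_def
proof (intro conjI allI impI)
  have "bounded (f ` dual_group)"
    by (rule compact_imp_bounded[OF compact_continuous_image[OF cont compact_dual_group]])
  then obtain B where "\<forall>y\<in>f ` dual_group. \<bar>y\<bar> \<le> B" unfolding bounded_real by blast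
  then show "bdd_meas (\<lambda>x. complex_of_real (f x))"
    unfolding bdd_meas_def space_haar using meas by auto
  fix e :: real assume "e > 0"
  then have "sqrt (e / 2) > 0" by simp
  then obtain p where p: "is_trig_poly p" "\<And>x. x \<in> dual_group \<Longrightarrow> \<bar>f x - Re (p x)\<bar> < sqrt (e / 2)"
    using trig_poly_uniform_approx[OF cont] by metis
  have "L2_sqnorm (\<lambda>x. complex_of_real (f x) - complex_of_real (Re (p x))) \<le> (sqrt (e / 2))\<^sup>2"
  proof (rule L2_sqnorm_le_bound)
    fix x assume "x \<in> space \<mu>"
    then have "\<bar>f x - Re (p x)\<bar> < sqrt (e / 2)" using p(2) space_haar by blast
    then show "cmod (complex_of_real (f x) - complex_of_real (Re (p x))) \<le> sqrt (e / 2)"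
      by (simp flip: of_real_diff)
  qed
  then show "\<exists>q. is_trig_poly q \<and> L2_sqnorm (\<lambda>x. complex_of_real (f x) - q x) < e"
    using \<open>e > 0\<close> is_trig_poly_Re[OF p(1)] by (intro exI[of _ "\<lambda>x. complex_of_real (Re (p x))"]) simp
qed

lemma indicator_cylinder:
  assumes "finite F" "\<gamma> \<in> dual_group"
  shows "indicator (cylinder F U) \<gamma> = (\<Prod>\<xi>\<in>F. indicator (U \<xi>) (\<gamma> \<xi>) :: real)"
proof (cases "\<forall>\<xi>\<in>F. \<gamma> \<xi> \<in> U \<xi>")
  case True then show ?thesis using assms by (simp add: cylinder_def)
next
  case False
  then obtain \<xi> where \<xi>: "\<xi> \<in> F" "\<gamma> \<xi> \<notin> U \<xi>" by blast
  then have "(\<Prod>\<xi>\<in>F. indicator (U \<xi>) (\<gamma> \<xi>) :: real) = 0"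
    using assms(1) by (intro prod_zero bexI[of _ \<xi>]) auto
  moreover have "indicator (cylinder F U) \<gamma> = (0::real)" using \<xi> by (auto simp: cylinder_def indicator_def)
  ultimately show ?thesis by simp
qed

lemma trig_approx_cylinder:
  assumes F: "finite F" "\<forall>\<xi>\<in>F. open (U \<xi>)"
  shows "trig_approx (\<lambda>x. indicator (cylinder F U) x :: complex)"
proof (rule trig_approx_closed)
  let ?S = "cylinder F U"
  show "bdd_meas (\<lambda>x. indicator ?S x :: complex)" by (rule bdd_meas_indicator[OF cylinder_sets[OF F]])
  define \<Phi> where "\<Phi> m \<gamma> = (\<Prod>\<xi>\<in>F. cutoff (U \<xi>) m (\<gamma> \<xi>))" for m \<gamma>
  have \<Phi>_meas: "\<Phi> m \<in> borel_measurable \<mu>" for m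
    unfolding \<Phi>_def by (intro borel_measurable_prod borel_measurable_continuous_on[OF continuous_on_cutoff measurable_char])
  have \<Phi>_approx: "trig_approx (\<lambda>x. complex_of_real (\<Phi> m x))" for m
  proof (rule trig_approx_continuous[OF _ \<Phi>_meas])
    show "continuous_on dual_group (\<Phi> m)"
      unfolding \<Phi>_def by (intro continuous_on_prod continuous_on_compose2[OF continuous_on_cutoff continuous_on_coordinate]) auto
  qed
  have "(\<lambda>m. L2_sqnorm (\<lambda>x. indicator ?S x - complex_of_real (\<Phi> m x))) \<longlonglongrightarrow> 0"
  proof (rule L2_sqnorm_tendsto_0_dominated[where C=1])
    show "(\<lambda>x. indicator ?S x :: complex) \<in> borel_measurable \<mu>"
      using cylinder_sets[OF F] by measurable
    show "(\<lambda>x. complex_of_real (\<Phi> m x)) \<in> borel_measurable \<mu>" for m using \<Phi>_meas by measurable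
    fix x assume "x \<in> space \<mu>"
    then have x: "x \<in> dual_group" using space_haar by simp
    have "0 \<le> \<Phi> m x \<and> \<Phi> m x \<le> 1" for m
      unfolding \<Phi>_def using cutoff_bounds by (auto intro: prod_nonneg prod_le_1)
    then have "\<bar>indicator ?S x - \<Phi> m x\<bar> \<le> 1" for m by (auto simp: indicator_def)
    moreover have "indicator ?S x - complex_of_real (\<Phi> m x) = complex_of_real (indicator ?S x - \<Phi> m x)"
      for m by (simp add: indicator_def)
    ultimately show "cmod (indicator ?S x - complex_of_real (\<Phi> m x)) \<le> 1" for m
      by (simp only: norm_of_real)
    have "(\<lambda>m. \<Phi> m x) \<longlonglongrightarrow> indicator ?S x"
      unfolding \<Phi>_def indicator_cylinder[OF F(1) x] using F by (intro tendsto_prod cutoff_tendsto_indicator) auto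
    moreover have "complex_of_real (indicator ?S x) = indicator ?S x" by (simp add: indicator_def)
    ultimately show "(\<lambda>m. complex_of_real (\<Phi> m x)) \<longlonglongrightarrow> indicator ?S x"
      using tendsto_of_real[of "\<lambda>m. \<Phi> m x"] by metis
  qed
  then show "\<exists>g. trig_approx g \<and> L2_sqnorm (\<lambda>x. indicator ?S x - g x) < e" if "e > 0" for e
  proof -
    obtain N where "\<forall>m\<ge>N. norm (L2_sqnorm (\<lambda>x. indicator ?S x - complex_of_real (\<Phi> m x)) - 0) < e"
      using LIMSEQ_D[OF _ \<open>e > 0\<close>] \<open>_ \<longlonglongrightarrow> 0\<close> by blast
    then have "L2_sqnorm (\<lambda>x. indicator ?S x - complex_of_real (\<Phi> N x)) < e" by auto
    then show ?thesis using \<Phi>_approx by blast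
  qed
qed

lemma trig_approx_indicator_disjoint_UN:
  fixes A :: "nat \<Rightarrow> ('x \<Rightarrow> complex) set"
  assumes A: "\<And>i. A i \<in> sets \<mu>" "disjoint_family A"
    and approx: "\<And>i. trig_approx (\<lambda>x. indicator (A i) x :: complex)"
  shows "trig_approx (\<lambda>x. indicator (\<Union>i. A i) x :: complex)"
proof (rule trig_approx_closed)
  let ?U = "\<Union>i. A i"
  have U: "?U \<in> sets \<mu>" using A by blast
  show "bdd_meas (\<lambda>x. indicator ?U x :: complex)" by (rule bdd_meas_indicator[OF U])
  define B where "B n = (\<Union>i\<in>{..<n}. A i)" for n
  have B: "B n \<in> sets \<mu>" "B n \<subseteq> ?U" for n unfolding B_def using A(1) by blast+
  have "(\<lambda>n. measure \<mu> (B n)) \<longlonglongrightarrow> measure \<mu> (\<Union>n. B n)"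
  proof (rule finite_Lim_measure_incseq)
    show "range B \<subseteq> sets \<mu>" using B by blast
    show "incseq B" by (rule incseq_SucI) (auto simp: B_def lessThan_Suc)
  qed
  moreover have "(\<Union>n. B n) = ?U" unfolding B_def by blast
  ultimately have lim: "(\<lambda>n. measure \<mu> (B n)) \<longlonglongrightarrow> measure \<mu> ?U" by simp
  fix e :: real assume "e > 0"
  obtain n where "\<forall>m\<ge>n. norm (measure \<mu> (B m) - measure \<mu> ?U) < e"
    using LIMSEQ_D[OF lim \<open>e > 0\<close>] by blast
  then have "\<bar>measure \<mu> (B n) - measure \<mu> ?U\<bar> < e" by auto
  then have n: "measure \<mu> ?U - measure \<mu> (B n) < e" by linarith
  have "trig_approx (\<lambda>x. \<Sum>i\<in>{..<n}. indicator (A i) x :: complex)"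
    by (rule trig_approx_sum) (simp_all add: approx)
  moreover have "(\<Sum>i\<in>{..<n}. indicator (A i) x :: complex) = indicator (B n) x" for x
    unfolding B_def using A(2)
    by (subst indicator_UN_disjoint) (auto simp: disjoint_family_on_def disjoint_family_on_mono)
  ultimately have approx_B: "trig_approx (\<lambda>x. indicator (B n) x :: complex)" by simp
  have "L2_sqnorm (\<lambda>x. indicator ?U x - indicator (B n) x) = integral\<^sup>L \<mu> (indicator (?U - B n))"
    unfolding L2_sqnorm_def using B(2)[of n]
    by (intro Bochner_Integration.integral_cong) (auto simp: indicator_def)
  also have "\<dots> = measure \<mu> (?U - B n)"
    using U B(1) by (simp add: Int_absorb2 sets.sets_into_space)
  also have "\<dots> = measure \<mu> ?U - measure \<mu> (B n)"
    using U B by (intro finite_measure_Diff) auto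
  finally show "\<exists>g. trig_approx g \<and> L2_sqnorm (\<lambda>x. indicator ?U x - g x) < e"
    using n approx_B by (intro exI[of _ "\<lambda>x. indicator (B n) x"]) simp
qed

lemma trig_approx_indicator:
  assumes "A \<in> sets \<mu>"
  shows "trig_approx (\<lambda>x. indicator A x :: complex)"
proof -
  have "A \<in> sigma_sets dual_group cylinders" using assms sets_haar_sigma_cylinders by blast
  with cylinders_Int_stable cylinders_Pow show ?thesis
  proof (induction rule: sigma_sets_induct_disjoint)
    case (basic A)
    then show ?case unfolding cylinders_def using trig_approx_cylinder by blast
  next
    case empty
    then show ?case using trig_approx_zero by simp
  next
    case (compl A)
    have "trig_approx (\<lambda>x. 1 - indicator A x :: complex)" using compl by (intro trig_approx_diff trig_approx_const)
    then show ?case by (rule trig_approx_cong) (auto simp: space_haar indicator_def)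
  next
    case (union A)
    have "A i \<in> sets \<mu>" for i using union sigma_cylinders_sets by blast
    with union show ?case by (intro trig_approx_indicator_disjoint_UN) auto
  qed
qed

end


context haar_space
begin

lemma trig_approx_real:
  fixes g :: "('x \<Rightarrow> complex) \<Rightarrow> real"
  assumes g: "g \<in> borel_measurable \<mu>" and C: "\<And>x. x \<in> space \<mu> \<Longrightarrow> \<bar>g x\<bar> \<le> C"
  shows "trig_approx (\<lambda>x. complex_of_real (g x))"
proof (rule trig_approx_closed)
  show bmg: "bdd_meas (\<lambda>x. complex_of_real (g x))"
    unfolding bdd_meas_def using g C by (auto simp: norm_of_real)
  fix e :: real assume e: "e > 0"
  obtain n :: nat where n: "1 / e < real n" using reals_Archimedean2 by blast
  have npos: "real n > 0" using n e by (smt (verit) divide_pos_pos)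
  define M :: int where "M = \<lceil>real n * \<bar>C\<bar>\<rceil> + 1"
  define K where "K = {-M..M}"
  define A where "A k = {x \<in> space \<mu>. \<lfloor>real n * g x\<rfloor> = k}" for k
  have As: "A k \<in> sets \<mu>" for k unfolding A_def using g by measurable
  define s where "s x = (\<Sum>k\<in>K. complex_of_real (real_of_int k / real n) * indicator (A k) x)" for x
  have aps: "trig_approx s" unfolding s_def K_def
    by (intro trig_approx_sum trig_approx_scale trig_approx_indicator As) auto
  have sx: "s x = complex_of_real (real_of_int \<lfloor>real n * g x\<rfloor> / real n)" if x: "x \<in> space \<mu>" for x
  proof -
    let ?k = "\<lfloor>real n * g x\<rfloor>"
    have "\<bar>real n * g x\<bar> \<le> real n * \<bar>C\<bar>"
      using C[OF x] npos by (simp add: abs_mult mult_left_mono)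
    then have "\<bar>real_of_int ?k\<bar> \<le> real n * \<bar>C\<bar> + 1" by linarith
    moreover have "real n * \<bar>C\<bar> \<le> real_of_int \<lceil>real n * \<bar>C\<bar>\<rceil>" by (rule le_of_int_ceiling)
    ultimately have "?k \<in> K" unfolding K_def M_def by (simp add: abs_le_iff) linarith
    have "s x = (\<Sum>k\<in>K. if k = ?k then complex_of_real (real_of_int k / real n) else 0)"
      unfolding s_def using x by (intro sum.cong) (auto simp: A_def indicator_def)
    also have "\<dots> = complex_of_real (real_of_int ?k / real n)"
      using \<open>?k \<in> K\<close> unfolding K_def by (simp add: sum.delta')
    finally show ?thesis .
  qed
  have "L2_sqnorm (\<lambda>x. complex_of_real (g x) - s x) \<le> (1 / real n)\<^sup>2"
  proof (rule L2_sqnorm_le_bound)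
    fix x assume x: "x \<in> space \<mu>"
    let ?y = "real n * g x"
    have f1: "real_of_int \<lfloor>?y\<rfloor> \<le> ?y" "?y < real_of_int \<lfloor>?y\<rfloor> + 1" by linarith+
    have "g x - real_of_int \<lfloor>?y\<rfloor> / real n = (?y - real_of_int \<lfloor>?y\<rfloor>) / real n"
      using npos by (simp add: field_simps)
    moreover have "0 \<le> ?y - real_of_int \<lfloor>?y\<rfloor>" "?y - real_of_int \<lfloor>?y\<rfloor> \<le> 1" using f1 by linarith+
    ultimately have "\<bar>g x - real_of_int \<lfloor>?y\<rfloor> / real n\<bar> \<le> 1 / real n"
      using npos by (simp add: divide_right_mono)
    then show "cmod (complex_of_real (g x) - s x) \<le> 1 / real n"
      unfolding sx[OF x] of_real_diff[symmetric] norm_of_real .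
  qed
  also have "(1 / real n)\<^sup>2 \<le> 1 / real n"
    using npos n e by (simp add: power2_eq_square divide_le_eq_1 field_simps)
  also have "1 / real n < e" using n e npos by (simp add: field_simps)
  finally show "\<exists>g'. trig_approx g' \<and> L2_sqnorm (\<lambda>x. complex_of_real (g x) - g' x) < e" using aps by blast
qed

lemma trig_approx_bdd_meas: assumes f: "bdd_meas f" shows "trig_approx f"
proof -
  obtain C where C: "\<forall>x\<in>space \<mu>. cmod (f x) \<le> C" using f unfolding bdd_meas_def by auto
  have mf: "f \<in> borel_measurable \<mu>" using f unfolding bdd_meas_def by auto
  have r: "trig_approx (\<lambda>x. complex_of_real (Re (f x)))"
    by (rule trig_approx_real[where C=C]) (use mf C in \<open>auto intro: order_trans[OF abs_Re_le_cmod]\<close>)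
  have i: "trig_approx (\<lambda>x. complex_of_real (Im (f x)))"
    by (rule trig_approx_real[where C=C]) (use mf C in \<open>auto intro: order_trans[OF abs_Im_le_cmod]\<close>)
  have "trig_approx (\<lambda>x. complex_of_real (Re (f x)) + \<i> * complex_of_real (Im (f x)))"
    by (intro trig_approx_add trig_approx_scale r i)
  then show ?thesis by (rule trig_approx_cong) (simp add: complex_eq_iff)
qed

lemma trig_poly_dense: "bdd_meas f \<Longrightarrow> e > 0 \<Longrightarrow> \<exists>p. is_trig_poly p \<and> L2_sqnorm (\<lambda>x. f x - p x) < e"
  using trig_approx_bdd_meas unfolding trig_approx_def by blast

lemma parseval_le: assumes f: "bdd_meas f" shows "L2_sqnorm f \<le> l2_sqnorm (fourier \<mu> f)"
proof (rule field_le_epsilon)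
  fix e :: real assume e: "e > 0"
  obtain p where p: "is_trig_poly p" "L2_sqnorm (\<lambda>x. f x - p x) < e" using trig_poly_dense[OF f e] by blast
  obtain F c where Fc: "finite F" "\<forall>x\<in>dual_group. p x = trig_poly F c x" using p(1) unfolding is_trig_poly_def by blast
  have "L2_sqnorm (\<lambda>x. f x - p x) = L2_sqnorm (\<lambda>x. f x - trig_poly F c x)" using Fc space_haar by (intro L2_sqnorm_cong) auto
  also have "\<dots> = L2_sqnorm f - (\<Sum>\<xi>\<in>F. (cmod (fourier \<mu> f \<xi>))\<^sup>2) + (\<Sum>\<xi>\<in>F. (cmod (fourier \<mu> f \<xi> - c \<xi>))\<^sup>2)"
    by (rule L2_sqnorm_diff_trig_poly[OF f Fc(1)])
  finally have "L2_sqnorm f - (\<Sum>\<xi>\<in>F. (cmod (fourier \<mu> f \<xi>))\<^sup>2) < e"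
    using p(2) sum_nonneg[of F "\<lambda>\<xi>. (cmod (fourier \<mu> f \<xi> - c \<xi>))\<^sup>2"] by simp
  moreover have "(\<Sum>\<xi>\<in>F. (cmod (fourier \<mu> f \<xi>))\<^sup>2) \<le> l2_sqnorm (fourier \<mu> f)"
    using bessel_inequality[OF f] Fc(1) sum_sq_le_l2_sqnorm by blast
  ultimately show "L2_sqnorm f \<le> l2_sqnorm (fourier \<mu> f) + e" by simp
qed

end




section \<open>Laurent operators\<close>

context haar_space
begin

text \<open>Multiplication by \<open>\<phi>\<close>, written in the basis of characters.\<close>

definition laurent :: "(('x \<Rightarrow> complex) \<Rightarrow> complex) \<Rightarrow> ('x \<Rightarrow> complex) \<Rightarrow> 'x \<Rightarrow> complex" where
  "laurent \<phi> x \<xi> = infsum (\<lambda>\<eta>. fourier \<mu> \<phi> (\<xi> - \<eta>) * x \<eta>) UNIV"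

lemma fourier_mult_trig_poly:
  assumes \<phi>: "bdd_meas \<phi>" and F: "finite F"
  shows "fourier \<mu> (\<lambda>\<gamma>. \<phi> \<gamma> * trig_poly F c \<gamma>) \<xi> = (\<Sum>\<eta>\<in>F. c \<eta> * fourier \<mu> \<phi> (\<xi> - \<eta>))"
proof -
  have "fourier \<mu> (\<lambda>\<gamma>. \<phi> \<gamma> * trig_poly F c \<gamma>) \<xi> =
      integral\<^sup>L \<mu> (\<lambda>\<gamma>. \<Sum>\<eta>\<in>F. c \<eta> * (\<phi> \<gamma> * cnj (\<gamma> (\<xi> - \<eta>))))"
    unfolding fourier_def trig_poly_def
  proof (intro Bochner_Integration.integral_cong refl)
    fix \<gamma> assume "\<gamma> \<in> space \<mu>"
    then have g: "\<gamma> \<in> dual_group" using space_haar by simp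
    have "cnj (\<gamma> (\<xi> - \<eta>)) = \<gamma> \<eta> * cnj (\<gamma> \<xi>)" for \<eta>
      using g by (simp add: dual_group_diff dual_group_uminus[symmetric] mult.commute)
    then show "\<phi> \<gamma> * (\<Sum>\<eta>\<in>F. c \<eta> * \<gamma> \<eta>) * cnj (\<gamma> \<xi>) = (\<Sum>\<eta>\<in>F. c \<eta> * (\<phi> \<gamma> * cnj (\<gamma> (\<xi> - \<eta>))))"
      by (simp add: sum_distrib_left sum_distrib_right mult_ac)
  qed
  also have "\<dots> = (\<Sum>\<eta>\<in>F. c \<eta> * fourier \<mu> \<phi> (\<xi> - \<eta>))"
    unfolding fourier_def
    by (subst Bochner_Integration.integral_sum) (auto intro!: bdd_meas_integrable bdd_meas_mult \<phi> bdd_meas_cnj bdd_meas_char bdd_meas_const)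
  finally show ?thesis .
qed

lemma sq_summable_fourier: "bdd_meas \<phi> \<Longrightarrow> sq_summable (fourier \<mu> \<phi>)"
  using bessel_inequality by blast

lemma laurent_summable:
  assumes \<phi>: "bdd_meas \<phi>" and x: "sq_summable x"
  shows "(\<lambda>\<eta>. fourier \<mu> \<phi> (\<xi> - \<eta>) * x \<eta>) summable_on UNIV \<and>
    cmod (laurent \<phi> x \<xi>) \<le> sqrt (L2_sqnorm \<phi>) * sqrt (l2_sqnorm x)"
proof -
  have a: "sq_summable (\<lambda>\<eta>. fourier \<mu> \<phi> (\<xi> - \<eta>))" "l2_sqnorm (\<lambda>\<eta>. fourier \<mu> \<phi> (\<xi> - \<eta>)) \<le> L2_sqnorm \<phi>"
    using sq_summable_reflect[OF sq_summable_fourier[OF \<phi>], of \<xi>] bessel_inequality[OF \<phi>] by auto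
  have "sqrt (l2_sqnorm (\<lambda>\<eta>. fourier \<mu> \<phi> (\<xi> - \<eta>))) * sqrt (l2_sqnorm x) \<le> sqrt (L2_sqnorm \<phi>) * sqrt (l2_sqnorm x)"
    using a(2) by (intro mult_right_mono real_sqrt_le_mono) (auto simp: l2_sqnorm_nonneg)
  with l2_cauchy_schwarz[OF a(1) x] show ?thesis unfolding laurent_def by auto
qed

lemma laurent_has_sum: "bdd_meas \<phi> \<Longrightarrow> sq_summable x \<Longrightarrow>
   ((\<lambda>\<eta>. fourier \<mu> \<phi> (\<xi> - \<eta>) * x \<eta>) has_sum laurent \<phi> x \<xi>) UNIV"
  using laurent_summable unfolding laurent_def by (blast intro: has_sum_infsum)

lemma laurent_finite_support:
  assumes F: "finite F" and z: "\<And>\<eta>. \<eta> \<notin> F \<Longrightarrow> x \<eta> = 0"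
  shows "laurent \<phi> x \<xi> = (\<Sum>\<eta>\<in>F. fourier \<mu> \<phi> (\<xi> - \<eta>) * x \<eta>)"
  unfolding laurent_def by (rule infsumI, rule has_sum_finite_neutralI) (use F z in auto)

lemma laurent_restrict_seq: "bdd_meas \<phi> \<Longrightarrow> finite F \<Longrightarrow> laurent \<phi> (restrict_seq F x) \<xi> = fourier \<mu> (\<lambda>\<gamma>. \<phi> \<gamma> * trig_poly F x \<gamma>) \<xi>"
  by (subst laurent_finite_support[of F]) (auto simp: restrict_seq_def fourier_mult_trig_poly mult.commute intro!: sum.cong)

lemma laurent_diff: "bdd_meas \<phi> \<Longrightarrow> sq_summable x \<Longrightarrow> sq_summable y \<Longrightarrow>
   laurent \<phi> (\<lambda>\<eta>. x \<eta> - y \<eta>) \<xi> = laurent \<phi> x \<xi> - laurent \<phi> y \<xi>"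
proof -
  assume p: "bdd_meas \<phi>" "sq_summable x" "sq_summable y"
  have "((\<lambda>\<eta>. fourier \<mu> \<phi> (\<xi> - \<eta>) * x \<eta> - fourier \<mu> \<phi> (\<xi> - \<eta>) * y \<eta>) has_sum
      (laurent \<phi> x \<xi> - laurent \<phi> y \<xi>)) UNIV"
    by (intro has_sum_diff laurent_has_sum p)
  then show ?thesis unfolding laurent_def by (simp add: infsumI right_diff_distrib)
qed

lemma laurent_bounded:
  assumes \<phi>: "bdd_meas \<phi>" and C: "\<And>\<gamma>. \<gamma> \<in> space \<mu> \<Longrightarrow> cmod (\<phi> \<gamma>) \<le> C" and x: "sq_summable x"
  shows "sq_summable (laurent \<phi> x) \<and> l2_sqnorm (laurent \<phi> x) \<le> C\<^sup>2 * l2_sqnorm x"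
proof (rule sq_summable_if_sums_le)
  fix E :: "'x set" assume E: "finite E"
  have fin: "(\<Sum>\<xi>\<in>E. (cmod (laurent \<phi> (restrict_seq F x) \<xi>))\<^sup>2) \<le> C\<^sup>2 * l2_sqnorm x" if F: "finite F" for F
  proof -
    have "(\<Sum>\<xi>\<in>E. (cmod (laurent \<phi> (restrict_seq F x) \<xi>))\<^sup>2) =
        (\<Sum>\<xi>\<in>E. (cmod (fourier \<mu> (\<lambda>\<gamma>. \<phi> \<gamma> * trig_poly F x \<gamma>) \<xi>))\<^sup>2)"
      using laurent_restrict_seq[OF \<phi> F] by simp
    also have "\<dots> \<le> L2_sqnorm (\<lambda>\<gamma>. \<phi> \<gamma> * trig_poly F x \<gamma>)"
      by (rule bessel_inequality_finite[OF bdd_meas_mult[OF \<phi> bdd_meas_trig_poly_finite[OF F]] E])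
    also have "\<dots> \<le> L2_sqnorm (\<lambda>\<gamma>. complex_of_real C * trig_poly F x \<gamma>)"
    proof (rule L2_sqnorm_mono)
      show "bdd_meas (\<lambda>\<gamma>. \<phi> \<gamma> * trig_poly F x \<gamma>)" by (rule bdd_meas_mult[OF \<phi> bdd_meas_trig_poly_finite[OF F]])
      show "bdd_meas (\<lambda>\<gamma>. complex_of_real C * trig_poly F x \<gamma>)" by (rule bdd_meas_mult[OF bdd_meas_const bdd_meas_trig_poly_finite[OF F]])
      fix \<gamma> assume "\<gamma> \<in> space \<mu>"
      then have "cmod (\<phi> \<gamma>) \<le> C" by (rule C)
      then have "cmod (\<phi> \<gamma>) \<le> cmod (complex_of_real C)" by (simp add: norm_of_real)
      then show "cmod (\<phi> \<gamma> * trig_poly F x \<gamma>) \<le> cmod (complex_of_real C * trig_poly F x \<gamma>)"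
        by (simp add: norm_mult mult_right_mono)
    qed
    also have "\<dots> = C\<^sup>2 * (\<Sum>\<xi>\<in>F. (cmod (x \<xi>))\<^sup>2)"
      by (simp add: L2_sqnorm_scale L2_sqnorm_trig_poly[OF F] norm_of_real)
    also have "\<dots> \<le> C\<^sup>2 * l2_sqnorm x" using sum_sq_le_l2_sqnorm[OF x F] by (simp add: mult_left_mono)
    finally show ?thesis .
  qed
  have lim: "((\<lambda>F. \<Sum>\<xi>\<in>E. (cmod (laurent \<phi> (restrict_seq F x) \<xi>))\<^sup>2) \<longlongrightarrow>
      (\<Sum>\<xi>\<in>E. (cmod (laurent \<phi> x \<xi>))\<^sup>2)) (finite_subsets_at_top UNIV)"
  proof (intro tendsto_sum tendsto_power tendsto_norm)
    fix \<xi>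
    have hs: "((\<lambda>\<eta>. fourier \<mu> \<phi> (\<xi> - \<eta>) * x \<eta>) has_sum laurent \<phi> x \<xi>) UNIV"
      by (rule laurent_has_sum[OF \<phi> x])
    have ev: "\<forall>\<^sub>F F in finite_subsets_at_top UNIV. laurent \<phi> (restrict_seq F x) \<xi> = (\<Sum>\<eta>\<in>F. fourier \<mu> \<phi> (\<xi> - \<eta>) * x \<eta>)"
    proof (rule eventually_finite_subsets_at_top_weakI)
      fix F :: "'x set" assume "finite F"
      then show "laurent \<phi> (restrict_seq F x) \<xi> = (\<Sum>\<eta>\<in>F. fourier \<mu> \<phi> (\<xi> - \<eta>) * x \<eta>)"
        by (subst laurent_finite_support[of F]) (auto simp: restrict_seq_def)
    qed
    show "((\<lambda>F. laurent \<phi> (restrict_seq F x) \<xi>) \<longlongrightarrow> laurent \<phi> x \<xi>) (finite_subsets_at_top UNIV)"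
      unfolding tendsto_cong[OF ev] by (rule hs[unfolded has_sum_def])
  qed
  have "\<forall>\<^sub>F F in finite_subsets_at_top UNIV. (\<Sum>\<xi>\<in>E. (cmod (laurent \<phi> (restrict_seq F x) \<xi>))\<^sup>2) \<le> C\<^sup>2 * l2_sqnorm x"
    by (rule eventually_finite_subsets_at_top_weakI) (use fin in auto)
  then show "(\<Sum>\<xi>\<in>E. (cmod (laurent \<phi> x \<xi>))\<^sup>2) \<le> C\<^sup>2 * l2_sqnorm x"
    using lim by (intro tendsto_upperbound[OF lim]) auto
qed

end




section \<open>The Wiener--Hopf operator\<close>

definition delta0 :: "'x::zero \<Rightarrow> complex" where
  "delta0 \<eta> = (if \<eta> = 0 then 1 else 0)"

context haar_space
begin

lemma bdd_meas_trig_poly: "bdd_meas (trig_poly F c)"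
proof (cases "finite F")
  case True then show ?thesis by (rule bdd_meas_trig_poly_finite)
next
  case False
  then have "trig_poly F c = (\<lambda>_. 0)" unfolding trig_poly_def by (auto simp: fun_eq_iff)
  then show ?thesis using bdd_meas_const by simp
qed

lemma norm_fourier_le: "bdd_meas a \<Longrightarrow> cmod (fourier \<mu> a \<xi>) \<le> sqrt (L2_sqnorm a)"
  using bessel_inequality[of a] norm_le_sqrt_l2_sqnorm[of "fourier \<mu> a" \<xi>] by (auto intro: order_trans real_sqrt_le_mono)

lemma fourier_diff: "bdd_meas a \<Longrightarrow> bdd_meas b \<Longrightarrow> fourier \<mu> (\<lambda>x. a x - b x) \<xi> = fourier \<mu> a \<xi> - fourier \<mu> b \<xi>"
  unfolding fourier_eq_L2_inner by (rule L2_inner_diff_left) (auto intro: bdd_meas_char)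

lemma fourier_one: "fourier \<mu> (\<lambda>_. 1) \<eta> = delta0 \<eta>"
proof -
  have "fourier \<mu> (\<lambda>_. 1) \<eta> = cnj (integral\<^sup>L \<mu> (\<lambda>\<gamma>. \<gamma> \<eta>))"
    unfolding fourier_def by (simp flip: Bochner_Integration.integral_cnj)
  then show ?thesis by (simp add: integral_char delta0_def)
qed

lemma check_L2_tendsto:
  assumes chk: "is_check \<mu> k kc" and kc': "bdd_meas kc'" and ae: "AE x in \<mu>. kc x = kc' x"
  shows "((\<lambda>F. L2_sqnorm (\<lambda>x. kc' x - trig_poly F k x)) \<longlongrightarrow> 0) (finite_subsets_at_top UNIV)"
proof -
  have eq: "(\<integral>\<^sup>+ x. ennreal ((cmod (kc x - (\<Sum>\<xi>\<in>F. k \<xi> * x \<xi>)))\<^sup>2) \<partial>\<mu>) =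
      ennreal (L2_sqnorm (\<lambda>x. kc' x - trig_poly F k x))" for F
  proof -
    have "(\<integral>\<^sup>+ x. ennreal ((cmod (kc x - (\<Sum>\<xi>\<in>F. k \<xi> * x \<xi>)))\<^sup>2) \<partial>\<mu>) =
        (\<integral>\<^sup>+ x. ennreal ((cmod (kc' x - trig_poly F k x))\<^sup>2) \<partial>\<mu>)"
      using ae by (intro nn_integral_cong_AE) (auto simp: trig_poly_def)
    also have "\<dots> = ennreal (L2_sqnorm (\<lambda>x. kc' x - trig_poly F k x))"
      unfolding L2_sqnorm_def by (intro nn_integral_eq_integral integrable_norm_sq bdd_meas_diff kc' bdd_meas_trig_poly) auto
    finally show ?thesis .
  qed
  have "((\<lambda>F. ennreal (L2_sqnorm (\<lambda>x. kc' x - trig_poly F k x))) \<longlongrightarrow> ennreal 0) (finite_subsets_at_top UNIV)"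
    using chk unfolding is_check_def eq by simp
  then show ?thesis by (subst (asm) tendsto_ennreal_iff) (auto simp: L2_sqnorm_nonneg)
qed

lemma fourier_check_mult_has_sum:
  assumes chk: "is_check \<mu> k kc" and kc': "bdd_meas kc'" and ae: "AE x in \<mu>. kc x = kc' x"
    and B: "bdd_meas B"
  shows "((\<lambda>\<zeta>. k \<zeta> * fourier \<mu> B (\<xi> - \<zeta>)) has_sum fourier \<mu> (\<lambda>x. kc' x * B x) \<xi>) UNIV"
proof -
  obtain C where C: "0 \<le> C" "\<forall>x\<in>space \<mu>. cmod (B x) \<le> C" using bdd_meas_bound[OF B] by blast
  have lim: "((\<lambda>F. C * sqrt (L2_sqnorm (\<lambda>x. kc' x - trig_poly F k x))) \<longlongrightarrow> 0) (finite_subsets_at_top UNIV)"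
  proof -
    have "((\<lambda>F. sqrt (L2_sqnorm (\<lambda>x. kc' x - trig_poly F k x))) \<longlongrightarrow> 0) (finite_subsets_at_top UNIV)"
      using tendsto_real_sqrt[OF check_L2_tendsto[OF chk kc' ae]] by simp
    from tendsto_mult_right_zero[OF this, of C] show ?thesis by simp
  qed
  have ev: "\<forall>\<^sub>F F in finite_subsets_at_top UNIV.
      norm ((\<Sum>\<zeta>\<in>F. k \<zeta> * fourier \<mu> B (\<xi> - \<zeta>)) - fourier \<mu> (\<lambda>x. kc' x * B x) \<xi>)
        \<le> C * sqrt (L2_sqnorm (\<lambda>x. kc' x - trig_poly F k x))"
  proof (rule eventually_finite_subsets_at_top_weakI)
    fix F :: "'x set" assume F: "finite F"
    have "(\<Sum>\<zeta>\<in>F. k \<zeta> * fourier \<mu> B (\<xi> - \<zeta>)) = fourier \<mu> (\<lambda>x. B x * trig_poly F k x) \<xi>"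
      by (rule fourier_mult_trig_poly[OF B F, symmetric])
    moreover have "(\<lambda>x. (kc' x - trig_poly F k x) * B x) = (\<lambda>x. kc' x * B x - B x * trig_poly F k x)"
      by (auto simp: fun_eq_iff algebra_simps)
    moreover have "fourier \<mu> (\<lambda>x. kc' x * B x - B x * trig_poly F k x) \<xi> =
        fourier \<mu> (\<lambda>x. kc' x * B x) \<xi> - fourier \<mu> (\<lambda>x. B x * trig_poly F k x) \<xi>"
      by (rule fourier_diff[OF bdd_meas_mult[OF kc' B] bdd_meas_mult[OF B bdd_meas_trig_poly_finite[OF F]]])
    ultimately have "(\<Sum>\<zeta>\<in>F. k \<zeta> * fourier \<mu> B (\<xi> - \<zeta>)) - fourier \<mu> (\<lambda>x. kc' x * B x) \<xi>
        = - fourier \<mu> (\<lambda>x. (kc' x - trig_poly F k x) * B x) \<xi>"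
      by simp
    then have "norm ((\<Sum>\<zeta>\<in>F. k \<zeta> * fourier \<mu> B (\<xi> - \<zeta>)) - fourier \<mu> (\<lambda>x. kc' x * B x) \<xi>)
        \<le> sqrt (L2_sqnorm (\<lambda>x. (kc' x - trig_poly F k x) * B x))"
      using norm_fourier_le[OF bdd_meas_mult[OF bdd_meas_diff[OF kc' bdd_meas_trig_poly_finite[OF F]] B]] by simp
    also have "\<dots> \<le> sqrt (L2_sqnorm (\<lambda>x. complex_of_real C * (kc' x - trig_poly F k x)))"
    proof (intro real_sqrt_le_mono L2_sqnorm_mono)
      show "bdd_meas (\<lambda>x. (kc' x - trig_poly F k x) * B x)" by (intro bdd_meas_mult bdd_meas_diff kc' bdd_meas_trig_poly_finite F B)
      show "bdd_meas (\<lambda>x. complex_of_real C * (kc' x - trig_poly F k x))" by (intro bdd_meas_mult bdd_meas_diff kc' bdd_meas_trig_poly_finite F bdd_meas_const)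
      fix x assume "x \<in> space \<mu>"
      then show "cmod ((kc' x - trig_poly F k x) * B x) \<le> cmod (complex_of_real C * (kc' x - trig_poly F k x))"
      proof -
        have "cmod (B x) \<le> C" using C \<open>x \<in> space \<mu>\<close> by blast
        then have "cmod (B x) * cmod (kc' x - trig_poly F k x) \<le> C * cmod (kc' x - trig_poly F k x)"
          by (rule mult_right_mono) simp
        then show ?thesis using C(1) by (simp add: norm_mult norm_of_real mult.commute)
      qed
    qed
    also have "\<dots> = C * sqrt (L2_sqnorm (\<lambda>x. kc' x - trig_poly F k x))"
      using C(1) by (simp add: L2_sqnorm_scale norm_of_real real_sqrt_mult)
    finally show "norm ((\<Sum>\<zeta>\<in>F. k \<zeta> * fourier \<mu> B (\<xi> - \<zeta>)) - fourier \<mu> (\<lambda>x. kc' x * B x) \<xi>)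
        \<le> C * sqrt (L2_sqnorm (\<lambda>x. kc' x - trig_poly F k x))" .
  qed
  have "((\<lambda>F. (\<Sum>\<zeta>\<in>F. k \<zeta> * fourier \<mu> B (\<xi> - \<zeta>)) - fourier \<mu> (\<lambda>x. kc' x * B x) \<xi>) \<longlongrightarrow> 0)
      (finite_subsets_at_top UNIV)"
    by (rule Lim_null_comparison[OF ev lim])
  then show ?thesis unfolding has_sum_def LIM_zero_iff .
qed

lemma wiener_hopf_eq_infsum:
  assumes x: "\<And>\<eta>. \<eta> \<notin> pos_cone \<Longrightarrow> x \<eta> = 0" and \<xi>: "\<xi> \<in> pos_cone"
  shows "wiener_hopf k x \<xi> = infsum (\<lambda>\<eta>. k (\<xi> - \<eta>) * x \<eta>) UNIV"
  unfolding wiener_hopf_def using \<xi> x by (simp, intro infsum_cong_neutral) auto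

definition analytic :: "(('x \<Rightarrow> complex) \<Rightarrow> complex) \<Rightarrow> bool" where
  "analytic f \<longleftrightarrow> (\<forall>\<zeta>. \<zeta> \<notin> pos_cone \<longrightarrow> fourier \<mu> f \<zeta> = 0)"

lemma wiener_hopf_fourier:
  assumes chk: "is_check \<mu> k kc" and kc': "bdd_meas kc'" and ae: "AE x in \<mu>. kc x = kc' x"
    and B: "bdd_meas B" "analytic B"
  shows "wiener_hopf k (fourier \<mu> B) \<xi> = (if \<xi> \<in> pos_cone then fourier \<mu> (\<lambda>x. kc' x * B x) \<xi> else 0)"
proof (cases "\<xi> \<in> pos_cone")
  case True
  have b: "bij_betw (\<lambda>\<zeta>. \<xi> - \<zeta>) UNIV (UNIV :: 'x set)"
    by (rule bij_betwI[where g="\<lambda>\<zeta>. \<xi> - \<zeta>"]) auto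
  have "wiener_hopf k (fourier \<mu> B) \<xi> = infsum (\<lambda>\<eta>. k (\<xi> - \<eta>) * fourier \<mu> B \<eta>) UNIV"
    using wiener_hopf_eq_infsum[OF _ True] B(2) by (simp add: analytic_def)
  also have "\<dots> = infsum (\<lambda>\<zeta>. k \<zeta> * fourier \<mu> B (\<xi> - \<zeta>)) UNIV"
    using infsum_reindex_bij_betw[OF b, of "\<lambda>\<eta>. k (\<xi> - \<eta>) * fourier \<mu> B \<eta>"] by simp
  also have "\<dots> = fourier \<mu> (\<lambda>x. kc' x * B x) \<xi>"
    by (rule infsumI[OF fourier_check_mult_has_sum[OF chk kc' ae B(1)]])
  finally show ?thesis using True by simp
next
  case False
  then show ?thesis unfolding wiener_hopf_def by simp
qed

lemma wiener_hopf_delta0: "wiener_hopf k delta0 = (\<lambda>\<xi>. if \<xi> \<in> pos_cone then k \<xi> else 0)"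
proof
  fix \<xi>
  have "infsum (\<lambda>\<eta>. k (\<xi> - \<eta>) * delta0 \<eta>) pos_cone = k \<xi>"
    by (rule infsumI, rule has_sum_finite_neutralI[where B="{0}"]) (auto simp: delta0_def pos_cone_def)
  then show "wiener_hopf k delta0 \<xi> = (if \<xi> \<in> pos_cone then k \<xi> else 0)"
    unfolding wiener_hopf_def by simp
qed

lemma wiener_hopf_lipschitz:
  assumes k: "sq_summable k" and x: "x \<in> l2 pos_cone" and y: "y \<in> l2 pos_cone"
  shows "cmod (wiener_hopf k x \<xi> - wiener_hopf k y \<xi>)
    \<le> sqrt (l2_sqnorm k) * sqrt (l2_sqnorm (\<lambda>\<eta>. x \<eta> - y \<eta>))"
proof (cases "\<xi> \<in> pos_cone")
  case True
  have kr: "sq_summable (\<lambda>\<eta>. k (\<xi> - \<eta>))" "l2_sqnorm (\<lambda>\<eta>. k (\<xi> - \<eta>)) = l2_sqnorm k" using sq_summable_reflect[OF k] by auto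
  have x: "sq_summable x" "\<And>\<eta>. \<eta> \<notin> pos_cone \<Longrightarrow> x \<eta> = 0"
    and y: "sq_summable y" "\<And>\<eta>. \<eta> \<notin> pos_cone \<Longrightarrow> y \<eta> = 0"
    using x y by (auto simp: l2_iff)
  have dl: "sq_summable (\<lambda>\<eta>. x \<eta> - y \<eta>)" using sq_summable_diff[OF x(1) y(1)] by blast
  have sx: "(\<lambda>\<eta>. k (\<xi> - \<eta>) * x \<eta>) summable_on UNIV" using l2_cauchy_schwarz[OF kr(1) x(1)] by blast
  have sy: "(\<lambda>\<eta>. k (\<xi> - \<eta>) * y \<eta>) summable_on UNIV" using l2_cauchy_schwarz[OF kr(1) y(1)] by blast
  have ex: "wiener_hopf k x \<xi> = infsum (\<lambda>\<eta>. k (\<xi> - \<eta>) * x \<eta>) UNIV" by (rule wiener_hopf_eq_infsum[OF x(2) True])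
  have ey: "wiener_hopf k y \<xi> = infsum (\<lambda>\<eta>. k (\<xi> - \<eta>) * y \<eta>) UNIV" by (rule wiener_hopf_eq_infsum[OF y(2) True])
  have "wiener_hopf k x \<xi> - wiener_hopf k y \<xi> = infsum (\<lambda>\<eta>. k (\<xi> - \<eta>) * (x \<eta> - y \<eta>)) UNIV"
    unfolding ex ey using has_sum_diff[OF has_sum_infsum[OF sx] has_sum_infsum[OF sy]]
    by (simp add: infsumI right_diff_distrib)
  also have "cmod \<dots> \<le> sqrt (l2_sqnorm k) * sqrt (l2_sqnorm (\<lambda>\<eta>. x \<eta> - y \<eta>))"
    using l2_cauchy_schwarz[OF kr(1) dl] kr(2) by simp
  finally show ?thesis .
next
  case False
  then show ?thesis unfolding wiener_hopf_def by (simp add: l2_sqnorm_nonneg)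
qed

end



section \<open>Toeplitz operators and the inverse of \<open>\<psi>\<close>\<close>

lemma eq_0_if_norm_le_sqrt:
  fixes d :: complex
  assumes K: "0 \<le> K" and h: "\<And>e. e > 0 \<Longrightarrow> cmod d \<le> K * sqrt e"
  shows "d = 0"
proof (rule ccontr)
  assume "d \<noteq> 0"
  then have d: "cmod d > 0" by simp
  define e where "e = (cmod d / (K + 1))\<^sup>2"
  have e: "e > 0" unfolding e_def using d K by simp
  have "sqrt e = cmod d / (K + 1)" unfolding e_def using d K by simp
  then have "cmod d \<le> K * (cmod d / (K + 1))" using h[OF e] by simp
  also have "\<dots> < cmod d" using d K by (simp add: field_simps)
  finally show False by simp
qed

lemma norm_diff_add_le: "norm (a - b + c) \<le> norm a + norm b + norm (c::'a::real_normed_vector)"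
  using norm_triangle_ineq[of "a - b" c] norm_triangle_ineq4[of a b] by linarith

lemma norm_one_minus_mult_unimodular:
  fixes z w :: complex
  assumes "cmod z = 1"
  shows "cmod (1 - z * w) = cmod (z - cnj w)"
proof -
  have "1 - z * w = z * cnj (z - cnj w)"
    using unimodular_mult_cnj[OF assms] by (simp add: algebra_simps)
  then have "cmod (1 - z * w) = cmod z * cmod (cnj (z - cnj w))" by (simp only: norm_mult)
  then show ?thesis using assms by (simp only: complex_mod_cnj)
qed

lemma norm_ge_one_minus_dist_unimodular:
  fixes z w :: complex
  assumes "cmod z = 1"
  shows "1 - cmod (z - cnj w) \<le> cmod w"
  using norm_triangle_sub[of z "cnj w"] assms by (simp add: add.commute)

context haar_space
begin

definition toeplitz :: "(('x \<Rightarrow> complex) \<Rightarrow> complex) \<Rightarrow> ('x \<Rightarrow> complex) \<Rightarrow> 'x \<Rightarrow> complex" where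
  "toeplitz \<phi> x \<xi> = (if \<xi> \<in> pos_cone then laurent \<phi> x \<xi> else 0)"

lemma toeplitz_bounded:
  assumes \<phi>: "bdd_meas \<phi>" and C: "\<And>\<gamma>. \<gamma> \<in> space \<mu> \<Longrightarrow> cmod (\<phi> \<gamma>) \<le> C" and x: "sq_summable x"
  shows "toeplitz \<phi> x \<in> l2 pos_cone \<and> l2_sqnorm (toeplitz \<phi> x) \<le> C\<^sup>2 * l2_sqnorm x"
proof -
  have laurent: "sq_summable (laurent \<phi> x)" "l2_sqnorm (laurent \<phi> x) \<le> C\<^sup>2 * l2_sqnorm x"
    using laurent_bounded[OF \<phi> C x] by auto
  have "sq_summable (toeplitz \<phi> x) \<and> l2_sqnorm (toeplitz \<phi> x) \<le> C\<^sup>2 * l2_sqnorm x"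
  proof (rule sq_summable_if_sums_le)
    fix E :: "'x set" assume E: "finite E"
    have "(\<Sum>\<xi>\<in>E. (cmod (toeplitz \<phi> x \<xi>))\<^sup>2) \<le> (\<Sum>\<xi>\<in>E. (cmod (laurent \<phi> x \<xi>))\<^sup>2)"
      unfolding toeplitz_def by (intro sum_mono) auto
    also have "\<dots> \<le> l2_sqnorm (laurent \<phi> x)" by (rule sum_sq_le_l2_sqnorm[OF laurent(1) E])
    finally show "(\<Sum>\<xi>\<in>E. (cmod (toeplitz \<phi> x \<xi>))\<^sup>2) \<le> C\<^sup>2 * l2_sqnorm x"
      using laurent(2) by simp
  qed
  then show ?thesis unfolding l2_iff toeplitz_def by auto
qed

lemma toeplitz_diff:
  "bdd_meas \<phi> \<Longrightarrow> sq_summable x \<Longrightarrow> sq_summable y \<Longrightarrow>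
    toeplitz \<phi> (\<lambda>\<eta>. x \<eta> - y \<eta>) = (\<lambda>\<xi>. toeplitz \<phi> x \<xi> - toeplitz \<phi> y \<xi>)"
  unfolding toeplitz_def by (auto simp: laurent_diff fun_eq_iff)

lemma toeplitz_lipschitz:
  assumes \<phi>: "bdd_meas \<phi>" and C: "0 \<le> C" "\<And>\<gamma>. \<gamma> \<in> space \<mu> \<Longrightarrow> cmod (\<phi> \<gamma>) \<le> C"
    and x: "sq_summable x" and y: "sq_summable y"
  shows "toeplitz \<phi> x \<in> l2 pos_cone"
    and "sqrt (l2_sqnorm (\<lambda>\<xi>. toeplitz \<phi> x \<xi> - toeplitz \<phi> y \<xi>))
      \<le> C * sqrt (l2_sqnorm (\<lambda>\<eta>. x \<eta> - y \<eta>))"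
    and "cmod (toeplitz \<phi> x \<xi> - toeplitz \<phi> y \<xi>) \<le> C * sqrt (l2_sqnorm (\<lambda>\<eta>. x \<eta> - y \<eta>))"
proof -
  show "toeplitz \<phi> x \<in> l2 pos_cone" using toeplitz_bounded[OF \<phi> C(2) x] by blast
  have xy: "sq_summable (\<lambda>\<eta>. x \<eta> - y \<eta>)" using sq_summable_diff[OF x y] by blast
  have T: "toeplitz \<phi> (\<lambda>\<eta>. x \<eta> - y \<eta>) \<in> l2 pos_cone"
    "l2_sqnorm (toeplitz \<phi> (\<lambda>\<eta>. x \<eta> - y \<eta>)) \<le> C\<^sup>2 * l2_sqnorm (\<lambda>\<eta>. x \<eta> - y \<eta>)"
    using toeplitz_bounded[OF \<phi> C(2) xy] by auto
  have "sqrt (l2_sqnorm (toeplitz \<phi> (\<lambda>\<eta>. x \<eta> - y \<eta>))) \<le> sqrt (C\<^sup>2 * l2_sqnorm (\<lambda>\<eta>. x \<eta> - y \<eta>))"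
    by (rule real_sqrt_le_mono[OF T(2)])
  also have "\<dots> = C * sqrt (l2_sqnorm (\<lambda>\<eta>. x \<eta> - y \<eta>))" using C(1) by (simp add: real_sqrt_mult)
  finally have l2_bound: "sqrt (l2_sqnorm (toeplitz \<phi> (\<lambda>\<eta>. x \<eta> - y \<eta>)))
    \<le> C * sqrt (l2_sqnorm (\<lambda>\<eta>. x \<eta> - y \<eta>))" .
  then show "sqrt (l2_sqnorm (\<lambda>\<xi>. toeplitz \<phi> x \<xi> - toeplitz \<phi> y \<xi>))
      \<le> C * sqrt (l2_sqnorm (\<lambda>\<eta>. x \<eta> - y \<eta>))"
    by (simp only: toeplitz_diff[OF \<phi> x y])
  have "cmod (toeplitz \<phi> (\<lambda>\<eta>. x \<eta> - y \<eta>) \<xi>) \<le> sqrt (l2_sqnorm (toeplitz \<phi> (\<lambda>\<eta>. x \<eta> - y \<eta>)))"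
    using T(1) by (simp add: l2_iff norm_le_sqrt_l2_sqnorm)
  with l2_bound show "cmod (toeplitz \<phi> x \<xi> - toeplitz \<phi> y \<xi>) \<le> C * sqrt (l2_sqnorm (\<lambda>\<eta>. x \<eta> - y \<eta>))"
    by (simp add: toeplitz_diff[OF \<phi> x y])
qed

lemma fourier_analytic_mult_trig_poly:
  assumes \<psi>: "bdd_meas \<psi>" "analytic \<psi>" and g: "g \<in> l2 pos_cone" and F: "finite F"
  shows "fourier \<mu> (\<lambda>\<gamma>. \<psi> \<gamma> * trig_poly F g \<gamma>) \<xi> = toeplitz \<psi> (restrict_seq F g) \<xi>"
proof (cases "\<xi> \<in> pos_cone")
  case True
  then show ?thesis unfolding toeplitz_def using laurent_restrict_seq[OF \<psi>(1) F] by simp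
next
  case False
  have zero: "g \<eta> * fourier \<mu> \<psi> (\<xi> - \<eta>) = 0" for \<eta>
  proof (cases "\<eta> \<in> pos_cone")
    case True
    then have "\<xi> - \<eta> \<notin> pos_cone" using False by (auto simp: pos_cone_def)
    then show ?thesis using \<psi>(2) by (simp add: analytic_def)
  next
    case False
    then show ?thesis using g by (simp add: l2_iff)
  qed
  then have "(\<Sum>\<eta>\<in>F. g \<eta> * fourier \<mu> \<psi> (\<xi> - \<eta>)) = 0" by (simp add: sum.neutral)
  then show ?thesis
    using False fourier_mult_trig_poly[OF \<psi>(1) F] by (simp add: toeplitz_def)
qed

lemma analytic_mult_trig_poly:
  assumes "bdd_meas \<psi>" "analytic \<psi>" "g \<in> l2 pos_cone" "finite F"
  shows "analytic (\<lambda>\<gamma>. \<psi> \<gamma> * trig_poly F g \<gamma>)"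
  using fourier_analytic_mult_trig_poly[OF assms] by (simp add: analytic_def toeplitz_def)

text \<open>The identity \<open>W\<^sub>k T\<^sub>\<psi> = I - T\<^sub>r\<close> on \<open>\<ell>\<^sup>2(X\<^sub>+)\<close>, where \<open>r = 1 - kc' \<psi>\<close>: for finitely
  supported \<open>g\<close>, \<open>T\<^sub>\<psi> g\<close> is the coefficient sequence of the analytic function \<open>\<psi> p\<close>, on which \<open>W\<^sub>k\<close>
  acts as multiplication by \<open>kc'\<close> followed by restriction to \<open>X\<^sub>+\<close>.\<close>

lemma wiener_hopf_toeplitz_finite:
  assumes chk: "is_check \<mu> k kc" and kc': "bdd_meas kc'" and ae: "AE x in \<mu>. kc x = kc' x"
    and \<psi>: "bdd_meas \<psi>" "analytic \<psi>" and g: "g \<in> l2 pos_cone" and F: "finite F"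
  shows "wiener_hopf k (toeplitz \<psi> (restrict_seq F g)) \<xi>
    = restrict_seq F g \<xi> - toeplitz (\<lambda>x. 1 - kc' x * \<psi> x) (restrict_seq F g) \<xi>"
proof -
  let ?p = "trig_poly F g" and ?r = "\<lambda>x. 1 - kc' x * \<psi> x"
  let ?B = "\<lambda>\<gamma>. \<psi> \<gamma> * ?p \<gamma>"
  have r: "bdd_meas ?r" by (intro bdd_meas_diff bdd_meas_const bdd_meas_mult kc' \<psi>(1))
  have B: "bdd_meas ?B" by (intro bdd_meas_mult \<psi>(1) bdd_meas_trig_poly)
  have "toeplitz \<psi> (restrict_seq F g) = fourier \<mu> ?B"
    using fourier_analytic_mult_trig_poly[OF \<psi> g F] by (simp add: fun_eq_iff)
  then have "wiener_hopf k (toeplitz \<psi> (restrict_seq F g)) \<xi>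
      = (if \<xi> \<in> pos_cone then fourier \<mu> (\<lambda>x. kc' x * ?B x) \<xi> else 0)"
    using wiener_hopf_fourier[OF chk kc' ae B analytic_mult_trig_poly[OF \<psi> g F]] by simp
  also have "(\<lambda>x. kc' x * ?B x) = (\<lambda>x. ?p x - ?r x * ?p x)"
    by (simp add: fun_eq_iff algebra_simps)
  also have "fourier \<mu> (\<lambda>x. ?p x - ?r x * ?p x) \<xi> = fourier \<mu> ?p \<xi> - fourier \<mu> (\<lambda>x. ?r x * ?p x) \<xi>"
    by (rule fourier_diff[OF bdd_meas_trig_poly bdd_meas_mult[OF r bdd_meas_trig_poly]])
  also have "\<dots> = restrict_seq F g \<xi> - laurent ?r (restrict_seq F g) \<xi>"
    using fourier_trig_poly[OF F] laurent_restrict_seq[OF r F] by (simp add: restrict_seq_def)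
  finally have "wiener_hopf k (toeplitz \<psi> (restrict_seq F g)) \<xi> = (if \<xi> \<in> pos_cone
      then restrict_seq F g \<xi> - laurent ?r (restrict_seq F g) \<xi> else 0)" .
  moreover have "restrict_seq F g \<xi> = 0" if "\<xi> \<notin> pos_cone"
    using g that by (simp add: l2_iff restrict_seq_def)
  ultimately show ?thesis by (simp add: toeplitz_def)
qed

lemma wiener_hopf_toeplitz:
  assumes chk: "is_check \<mu> k kc" and kc': "bdd_meas kc'" and ae: "AE x in \<mu>. kc x = kc' x"
    and k: "sq_summable k" and \<psi>: "bdd_meas \<psi>" "analytic \<psi>" and g: "g \<in> l2 pos_cone"
  shows "wiener_hopf k (toeplitz \<psi> g) \<xi> = g \<xi> - toeplitz (\<lambda>x. 1 - kc' x * \<psi> x) g \<xi>"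
proof -
  let ?r = "\<lambda>x. 1 - kc' x * \<psi> x"
  have r: "bdd_meas ?r" by (intro bdd_meas_diff bdd_meas_const bdd_meas_mult kc' \<psi>(1))
  obtain C\<psi> where C\<psi>: "0 \<le> C\<psi>" "\<And>x. x \<in> space \<mu> \<Longrightarrow> cmod (\<psi> x) \<le> C\<psi>"
    using bdd_meas_bound[OF \<psi>(1)] by blast
  obtain Cr where Cr: "0 \<le> Cr" "\<And>x. x \<in> space \<mu> \<Longrightarrow> cmod (?r x) \<le> Cr"
    using bdd_meas_bound[OF r] by blast
  have g_sq: "sq_summable g" using g by (simp add: l2_iff)
  define K where "K = sqrt (l2_sqnorm k) * C\<psi> + 1 + Cr"
  have "cmod (wiener_hopf k (toeplitz \<psi> g) \<xi> - (g \<xi> - toeplitz ?r g \<xi>)) \<le> K * sqrt e"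
    if "e > 0" for e
  proof -
    obtain F where F: "finite F" "sq_summable (\<lambda>\<xi>. g \<xi> - restrict_seq F g \<xi>)"
      "l2_sqnorm (\<lambda>\<xi>. g \<xi> - restrict_seq F g \<xi>) < e"
      by (rule restrict_seq_tail[OF g_sq \<open>e > 0\<close>])
    let ?x = "restrict_seq F g"
    have x: "?x \<in> l2 pos_cone" "sq_summable ?x" using l2_restrict_seq[OF g F(1)] by (auto simp: l2_iff)
    have dist: "sqrt (l2_sqnorm (\<lambda>\<eta>. g \<eta> - ?x \<eta>)) \<le> sqrt e" using F(3) by simp
    have "cmod (wiener_hopf k (toeplitz \<psi> g) \<xi> - wiener_hopf k (toeplitz \<psi> ?x) \<xi>)
        \<le> sqrt (l2_sqnorm k) * sqrt (l2_sqnorm (\<lambda>\<eta>. toeplitz \<psi> g \<eta> - toeplitz \<psi> ?x \<eta>))"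
      using toeplitz_lipschitz(1)[OF \<psi>(1) C\<psi> g_sq g_sq] toeplitz_lipschitz(1)[OF \<psi>(1) C\<psi> x(2) x(2)]
      by (rule wiener_hopf_lipschitz[OF k])
    also have "\<dots> \<le> sqrt (l2_sqnorm k) * (C\<psi> * sqrt e)"
    proof -
      have "sqrt (l2_sqnorm (\<lambda>\<eta>. toeplitz \<psi> g \<eta> - toeplitz \<psi> ?x \<eta>)) \<le> C\<psi> * sqrt e"
        using order_trans[OF toeplitz_lipschitz(2)[OF \<psi>(1) C\<psi> g_sq x(2)] mult_left_mono[OF dist C\<psi>(1)]] .
      then show ?thesis by (intro mult_left_mono) (simp_all add: l2_sqnorm_nonneg)
    qed
    finally have W: "cmod (wiener_hopf k (toeplitz \<psi> g) \<xi> - wiener_hopf k (toeplitz \<psi> ?x) \<xi>)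
        \<le> sqrt (l2_sqnorm k) * C\<psi> * sqrt e" by (simp add: mult.assoc)
    have G: "cmod (g \<xi> - ?x \<xi>) \<le> sqrt e"
      using order_trans[OF norm_le_sqrt_l2_sqnorm[OF F(2)] dist] .
    have R: "cmod (toeplitz ?r g \<xi> - toeplitz ?r ?x \<xi>) \<le> Cr * sqrt e"
      using order_trans[OF toeplitz_lipschitz(3)[OF r Cr g_sq x(2)] mult_left_mono[OF dist Cr(1)]] .
    have "wiener_hopf k (toeplitz \<psi> g) \<xi> - (g \<xi> - toeplitz ?r g \<xi>)
        = (wiener_hopf k (toeplitz \<psi> g) \<xi> - wiener_hopf k (toeplitz \<psi> ?x) \<xi>)
          - (g \<xi> - ?x \<xi>) + (toeplitz ?r g \<xi> - toeplitz ?r ?x \<xi>)"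
      using wiener_hopf_toeplitz_finite[OF chk kc' ae \<psi> g F(1), of \<xi>] by simp
    then have "cmod (wiener_hopf k (toeplitz \<psi> g) \<xi> - (g \<xi> - toeplitz ?r g \<xi>))
        \<le> sqrt (l2_sqnorm k) * C\<psi> * sqrt e + sqrt e + Cr * sqrt e"
      by (simp only:) (intro order_trans[OF norm_diff_add_le] add_mono W G R)
    also have "\<dots> = K * sqrt e" unfolding K_def by (simp add: algebra_simps)
    finally show ?thesis .
  qed
  moreover have "0 \<le> K" unfolding K_def using C\<psi> Cr by (simp add: l2_sqnorm_nonneg)
  ultimately have "wiener_hopf k (toeplitz \<psi> g) \<xi> - (g \<xi> - toeplitz ?r g \<xi>) = 0"
    by (intro eq_0_if_norm_le_sqrt[of K]) auto
  then show ?thesis by simp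
qed

lemma toeplitz_delta0_solvable:
  assumes chk: "is_check \<mu> k kc" and kc': "bdd_meas kc'" and ae: "AE x in \<mu>. kc x = kc' x"
    and k: "sq_summable k" and inj: "inj_on (wiener_hopf k) (l2 pos_cone)"
    and \<psi>: "bdd_meas \<psi>" "analytic \<psi>"
    and c: "0 \<le> c" "c < 1" and r_small: "\<And>x. x \<in> space \<mu> \<Longrightarrow> cmod (1 - kc' x * \<psi> x) \<le> c"
  obtains g where "g \<in> l2 pos_cone" "toeplitz \<psi> g = delta0"
proof -
  let ?r = "\<lambda>x. 1 - kc' x * \<psi> x"
  have r: "bdd_meas ?r" by (intro bdd_meas_diff bdd_meas_const bdd_meas_mult kc' \<psi>(1))
  have T_r: "toeplitz ?r x \<in> l2 pos_cone \<and> l2_sqnorm (toeplitz ?r x) \<le> c\<^sup>2 * l2_sqnorm x"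
    if "x \<in> l2 pos_cone" for x
    using toeplitz_bounded[OF r r_small] that by (simp add: l2_iff)
  have y: "wiener_hopf k delta0 \<in> l2 pos_cone"
  proof -
    have "sq_summable (wiener_hopf k delta0) \<and> l2_sqnorm (wiener_hopf k delta0) \<le> l2_sqnorm k"
      unfolding wiener_hopf_delta0 by (rule sq_summable_if_sums_le)
        (intro order_trans[OF sum_mono sum_sq_le_l2_sqnorm[OF k]]; simp)
    then show ?thesis by (simp add: l2_iff wiener_hopf_delta0)
  qed
  obtain g where g: "g \<in> l2 pos_cone" and g_fix: "\<And>\<xi>. g \<xi> = wiener_hopf k delta0 \<xi> + toeplitz ?r g \<xi>"
  proof (rule neumann_fixed_point[OF _ _ _ c y])
    show "toeplitz ?r x \<in> l2 pos_cone" if "x \<in> l2 pos_cone" for x using T_r[OF that] by blast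
    show "toeplitz ?r (\<lambda>\<xi>. x \<xi> - y \<xi>) = (\<lambda>\<xi>. toeplitz ?r x \<xi> - toeplitz ?r y \<xi>)"
      if "x \<in> l2 pos_cone" "y \<in> l2 pos_cone" for x y
      using toeplitz_diff[OF r] that by (simp add: l2_iff)
    show "l2_sqnorm (toeplitz ?r x) \<le> c\<^sup>2 * l2_sqnorm x" if "x \<in> l2 pos_cone" for x
      using T_r[OF that] by blast
  qed (rule that)
  have "toeplitz \<psi> g = delta0"
  proof (rule inj_onD[OF inj])
    show "wiener_hopf k (toeplitz \<psi> g) = wiener_hopf k delta0"
      using wiener_hopf_toeplitz[OF chk kc' ae k \<psi> g] g_fix by (simp add: fun_eq_iff)
    obtain C where C: "\<And>x. x \<in> space \<mu> \<Longrightarrow> cmod (\<psi> x) \<le> C"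
      using bdd_meas_bound[OF \<psi>(1)] by blast
    show "toeplitz \<psi> g \<in> l2 pos_cone" using toeplitz_bounded[OF \<psi>(1) C, of g] g by (simp add: l2_iff)
    have "sq_summable delta0"
      by (rule l2_sqnorm_finite_support[THEN conjunct1, of "{0}"]) (simp_all add: delta0_def)
    then show "delta0 \<in> l2 pos_cone" by (simp add: l2_iff delta0_def pos_cone_def)
  qed
  with g show ?thesis by (rule that)
qed

lemma L2_sqnorm_mult_trig_poly_minus_one:
  assumes \<psi>: "bdd_meas \<psi>" "analytic \<psi>" and C: "\<And>x. x \<in> space \<mu> \<Longrightarrow> cmod (\<psi> x) \<le> C"
    and g: "g \<in> l2 pos_cone" "toeplitz \<psi> g = delta0" and F: "finite F"
  shows "L2_sqnorm (\<lambda>\<gamma>. \<psi> \<gamma> * trig_poly F g \<gamma> - 1) \<le> C\<^sup>2 * l2_sqnorm (\<lambda>\<eta>. g \<eta> - restrict_seq F g \<eta>)"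
proof -
  let ?x = "restrict_seq F g" and ?D = "\<lambda>\<gamma>. \<psi> \<gamma> * trig_poly F g \<gamma> - 1"
  have g_sq: "sq_summable g" and x: "sq_summable ?x"
    using g(1) l2_restrict_seq[OF g(1) F] by (simp_all add: l2_iff)
  have D: "bdd_meas ?D" by (intro bdd_meas_diff bdd_meas_mult \<psi>(1) bdd_meas_trig_poly bdd_meas_const)
  have "fourier \<mu> ?D \<xi> = toeplitz \<psi> ?x \<xi> - toeplitz \<psi> g \<xi>" for \<xi>
  proof -
    have "fourier \<mu> ?D \<xi> = fourier \<mu> (\<lambda>\<gamma>. \<psi> \<gamma> * trig_poly F g \<gamma>) \<xi> - fourier \<mu> (\<lambda>_. 1) \<xi>"
      by (rule fourier_diff[OF bdd_meas_mult[OF \<psi>(1) bdd_meas_trig_poly] bdd_meas_const])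
    then show ?thesis by (simp add: fourier_analytic_mult_trig_poly[OF \<psi> g(1) F] fourier_one g(2))
  qed
  then have "fourier \<mu> ?D = toeplitz \<psi> (\<lambda>\<eta>. ?x \<eta> - g \<eta>)"
    by (simp add: fun_eq_iff toeplitz_diff[OF \<psi>(1) x g_sq])
  then have "L2_sqnorm ?D \<le> l2_sqnorm (toeplitz \<psi> (\<lambda>\<eta>. ?x \<eta> - g \<eta>))"
    using parseval_le[OF D] by simp
  also have "\<dots> \<le> C\<^sup>2 * l2_sqnorm (\<lambda>\<eta>. ?x \<eta> - g \<eta>)"
    using toeplitz_bounded[OF \<psi>(1) C] sq_summable_diff[OF x g_sq] by blast
  finally show ?thesis using l2_sqnorm_diff_commute[of ?x g] by simp
qed

lemma analytic_inverse_if_toeplitz_delta0: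
  assumes \<psi>: "bdd_meas \<psi>" "analytic \<psi>"
    and low: "0 < b" "\<And>x. x \<in> space \<mu> \<Longrightarrow> b \<le> cmod (\<psi> x)"
    and g: "g \<in> l2 pos_cone" "toeplitz \<psi> g = delta0"
  shows "analytic (\<lambda>x. 1 / \<psi> x)"
  unfolding analytic_def
proof (intro allI impI)
  fix \<zeta> :: 'x assume \<zeta>: "\<zeta> \<notin> pos_cone"
  let ?h = "\<lambda>x. 1 / \<psi> x"
  have h_bound: "cmod (?h x) \<le> 1 / b" if "x \<in> space \<mu>" for x
    using low that by (simp add: norm_divide frac_le)
  have h: "bdd_meas ?h"
    unfolding bdd_meas_def using bdd_meas_measurable[OF \<psi>(1)] h_bound by auto
  obtain C where C: "0 \<le> C" "\<And>x. x \<in> space \<mu> \<Longrightarrow> cmod (\<psi> x) \<le> C" using bdd_meas_bound[OF \<psi>(1)] by blast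
  have g_sq: "sq_summable g" using g(1) by (simp add: l2_iff)
  have "cmod (fourier \<mu> ?h \<zeta>) \<le> C / b * sqrt e" if "e > 0" for e
  proof -
    obtain F where F: "finite F" "sq_summable (\<lambda>\<xi>. g \<xi> - restrict_seq F g \<xi>)"
      "l2_sqnorm (\<lambda>\<xi>. g \<xi> - restrict_seq F g \<xi>) < e"
      by (rule restrict_seq_tail[OF g_sq \<open>e > 0\<close>])
    let ?x = "restrict_seq F g" and ?p = "trig_poly F g"
    define D where "D \<gamma> = \<psi> \<gamma> * ?p \<gamma> - 1" for \<gamma>
    have D: "bdd_meas D" unfolding D_def by (intro bdd_meas_diff bdd_meas_mult \<psi>(1) bdd_meas_trig_poly bdd_meas_const)
    have "L2_sqnorm D \<le> C\<^sup>2 * l2_sqnorm (\<lambda>\<eta>. g \<eta> - ?x \<eta>)"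
      unfolding D_def by (rule L2_sqnorm_mult_trig_poly_minus_one[OF \<psi> C(2) g F(1)])
    also have "\<dots> \<le> C\<^sup>2 * e" using F(3) by (simp add: mult_left_mono)
    finally have D_small: "L2_sqnorm D \<le> C\<^sup>2 * e" .
    have "L2_sqnorm (\<lambda>x. ?h x - ?p x) \<le> L2_sqnorm (\<lambda>x. complex_of_real (1 / b) * D x)"
    proof (rule L2_sqnorm_mono)
      show "bdd_meas (\<lambda>x. ?h x - ?p x)" by (intro bdd_meas_diff h bdd_meas_trig_poly)
      show "bdd_meas (\<lambda>x. complex_of_real (1 / b) * D x)" by (intro bdd_meas_mult bdd_meas_const D)
      fix x assume x: "x \<in> space \<mu>"
      then have "\<psi> x \<noteq> 0" using low(1) low(2)[OF x] by auto
      then have "cmod (?h x - ?p x) = cmod (?h x) * cmod (D x)"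
        unfolding D_def by (simp add: field_simps norm_mult norm_divide norm_minus_commute)
      also have "\<dots> \<le> 1 / b * cmod (D x)" by (rule mult_right_mono[OF h_bound[OF x]]) simp
      finally show "cmod (?h x - ?p x) \<le> cmod (complex_of_real (1 / b) * D x)"
        using low(1) by (simp add: norm_mult norm_divide)
    qed
    also have "\<dots> = (1 / b)\<^sup>2 * L2_sqnorm D"
      using low(1) by (simp only: L2_sqnorm_scale norm_of_real) simp
    also have "\<dots> \<le> (1 / b)\<^sup>2 * (C\<^sup>2 * e)" using D_small by (rule mult_left_mono) simp
    finally have close: "L2_sqnorm (\<lambda>x. ?h x - ?p x) \<le> (C / b)\<^sup>2 * e" by (simp add: power_divide)
    have "fourier \<mu> ?h \<zeta> = fourier \<mu> (\<lambda>x. ?h x - ?p x) \<zeta>"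
      using fourier_diff[OF h bdd_meas_trig_poly] fourier_trig_poly[OF F(1)] g(1) \<zeta>
      by (simp add: l2_iff)
    then have "cmod (fourier \<mu> ?h \<zeta>) \<le> sqrt (L2_sqnorm (\<lambda>x. ?h x - ?p x))"
      using norm_fourier_le[OF bdd_meas_diff[OF h bdd_meas_trig_poly]] by simp
    also have "\<dots> \<le> sqrt ((C / b)\<^sup>2 * e)" by (rule real_sqrt_le_mono[OF close])
    also have "\<dots> = C / b * sqrt e" using C(1) low(1) by (simp add: real_sqrt_mult)
    finally show ?thesis .
  qed
  moreover have "0 \<le> C / b" using C(1) low(1) by simp
  ultimately show "fourier \<mu> ?h \<zeta> = 0" by (intro eq_0_if_norm_le_sqrt[of "C / b"]) auto
qed

lemma analytic_inverse:
  assumes chk: "is_check \<mu> k kc" and kc': "bdd_meas kc'" and ae: "AE x in \<mu>. kc x = kc' x"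
    and unimodular: "\<And>x. x \<in> space \<mu> \<Longrightarrow> cmod (kc' x) = 1"
    and k: "sq_summable k" and inj: "inj_on (wiener_hopf k) (l2 pos_cone)"
    and \<psi>: "bdd_meas \<psi>" "analytic \<psi>"
    and c: "0 \<le> c" "c < 1" and close: "\<And>x. x \<in> space \<mu> \<Longrightarrow> cmod (kc' x - cnj (\<psi> x)) \<le> c"
  shows "analytic (\<lambda>x. 1 / \<psi> x)"
proof -
  have "cmod (1 - kc' x * \<psi> x) \<le> c" if "x \<in> space \<mu>" for x
    using close[OF that] norm_one_minus_mult_unimodular[OF unimodular[OF that]] by simp
  then obtain g where "g \<in> l2 pos_cone" "toeplitz \<psi> g = delta0"
    using toeplitz_delta0_solvable[OF chk kc' ae k inj \<psi> c] by blast
  moreover have "1 - c \<le> cmod (\<psi> x)" if "x \<in> space \<mu>" for x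
    using norm_ge_one_minus_dist_unimodular[OF unimodular[OF that], of "\<psi> x"] close[OF that] by linarith
  ultimately show ?thesis
    using analytic_inverse_if_toeplitz_delta0[OF \<psi>, of "1 - c"] c by auto
qed

end

context haar_space
begin

lemma Hinf_iff: "f \<in> Hinf \<mu> \<longleftrightarrow> ess_bounded \<mu> f \<and> analytic f"
  unfolding Hinf_def analytic_def by auto

lemma everywhere_representatives:
  assumes kc: "ess_bounded \<mu> kc" "AE x in \<mu>. cmod (kc x) = 1"
    and \<psi>: "\<psi> \<in> Hinf \<mu>" and c: "c < 1" "AE x in \<mu>. cmod (kc x - cnj (\<psi> x)) \<le> c"
  obtains kc' \<psi>' c' where "bdd_meas kc'" "\<And>x. cmod (kc' x) = 1" "AE x in \<mu>. kc x = kc' x"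
    "bdd_meas \<psi>'" "analytic \<psi>'" "AE x in \<mu>. \<psi> x = \<psi>' x"
    "0 \<le> c'" "c' < 1" "\<And>x. cmod (kc' x - cnj (\<psi>' x)) \<le> c'"
proof -
  define c' where "c' = max c 0"
  obtain C where C: "AE x in \<mu>. cmod (\<psi> x) \<le> C"
    using \<psi> unfolding Hinf_def ess_bounded_def by blast
  have meas: "kc \<in> borel_measurable \<mu>" "\<psi> \<in> borel_measurable \<mu>"
    using kc(1) \<psi> unfolding Hinf_def ess_bounded_def by auto
  define kc' where "kc' x = (if cmod (kc x) = 1 then kc x else 1)" for x
  define \<psi>' where "\<psi>' x = (if cmod (\<psi> x) \<le> C \<and> cmod (kc' x - cnj (\<psi> x)) \<le> c' then \<psi> x else cnj (kc' x))"
    for x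
  have kc'_norm: "cmod (kc' x) = 1" for x unfolding kc'_def by auto
  have kc'_meas: "kc' \<in> borel_measurable \<mu>" unfolding kc'_def using meas by measurable
  have \<psi>'_meas: "\<psi>' \<in> borel_measurable \<mu>" unfolding \<psi>'_def using meas kc'_meas by measurable
  have kc_ae: "AE x in \<mu>. kc x = kc' x" using kc(2) unfolding kc'_def by eventually_elim auto
  have \<psi>_ae: "AE x in \<mu>. \<psi> x = \<psi>' x"
    using C c(2) kc_ae unfolding \<psi>'_def c'_def by eventually_elim auto
  show ?thesis
  proof
    show "bdd_meas kc'" unfolding bdd_meas_def using kc'_meas kc'_norm by auto
    show "bdd_meas \<psi>'"
      unfolding bdd_meas_def using \<psi>'_meas kc'_norm by (auto intro!: exI[of _ "max C 1"] simp: \<psi>'_def)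
    have "fourier \<mu> \<psi>' \<zeta> = fourier \<mu> \<psi> \<zeta>" for \<zeta>
      unfolding fourier_def using \<psi>_ae meas \<psi>'_meas by (intro integral_cong_AE) (auto elim: AE_mp)
    then show "analytic \<psi>'" using \<psi> by (simp add: Hinf_iff analytic_def)
    show "cmod (kc' x - cnj (\<psi>' x)) \<le> c'" for x unfolding \<psi>'_def c'_def by auto
  qed (use kc'_norm kc_ae \<psi>_ae c(1) in \<open>auto simp: c'_def\<close>)
qed

end

theorem mainTheorem9:
  fixes k :: "'x::linordered_ab_group_add \<Rightarrow> complex"
    and \<mu> :: "('x \<Rightarrow> complex) measure"
    and kc \<psi> :: "('x \<Rightarrow> complex) \<Rightarrow> complex"
  assumes "haar \<mu>"
    and "k \<in> l2 UNIV"
    and "is_check \<mu> k kc"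
    and "ess_bounded \<mu> kc"
    and "AE x in \<mu>. cmod (kc x) = 1"
    and "bij_betw (wiener_hopf k) (l2 pos_cone) (l2 pos_cone)"
    and "\<psi> \<in> Hinf \<mu>"
    and "\<exists>c<1. AE x in \<mu>. cmod (kc x - cnj (\<psi> x)) \<le> c"
  shows "\<exists>\<phi> \<in> Hinf \<mu>. AE x in \<mu>. \<psi> x * \<phi> x = 1"
proof -
  interpret haar_space \<mu> by unfold_locales (rule assms(1))
  obtain c where c: "c < 1" "AE x in \<mu>. cmod (kc x - cnj (\<psi> x)) \<le> c" using assms(8) by blast
  obtain kc' \<psi>' c' where kc': "bdd_meas kc'" "\<And>x. cmod (kc' x) = 1" "AE x in \<mu>. kc x = kc' x"
    and \<psi>': "bdd_meas \<psi>'" "analytic \<psi>'" "AE x in \<mu>. \<psi> x = \<psi>' x"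
    and c': "0 \<le> c'" "c' < 1" "\<And>x. cmod (kc' x - cnj (\<psi>' x)) \<le> c'"
    using everywhere_representatives[OF assms(4,5,7) c] by blast
  have "analytic (\<lambda>x. 1 / \<psi>' x)"
    using analytic_inverse[OF assms(3) kc'(1,3) kc'(2) _ bij_betw_imp_inj_on[OF assms(6)] \<psi>'(1,2) c'(1,2) c'(3)]
      assms(2) by (simp add: l2_iff)
  moreover have low: "1 - c' \<le> cmod (\<psi>' x)" for x
    using norm_ge_one_minus_dist_unimodular[OF kc'(2), of x "\<psi>' x"] c'(3)[of x] by linarith
  then have "ess_bounded \<mu> (\<lambda>x. 1 / \<psi>' x)"
    unfolding ess_bounded_def using bdd_meas_measurable[OF \<psi>'(1)] c'(2)
    by (auto intro!: exI[of _ "1 / (1 - c')"] simp: norm_divide frac_le)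
  moreover have nonzero: "\<psi>' x \<noteq> 0" for x using low[of x] c'(2) by auto
  have "AE x in \<mu>. \<psi> x * (1 / \<psi>' x) = 1" using \<psi>'(3) by eventually_elim (simp add: nonzero)
  ultimately show ?thesis by (intro bexI[of _ "\<lambda>x. 1 / \<psi>' x"]) (simp_all add: Hinf_iff)
qed

end
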